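(* Let $B$ be a densely defined closed symmetric completely non-selfadjoint operator on a Hilbert space $\mathcal{H}$ with finite deficiency indices $(n,n)$, let $\Pi=(\mathbb{C}^n,\Gamma_1,\Gamma_2)$ be a boundary triplet for $B^*$ with Weyl function $M$, and let $\Omega$ be the matrix-valued measure associated with $M$. For $D\in\mathbb{H}_n$ let $A_D$ be the self-adjoint extension of $B$ with domain $\operatorname{Ker}(\Gamma_2-D\Gamma_1)$. With $T(x):=\int_{\mathbb{R}}\frac{d\Omega(y)}{(x-y)^2}$, $$\{x\in\mathbb{R}:T(x)\in\mathbb{C}^{n\times n}\}=\bigcup_{D\in\mathbb{H}_n}\sigma_p^{max}(A_D).$$
   Context: A boundary triplet for $B^*$ is $(\mathbb{C}^n,\Gamma_1,\Gamma_2)$ with linear $\Gamma_i:D(B^* )\to\mathbb{C}^n$ satisfying $\langle B^*x,y\rangle-\langle x,B^*y\rangle=\langle\Gamma_2x,\Gamma_1y\rangle-\langle\Gamma_1x,\Gamma_2y\rangle$ for $x,y\in D(B^* )$ and with $x\mapsto(\Gamma_1x,\Gamma_2x)$ surjective onto $\mathbb{C}^n\oplus\mathbb{C}^n$. $A_1$ is the restriction of $B^*$ to $\operatorname{Ker}\Gamma_1$. The Weyl function $M:\varrho(A_1)\to\mathbb{C}^{n\times n}$ is defined by $\Gamma_2f_z=M(z)\Gamma_1f_z$ for all $f_z\in\operatorname{Ker}(B^*-zI)$. $\mathbb{H}_n$ is the set of self-adjoint $n\times n$ complex matrices. Completely non-selfadjoint: no reducing subspace on which the part of $B$ is self-adjoint.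 $\sigma_p^{max}(A)$ is the set of eigenvalues $z$ of $A$ with $\dim\operatorname{Ker}(A-zI)=n$. The matrix-valued measure associated with a Nevanlinna–Herglotz matrix $F$ is the measure $\Omega$ (positive-semidefinite-matrix-valued on bounded Borel sets, countably additive) in the representation $F(z)=C+Kz+\int_{\mathbb{R}}\big(\frac{1}{y-z}-\frac{y}{1+y^2}\big)d\Omega(y)$ with $C=C^*$, $K\ge0$. $T(x)\in\mathbb{C}^{n\times n}$ means $\int\frac{1}{(x-y)^2}d\langle c,\Omega(y)c\rangle_{\mathbb{C}^n}<\infty$ for every $c\in\mathbb{C}^n$. *)

theory Defs
  imports "HOL-Analysis.Analysis"
begin

text \<open>The inner product is linear in the first and conjugate-linear in the second argument.\<close>

definition hnorm :: "('h \<Rightarrow> 'h \<Rightarrow> complex) \<Rightarrow> 'h \<Rightarrow> real" where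
  "hnorm ip x = sqrt (Re (ip x x))"

definition hconv :: "('h::ab_group_add \<Rightarrow> 'h \<Rightarrow> complex) \<Rightarrow> (nat \<Rightarrow> 'h) \<Rightarrow> 'h \<Rightarrow> bool" where
  "hconv ip X x \<longleftrightarrow> (\<lambda>k. hnorm ip (X k - x)) \<longlonglongrightarrow> 0"

definition hilbert_space :: "(complex \<Rightarrow> 'h::ab_group_add \<Rightarrow> 'h) \<Rightarrow> ('h \<Rightarrow> 'h \<Rightarrow> complex) \<Rightarrow> bool" where
  "hilbert_space sm ip \<longleftrightarrow>
     (\<forall>a b x. sm a (sm b x) = sm (a * b) x) \<and> (\<forall>x. sm 1 x = x) \<and>
     (\<forall>a x y. sm a (x + y) = sm a x + sm a y) \<and> (\<forall>a b x. sm (a + b) x = sm a x + sm b x) \<and>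
     (\<forall>x y z. ip (x + y) z = ip x z + ip y z) \<and> (\<forall>a x y. ip (sm a x) y = a * ip x y) \<and>
     (\<forall>x y. ip y x = cnj (ip x y)) \<and> (\<forall>x. Re (ip x x) \<ge> 0) \<and> (\<forall>x. ip x x = 0 \<longrightarrow> x = 0) \<and>
     (\<forall>X. (\<forall>e>0. \<exists>N. \<forall>m\<ge>N. \<forall>k\<ge>N. hnorm ip (X m - X k) < e) \<longrightarrow> (\<exists>x. hconv ip X x))"

definition subspace_h :: "(complex \<Rightarrow> 'h::ab_group_add \<Rightarrow> 'h) \<Rightarrow> 'h set \<Rightarrow> bool" where
  "subspace_h sm S \<longleftrightarrow> 0 \<in> S \<and> (\<forall>x\<in>S. \<forall>y\<in>S. x + y \<in> S) \<and> (\<forall>a. \<forall>x\<in>S. sm a x \<in> S)"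

definition closed_subspace_h :: "(complex \<Rightarrow> 'h::ab_group_add \<Rightarrow> 'h) \<Rightarrow> ('h \<Rightarrow> 'h \<Rightarrow> complex) \<Rightarrow> 'h set \<Rightarrow> bool" where
  "closed_subspace_h sm ip S \<longleftrightarrow> subspace_h sm S \<and> (\<forall>X x. (\<forall>k. X k \<in> S) \<and> hconv ip X x \<longrightarrow> x \<in> S)"

definition hdim :: "(complex \<Rightarrow> 'h::ab_group_add \<Rightarrow> 'h) \<Rightarrow> 'h set \<Rightarrow> nat \<Rightarrow> bool" where
  "hdim sm S n \<longleftrightarrow> (\<exists>v::nat \<Rightarrow> 'h.
      (\<forall>c. (\<Sum>i<n. sm (c i) (v i)) = 0 \<longrightarrow> (\<forall>i<n. c i = 0)) \<and>
      S = {(\<Sum>i<n. sm (c i) (v i)) | c. True})"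

definition dense_in :: "('h::ab_group_add \<Rightarrow> 'h \<Rightarrow> complex) \<Rightarrow> 'h set \<Rightarrow> 'h set \<Rightarrow> bool" where
  "dense_in ip H0 S \<longleftrightarrow> (\<forall>x\<in>H0. \<forall>e>0. \<exists>y\<in>S. hnorm ip (x - y) < e)"

definition lin_op :: "(complex \<Rightarrow> 'h::ab_group_add \<Rightarrow> 'h) \<Rightarrow> 'h set \<Rightarrow> ('h \<Rightarrow> 'h) \<Rightarrow> bool" where
  "lin_op sm Dom f \<longleftrightarrow> subspace_h sm Dom \<and>
     (\<forall>x\<in>Dom. \<forall>y\<in>Dom. \<forall>a b. f (sm a x + sm b y) = sm a (f x) + sm b (f y))"

definition closed_op :: "('h::ab_group_add \<Rightarrow> 'h \<Rightarrow> complex) \<Rightarrow> 'h set \<Rightarrow> ('h \<Rightarrow> 'h) \<Rightarrow> bool" where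
  "closed_op ip Dom f \<longleftrightarrow> (\<forall>X x y. (\<forall>k. X k \<in> Dom) \<and> hconv ip X x \<and> hconv ip (\<lambda>k. f (X k)) y
       \<longrightarrow> x \<in> Dom \<and> f x = y)"

definition symmetric_op :: "('h \<Rightarrow> 'h \<Rightarrow> complex) \<Rightarrow> 'h set \<Rightarrow> ('h \<Rightarrow> 'h) \<Rightarrow> bool" where
  "symmetric_op ip Dom f \<longleftrightarrow> (\<forall>x\<in>Dom. \<forall>y\<in>Dom. ip (f x) y = ip x (f y))"

definition adj_dom :: "('h \<Rightarrow> 'h \<Rightarrow> complex) \<Rightarrow> 'h set \<Rightarrow> ('h \<Rightarrow> 'h) \<Rightarrow> 'h set" where
  "adj_dom ip Dom f = {y. \<exists>z. \<forall>x\<in>Dom. ip (f x) y = ip x z}"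

definition adj_op :: "('h \<Rightarrow> 'h \<Rightarrow> complex) \<Rightarrow> 'h set \<Rightarrow> ('h \<Rightarrow> 'h) \<Rightarrow> 'h \<Rightarrow> 'h" where
  "adj_op ip Dom f y = (SOME z. \<forall>x\<in>Dom. ip (f x) y = ip x z)"

text \<open>Self-adjointness of an operator \<open>(Dom, g)\<close> acting in the (closed) subspace \<open>H0\<close>
  regarded as a Hilbert space: it is densely defined in \<open>H0\<close> and equals its adjoint
  (taken in \<open>H0\<close>), i.e. the adjoint domain is \<open>Dom\<close> and the adjoint acts as \<open>g\<close>.\<close>
definition selfadj_in :: "('h::ab_group_add \<Rightarrow> 'h \<Rightarrow> complex) \<Rightarrow> 'h set \<Rightarrow> 'h set \<Rightarrow> ('h \<Rightarrow> 'h) \<Rightarrow> bool" where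
  "selfadj_in ip H0 Dom g \<longleftrightarrow> Dom \<subseteq> H0 \<and> (\<forall>x\<in>Dom. g x \<in> H0) \<and> dense_in ip H0 Dom \<and>
     {y\<in>H0. \<exists>z\<in>H0. \<forall>x\<in>Dom. ip (g x) y = ip x z} = Dom \<and>
     (\<forall>y\<in>Dom. \<forall>x\<in>Dom. ip (g x) y = ip x (g y))"

definition orth_to :: "('h \<Rightarrow> 'h \<Rightarrow> complex) \<Rightarrow> 'h \<Rightarrow> 'h set \<Rightarrow> bool" where
  "orth_to ip v L \<longleftrightarrow> (\<forall>u\<in>L. ip v u = 0)"

text \<open>\<open>L\<close> reduces \<open>(Dom, f)\<close>: for \<open>x \<in> Dom\<close> with orthogonal decomposition \<open>x = Px + (x - Px)\<close>
  we have \<open>Px \<in> Dom\<close> and \<open>f (Px) = P (f x)\<close>, i.e. \<open>f Px \<in> L\<close>, \<open>f (x - Px) \<perp> L\<close>.\<close>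
definition reducing :: "('h::ab_group_add \<Rightarrow> 'h \<Rightarrow> complex) \<Rightarrow> 'h set \<Rightarrow> ('h \<Rightarrow> 'h) \<Rightarrow> 'h set \<Rightarrow> bool" where
  "reducing ip Dom f L \<longleftrightarrow> (\<forall>x\<in>Dom. \<exists>u v. x = u + v \<and> u \<in> L \<and> orth_to ip v L \<and>
       u \<in> Dom \<and> f u \<in> L \<and> orth_to ip (f v) L)"

definition completely_nonselfadjoint ::
  "(complex \<Rightarrow> 'h::ab_group_add \<Rightarrow> 'h) \<Rightarrow> ('h \<Rightarrow> 'h \<Rightarrow> complex) \<Rightarrow> 'h set \<Rightarrow> ('h \<Rightarrow> 'h) \<Rightarrow> bool" where
  "completely_nonselfadjoint sm ip Dom f \<longleftrightarrow>
     \<not> (\<exists>L. closed_subspace_h sm ip L \<and> L \<noteq> {0} \<and> reducing ip Dom f L \<and> selfadj_in ip L (Dom \<inter> L) f)"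

definition eigsp :: "(complex \<Rightarrow> 'h \<Rightarrow> 'h) \<Rightarrow> 'h set \<Rightarrow> ('h \<Rightarrow> 'h) \<Rightarrow> complex \<Rightarrow> 'h set" where
  "eigsp sm Dom g z = {x\<in>Dom. g x = sm z x}"

definition resolvent_set ::
  "(complex \<Rightarrow> 'h::ab_group_add \<Rightarrow> 'h) \<Rightarrow> ('h \<Rightarrow> 'h \<Rightarrow> complex) \<Rightarrow> 'h set \<Rightarrow> ('h \<Rightarrow> 'h) \<Rightarrow> complex set" where
  "resolvent_set sm ip Dom g = {z. (\<forall>y. \<exists>!x. x \<in> Dom \<and> g x - sm z x = y) \<and>
       (\<exists>C. \<forall>x\<in>Dom. hnorm ip x \<le> C * hnorm ip (g x - sm z x))}"

definition sigma_p_max :: "(complex \<Rightarrow> 'h::ab_group_add \<Rightarrow> 'h) \<Rightarrow> 'h set \<Rightarrow> ('h \<Rightarrow> 'h) \<Rightarrow> nat \<Rightarrow> complex set" where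
  "sigma_p_max sm Dom g n = {z. eigsp sm Dom g z \<noteq> {0} \<and> hdim sm (eigsp sm Dom g z) n}"

definition cip :: "complex^'n \<Rightarrow> complex^'n \<Rightarrow> complex" where
  "cip a b = (\<Sum>i\<in>UNIV. a$i * cnj (b$i))"

definition boundary_triplet ::
  "(complex \<Rightarrow> 'h::ab_group_add \<Rightarrow> 'h) \<Rightarrow> ('h \<Rightarrow> 'h \<Rightarrow> complex) \<Rightarrow> 'h set \<Rightarrow> ('h \<Rightarrow> 'h) \<Rightarrow>
   ('h \<Rightarrow> complex^'n::finite) \<Rightarrow> ('h \<Rightarrow> complex^'n) \<Rightarrow> bool" where
  "boundary_triplet sm ip Dom f G1 G2 \<longleftrightarrow>
     (let Ds = adj_dom ip Dom f; Bs = adj_op ip Dom f in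
      (\<forall>x\<in>Ds. \<forall>y\<in>Ds. \<forall>a b. G1 (sm a x + sm b y) = a *s G1 x + b *s G1 y \<and>
                            G2 (sm a x + sm b y) = a *s G2 x + b *s G2 y) \<and>
      (\<forall>x\<in>Ds. \<forall>y\<in>Ds. ip (Bs x) y - ip x (Bs y) = cip (G2 x) (G1 y) - cip (G1 x) (G2 y)) \<and>
      (\<forall>a b. \<exists>x\<in>Ds. G1 x = a \<and> G2 x = b))"

definition weyl_function ::
  "(complex \<Rightarrow> 'h::ab_group_add \<Rightarrow> 'h) \<Rightarrow> ('h \<Rightarrow> 'h \<Rightarrow> complex) \<Rightarrow> 'h set \<Rightarrow> ('h \<Rightarrow> 'h) \<Rightarrow>
   ('h \<Rightarrow> complex^'n::finite) \<Rightarrow> ('h \<Rightarrow> complex^'n) \<Rightarrow> (complex \<Rightarrow> complex^'n^'n) \<Rightarrow> bool" where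
  "weyl_function sm ip Dom f G1 G2 M \<longleftrightarrow>
     (let Ds = adj_dom ip Dom f; Bs = adj_op ip Dom f; D1 = {x\<in>Ds. G1 x = 0} in
      \<forall>z\<in>resolvent_set sm ip D1 Bs. \<forall>x\<in>eigsp sm Ds Bs z. G2 x = M z *v G1 x)"

definition ext_dom ::
  "('h \<Rightarrow> 'h \<Rightarrow> complex) \<Rightarrow> 'h set \<Rightarrow> ('h \<Rightarrow> 'h) \<Rightarrow> ('h \<Rightarrow> complex^'n::finite) \<Rightarrow> ('h \<Rightarrow> complex^'n) \<Rightarrow>
   complex^'n^'n \<Rightarrow> 'h set" where
  "ext_dom ip Dom f G1 G2 D = {x\<in>adj_dom ip Dom f. G2 x = D *v G1 x}"

definition hermitian_mat :: "complex^'n^'n \<Rightarrow> bool" where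
  "hermitian_mat A \<longleftrightarrow> (\<forall>i j. A$i$j = cnj (A$j$i))"

definition psd_mat :: "complex^'n::finite^'n \<Rightarrow> bool" where
  "psd_mat A \<longleftrightarrow> (\<forall>c. cip (A *v c) c \<in> \<real> \<and> Re (cip (A *v c) c) \<ge> 0)"

text \<open>A matrix-valued measure: positive-semidefinite on bounded Borel sets and countably additive
  there (values on other sets are irrelevant).\<close>
definition matrix_measure :: "(real set \<Rightarrow> complex^'n::finite^'n) \<Rightarrow> bool" where
  "matrix_measure Om \<longleftrightarrow>
     (\<forall>S. S \<in> sets borel \<and> bounded S \<longrightarrow> psd_mat (Om S)) \<and>
     (\<forall>A::nat \<Rightarrow> real set. (\<forall>k. A k \<in> sets borel) \<and> disjoint_family A \<and> bounded (\<Union>k. A k)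
        \<longrightarrow> (\<lambda>k. Om (A k)) sums Om (\<Union>k. A k))"

text \<open>The scalar (positive) measure \<open>\<langle>c, \<Omega>(\<cdot>) c\<rangle>\<close>, extended to unbounded Borel sets by exhaustion.\<close>
definition qmeasure :: "(real set \<Rightarrow> complex^'n::finite^'n) \<Rightarrow> complex^'n \<Rightarrow> real measure" where
  "qmeasure Om c = measure_of UNIV (sets borel)
     (\<lambda>S. SUP k::nat. ennreal (Re (cip (Om (S \<inter> {- real k..real k}) *v c) c)))"

text \<open>Integral of a scalar function against \<open>\<Omega>\<close>, entrywise; the entries of \<open>\<Omega>\<close> are obtained by
  polarisation: \<open>\<Omega>_jk = 1/4 \<Sum>_p i^(-p) \<langle>e_j + i^p e_k, \<Omega> (e_j + i^p e_k)\<rangle>\<close>.\<close>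
definition mint :: "(real set \<Rightarrow> complex^'n::finite^'n) \<Rightarrow> (real \<Rightarrow> complex) \<Rightarrow> complex^'n^'n" where
  "mint Om g = (\<chi> j k. (1/4) * (\<Sum>p<(4::nat). cnj (\<i> ^ p) *
      integral\<^sup>L (qmeasure Om (axis j 1 + (\<i> ^ p) *s axis k 1)) g))"

text \<open>\<open>\<Omega>\<close> is the matrix-valued measure associated with the Nevanlinna function \<open>F\<close>:
  \<open>F(z) = C + K z + \<integral> (1/(y-z) - y/(1+y^2)) d\<Omega>(y)\<close> for non-real \<open>z\<close>, with \<open>C = C^*\<close>, \<open>K \<ge> 0\<close>
  (and \<open>\<integral> d\<Omega>/(1+y^2)\<close> finite, so that the integral converges).\<close>
definition assoc_measure :: "(complex \<Rightarrow> complex^'n::finite^'n) \<Rightarrow> (real set \<Rightarrow> complex^'n^'n) \<Rightarrow> bool" where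
  "assoc_measure F Om \<longleftrightarrow> matrix_measure Om \<and>
     (\<forall>c. integrable (qmeasure Om c) (\<lambda>y. 1 / (1 + y\<^sup>2))) \<and>
     (\<exists>C K. hermitian_mat C \<and> psd_mat K \<and>
        (\<forall>z. Im z \<noteq> 0 \<longrightarrow>
           F z = (\<chi> i j. C$i$j + z * K$i$j +
                   mint Om (\<lambda>y. 1 / (complex_of_real y - z) - complex_of_real (y / (1 + y\<^sup>2))) $i$j)))"

text \<open>\<open>T(x) \<in> \<complex>^{n\<times>n}\<close>: \<open>\<integral> 1/(x-y)^2 d\<langle>c,\<Omega>(y)c\<rangle> < \<infinity>\<close> for all \<open>c\<close> (the integrand is \<open>+\<infinity>\<close> at \<open>y = x\<close>).\<close>
definition T_finite :: "(real set \<Rightarrow> complex^'n::finite^'n) \<Rightarrow> real \<Rightarrow> bool" where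
  "T_finite Om x \<longleftrightarrow> (\<forall>c. (\<integral>\<^sup>+ y. (if y = x then \<infinity> else ennreal (1 / (x - y)\<^sup>2)) \<partial>qmeasure Om c) < \<infinity>)"

end

theory Submission
  imports Defs
begin

(* For non-real z let gamma(z) c be the solution of B* f = z f with Gamma1 f = c (the gamma-field).
   Green's identity and the Nevanlinna representation of M give
     <gamma(z) c, gamma(w) c> = <c, K c> + \<integral> d<c, Omega(y) c> / ((y - z) (y - conj w)),
   so |gamma(x + i e) c|^2 = <c, K c> + \<integral> d<c, Omega(y) c> / ((y - x)^2 + e^2), which increases to
   <c, K c> + <c, T(x) c> as e decreases to 0.

   If T(x) is finite, gamma(x + i e) c is a Cauchy family as e -> 0, and its limit f_x(c) solves
   B* f = x f with Gamma1 f = c. The matrix D with D c = Gamma2 f_x(c) is hermitian by Green's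
   identity, and c |-> f_x(c) maps C^n onto Ker (A_D - x), which therefore has dimension n.

   Conversely, if Ker (A_D - x) has dimension n, then Gamma1 is injective on it: a vector with
   vanishing boundary values lies in Dom B, and B has no eigenvectors because it is completely
   non-selfadjoint. Hence every c is Gamma1 f for some eigenvector f, and
   |gamma(x + i e) c| <= 2 |f| bounds the integrals above, so T(x) is finite. *)

lemma tendsto_zero_squeeze:
  "g \<longlonglongrightarrow> 0 \<Longrightarrow> (\<And>k. 0 \<le> f k \<and> f k \<le> g k) \<Longrightarrow> f \<longlonglongrightarrow> (0::real)"
  by (rule tendsto_sandwich[of "\<lambda>_. 0" _ _ g]) auto

locale hilbert =
  fixes sm :: "complex \<Rightarrow> 'h::ab_group_add \<Rightarrow> 'h" and ip :: "'h \<Rightarrow> 'h \<Rightarrow> complex"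
  assumes hilbert_space: "hilbert_space sm ip"
begin

lemma sm_assoc: "sm a (sm b x) = sm (a * b) x"
  using hilbert_space unfolding hilbert_space_def by metis

lemma sm_one[simp]: "sm 1 x = x"
  using hilbert_space unfolding hilbert_space_def by metis

lemma sm_add_r: "sm a (x + y) = sm a x + sm a y"
  using hilbert_space unfolding hilbert_space_def by metis

lemma sm_add_l: "sm (a + b) x = sm a x + sm b x"
  using hilbert_space unfolding hilbert_space_def by metis

lemma ip_add_l: "ip (x + y) z = ip x z + ip y z"
  using hilbert_space unfolding hilbert_space_def by metis

lemma ip_sm_l: "ip (sm a x) y = a * ip x y"
  using hilbert_space unfolding hilbert_space_def by metis

lemma ip_sym: "ip y x = cnj (ip x y)"
  using hilbert_space unfolding hilbert_space_def by metis

lemma ip_pos: "Re (ip x x) \<ge> 0"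
  using hilbert_space unfolding hilbert_space_def by metis

lemma ip_self_eq_0: "ip x x = 0 \<Longrightarrow> x = 0"
  using hilbert_space unfolding hilbert_space_def by metis

lemma complete:
  assumes "\<And>e. e > 0 \<Longrightarrow> \<exists>N. \<forall>m\<ge>N. \<forall>k\<ge>N. hnorm ip (X m - X k) < e"
  shows "\<exists>x. hconv ip X x"
  using hilbert_space assms unfolding hilbert_space_def by metis

lemma sm_zero_l[simp]: "sm 0 x = 0"
  using sm_add_l[of 0 0 x] by simp

lemma sm_zero_r[simp]: "sm a 0 = 0"
  using sm_add_r[of a 0 0] by simp

lemma sm_minus_r: "sm a (- x) = - sm a x"
  using sm_add_r[of a x "- x"] by (simp add: eq_neg_iff_add_eq_0 add.commute)

lemma sm_minus_l: "sm (- a) x = - sm a x"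
  using sm_add_l[of a "- a" x] by (simp add: eq_neg_iff_add_eq_0 add.commute)

lemma sm_diff_r: "sm a (x - y) = sm a x - sm a y"
  using sm_add_r[of a x "- y"] sm_minus_r[of a y] by simp

lemma sm_diff_l: "sm (a - b) x = sm a x - sm b x"
  using sm_add_l[of a "- b" x] sm_minus_l[of b x] by simp

lemma sm_minus_one: "sm (- 1) x = - x"
  using sm_minus_l[of 1 x] by simp

lemma ip_add_r: "ip x (y + z) = ip x y + ip x z"
proof -
  have "ip x (y + z) = cnj (ip y x) + cnj (ip z x)" using ip_sym[of x "y + z"]
    by (simp add: ip_add_l)
  then show ?thesis using ip_sym[of x y] ip_sym[of x z] by simp
qed

lemma ip_sm_r: "ip x (sm a y) = cnj a * ip x y"
proof -
  have "ip x (sm a y) = cnj a * cnj (ip y x)" using ip_sym[of x "sm a y"] by (simp add: ip_sm_l)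
  then show ?thesis using ip_sym[of x y] by simp
qed

lemma ip_zero_l[simp]: "ip 0 y = 0"
  using ip_sm_l[of 0 0 y] by simp

lemma ip_zero_r[simp]: "ip x 0 = 0"
  using ip_sm_r[of x 0 0] by simp

lemma ip_minus_l: "ip (- x) y = - ip x y"
  using ip_sm_l[of "- 1" x y] sm_minus_one by simp

lemma ip_minus_r: "ip x (- y) = - ip x y"
  using ip_sm_r[of x "- 1" y] sm_minus_one by simp

lemma ip_diff_l: "ip (x - y) z = ip x z - ip y z"
  using ip_add_l[of x "- y" z] ip_minus_l by simp

lemma ip_diff_r: "ip x (y - z) = ip x y - ip x z"
  using ip_add_r[of x y "- z"] ip_minus_r by simp

lemmas ip_simps = ip_add_l ip_add_r ip_sm_l ip_sm_r ip_minus_l ip_minus_r ip_diff_l ip_diff_r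

lemma Im_ip_eq_0_if_ip_commute: "ip x y = ip y x \<Longrightarrow> Im (ip x y) = 0"
  using ip_sym[of y x] by (metis cnj.simps(2) neg_equal_zero)

lemma ip_self_real: "ip x x = complex_of_real (Re (ip x x))"
  using Im_ip_eq_0_if_ip_commute[of x x] by (simp add: complex_eq_iff)

abbreviation nrm :: "'h \<Rightarrow> real" where
  "nrm x \<equiv> hnorm ip x"

lemma nrm_nonneg: "nrm x \<ge> 0"
  using ip_pos[of x] by (simp add: hnorm_def)

lemma nrm_sq: "(nrm x)\<^sup>2 = Re (ip x x)"
  using ip_pos[of x] by (simp add: hnorm_def)

lemma ip_self_nrm: "ip x x = complex_of_real ((nrm x)\<^sup>2)"
  using ip_self_real nrm_sq by simp

lemma nrm_zero[simp]: "nrm 0 = 0"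
  by (simp add: hnorm_def)

lemma nrm_eq_0_iff: "nrm x = 0 \<longleftrightarrow> x = 0"
  using ip_self_nrm[of x] ip_self_eq_0 by auto

lemma nrm_pos_iff: "nrm x > 0 \<longleftrightarrow> x \<noteq> 0"
  using nrm_nonneg[of x] nrm_eq_0_iff[of x] by linarith

lemma cauchy_schwarz: "cmod (ip x y) \<le> nrm x * nrm y"
proof (cases "y = 0")
  case True
  then show ?thesis by (simp add: nrm_nonneg)
next
  case False
  define t where "t = ip x y / ip y y"
  have yy: "ip y y = complex_of_real ((nrm y)\<^sup>2)" by (rule ip_self_nrm)
  have ny: "nrm y > 0" using False nrm_pos_iff by blast
  have yy0: "ip y y \<noteq> 0" using ny yy by simp
  have "ip (x - sm t y) (x - sm t y) = ip x x - cnj t * ip x y - t * ip y x + t * cnj t * ip y y"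
    by (simp add: ip_simps algebra_simps)
  also have "\<dots> = ip x x - cnj (ip x y) * ip x y / ip y y"
  proof -
    have "cnj t = cnj (ip x y) / ip y y" unfolding t_def using yy by simp
    moreover have "ip y x = cnj (ip x y)" by (rule ip_sym)
    ultimately show ?thesis unfolding t_def using yy0 by (simp add: field_simps)
  qed
  also have "cnj (ip x y) * ip x y / ip y y = complex_of_real ((cmod (ip x y))\<^sup>2 / (nrm y)\<^sup>2)"
    using complex_norm_square[of "ip x y"] unfolding yy by (simp add: mult.commute)
  finally have "Re (ip (x - sm t y) (x - sm t y)) = (nrm x)\<^sup>2 - (cmod (ip x y))\<^sup>2 / (nrm y)\<^sup>2"
    using nrm_sq[of x] by simp
  then have "(cmod (ip x y))\<^sup>2 / (nrm y)\<^sup>2 \<le> (nrm x)\<^sup>2"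
    using ip_pos[of "x - sm t y"] by simp
  then have "(cmod (ip x y))\<^sup>2 \<le> (nrm x * nrm y)\<^sup>2"
    using ny by (simp add: field_simps power_mult_distrib)
  then show ?thesis using nrm_nonneg by (meson mult_nonneg_nonneg power2_le_imp_le)
qed

lemma nrm_sm: "nrm (sm a x) = cmod a * nrm x"
proof -
  have "ip (sm a x) (sm a x) = (a * cnj a) * ip x x" by (simp add: ip_sm_l ip_sm_r)
  also have "\<dots> = complex_of_real ((cmod a * nrm x)\<^sup>2)"
    unfolding ip_self_nrm complex_norm_square[symmetric] by (simp add: power_mult_distrib)
  finally have "ip (sm a x) (sm a x) = complex_of_real ((cmod a * nrm x)\<^sup>2)" .
  then have "(nrm (sm a x))\<^sup>2 = (cmod a * nrm x)\<^sup>2" unfolding nrm_sq by simp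
  then show ?thesis using nrm_nonneg by (simp add: power2_eq_iff_nonneg)
qed

lemma nrm_minus: "nrm (- x) = nrm x"
  using nrm_sm[of "- 1" x] sm_minus_one by simp

lemma nrm_diff_commute: "nrm (x - y) = nrm (y - x)"
  using nrm_minus[of "x - y"] by simp

lemma nrm_add_sq: "(nrm (x + y))\<^sup>2 = (nrm x)\<^sup>2 + 2 * Re (ip x y) + (nrm y)\<^sup>2"
  using ip_sym[of x y] unfolding nrm_sq by (simp add: ip_simps)

lemma nrm_diff_sq: "(nrm (x - y))\<^sup>2 = (nrm x)\<^sup>2 - 2 * Re (ip x y) + (nrm y)\<^sup>2"
  using nrm_add_sq[of x "- y"] nrm_minus[of y] by (simp add: ip_simps)

lemma nrm_triangle: "nrm (x + y) \<le> nrm x + nrm y"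
proof -
  have "Re (ip x y) \<le> nrm x * nrm y"
    using cauchy_schwarz[of x y] complex_Re_le_cmod order_trans by blast
  then have "(nrm (x + y))\<^sup>2 \<le> (nrm x + nrm y)\<^sup>2" unfolding nrm_add_sq by (simp add: power2_sum)
  then show ?thesis using nrm_nonneg by (meson add_nonneg_nonneg power2_le_imp_le)
qed

lemma nrm_triangle_diff: "nrm (x - z) \<le> nrm (x - y) + nrm (y - z)"
  using nrm_triangle[of "x - y" "y - z"] by simp

lemma parallelogram: "(nrm (x + y))\<^sup>2 + (nrm (x - y))\<^sup>2 = 2 * (nrm x)\<^sup>2 + 2 * (nrm y)\<^sup>2"
  unfolding nrm_add_sq nrm_diff_sq by simp

lemma sym_lower_bound:
  assumes "Im (ip t f) = 0"
  shows "\<bar>Im z\<bar> * nrm f \<le> nrm (t - sm z f)"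
proof (cases "f = 0")
  case True
  then show ?thesis by (simp add: nrm_nonneg)
next
  case False
  then have nf: "nrm f > 0" using nrm_pos_iff by blast
  have "Im (ip (t - sm z f) f) = - Im z * (nrm f)\<^sup>2"
    using assms by (simp add: ip_simps ip_self_nrm)
  then have "\<bar>Im z\<bar> * (nrm f)\<^sup>2 = \<bar>Im (ip (t - sm z f) f)\<bar>" by (simp add: abs_mult)
  also have "\<dots> \<le> cmod (ip (t - sm z f) f)" by (rule abs_Im_le_cmod)
  also have "\<dots> \<le> nrm (t - sm z f) * nrm f" by (rule cauchy_schwarz)
  finally show ?thesis using nf by (simp add: power2_eq_square)
qed

lemma subspace_sum:
  assumes "subspace_h sm S" and "\<And>i. i \<in> I \<Longrightarrow> v i \<in> S"
  shows "(\<Sum>i\<in>I. sm (a i) (v i)) \<in> S"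
  using assms(2)
  by (induction I rule: infinite_finite_induct) (use assms(1) in \<open>auto simp: subspace_h_def\<close>)

lemma linear_on_sum:
  fixes \<Gamma> :: "'h \<Rightarrow> complex^'n"
  assumes S: "subspace_h sm S"
    and \<Gamma>: "\<And>x y a b. x \<in> S \<Longrightarrow> y \<in> S \<Longrightarrow> \<Gamma> (sm a x + sm b y) = a *s \<Gamma> x + b *s \<Gamma> y"
    and v: "\<And>i. i \<in> I \<Longrightarrow> v i \<in> S"
  shows "\<Gamma> (\<Sum>i\<in>I. sm (a i) (v i)) = (\<Sum>i\<in>I. a i *s \<Gamma> (v i))"
  using v
proof (induction I rule: infinite_finite_induct)
  case (insert i I)
  have "v i \<in> S" "(\<Sum>i\<in>I. sm (a i) (v i)) \<in> S"
    using insert.prems by (auto intro: subspace_sum[OF S])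
  then show ?case
    using \<Gamma>[of "v i" "\<Sum>i\<in>I. sm (a i) (v i)" "a i" 1] insert by simp
qed (use \<Gamma>[of 0 0 0 0] S in \<open>auto simp: subspace_h_def\<close>)

lemma hconv_iff: "hconv ip X x \<longleftrightarrow> (\<lambda>k. nrm (X k - x)) \<longlonglongrightarrow> 0"
  by (simp add: hconv_def)

lemma hconv_const: "hconv ip (\<lambda>k. x) x"
  by (simp add: hconv_iff)

lemma hconv_add: "hconv ip X x \<Longrightarrow> hconv ip Y y \<Longrightarrow> hconv ip (\<lambda>k. X k + Y k) (x + y)"
  unfolding hconv_iff
proof (rule tendsto_zero_squeeze)
  assume "(\<lambda>k. nrm (X k - x)) \<longlonglongrightarrow> 0" "(\<lambda>k. nrm (Y k - y)) \<longlonglongrightarrow> 0"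
  then show "(\<lambda>k. nrm (X k - x) + nrm (Y k - y)) \<longlonglongrightarrow> 0" using tendsto_add by fastforce
  fix k show "0 \<le> nrm (X k + Y k - (x + y)) \<and> nrm (X k + Y k - (x + y))
      \<le> nrm (X k - x) + nrm (Y k - y)"
    using nrm_triangle[of "X k - x" "Y k - y"] nrm_nonneg by (simp add: algebra_simps)
qed

lemma hconv_minus: "hconv ip X x \<Longrightarrow> hconv ip (\<lambda>k. - X k) (- x)"
proof -
  assume "hconv ip X x"
  moreover have "\<And>k. nrm (- X k - - x) = nrm (X k - x)" using nrm_minus
    by (metis minus_diff_eq minus_diff_minus)
  ultimately show ?thesis unfolding hconv_iff by simp
qed

lemma hconv_diff: "hconv ip X x \<Longrightarrow> hconv ip Y y \<Longrightarrow> hconv ip (\<lambda>k. X k - Y k) (x - y)"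
  using hconv_add[of X x "\<lambda>k. - Y k" "- y"] hconv_minus[of Y y] by simp

lemma hconv_sm:
  assumes a: "a \<longlonglongrightarrow> a0" and X: "hconv ip X x"
  shows "hconv ip (\<lambda>k. sm (a k) (X k)) (sm a0 x)"
  unfolding hconv_iff
proof (rule tendsto_zero_squeeze)
  have X0: "(\<lambda>k. nrm (X k - x)) \<longlonglongrightarrow> 0" using X hconv_iff by simp
  have "(\<lambda>k. cmod (a k)) \<longlonglongrightarrow> cmod a0" using a by (rule tendsto_norm)
  then have 1: "(\<lambda>k. cmod (a k) * nrm (X k - x)) \<longlonglongrightarrow> cmod a0 * 0" using X0 by (rule tendsto_mult)
  have "(\<lambda>k. cmod (a k - a0)) \<longlonglongrightarrow> 0" using a by (simp add: tendsto_norm_zero_iff LIM_zero_iff)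
  then have 2: "(\<lambda>k. cmod (a k - a0) * nrm x) \<longlonglongrightarrow> 0 * nrm x" by (rule tendsto_mult) simp
  show "(\<lambda>k. cmod (a k) * nrm (X k - x) + cmod (a k - a0) * nrm x) \<longlonglongrightarrow> 0"
    using tendsto_add[OF 1 2] by simp
  fix k
  have "sm (a k) (X k) - sm a0 x = sm (a k) (X k - x) + sm (a k - a0) x"
    by (simp add: sm_diff_r sm_diff_l)
  then show "0 \<le> nrm (sm (a k) (X k) - sm a0 x) \<and> nrm (sm (a k) (X k) - sm a0 x)
      \<le> cmod (a k) * nrm (X k - x) + cmod (a k - a0) * nrm x"
    using nrm_triangle[of "sm (a k) (X k - x)" "sm (a k - a0) x"] nrm_nonneg by (simp add: nrm_sm)
qed

lemma hconv_sm_const: "hconv ip X x \<Longrightarrow> hconv ip (\<lambda>k. sm a (X k)) (sm a x)"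
  using hconv_sm[of "\<lambda>k. a" a X x] by simp

lemma hconv_unique:
  assumes "hconv ip X x" "hconv ip X y"
  shows "x = y"
proof -
  have "(\<lambda>k. nrm (X k - x) + nrm (X k - y)) \<longlonglongrightarrow> 0"
    using assms unfolding hconv_iff using tendsto_add by fastforce
  moreover have "\<And>k. nrm (x - y) \<le> nrm (X k - x) + nrm (X k - y)"
    using nrm_triangle_diff nrm_diff_commute by metis
  ultimately have "nrm (x - y) \<le> 0"
    by (intro tendsto_lowerbound[of "\<lambda>k. nrm (X k - x) + nrm (X k - y)"])
      (auto intro: always_eventually)
  then show ?thesis using nrm_nonneg nrm_eq_0_iff by (metis antisym eq_iff_diff_eq_0)
qed

lemma hconv_ip:
  assumes X: "hconv ip X x" and Y: "hconv ip Y y"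
  shows "(\<lambda>k. ip (X k) (Y k)) \<longlonglongrightarrow> ip x y"
proof -
  have X0: "(\<lambda>k. nrm (X k - x)) \<longlonglongrightarrow> 0" and Y0: "(\<lambda>k. nrm (Y k - y)) \<longlonglongrightarrow> 0" using X Y hconv_iff by auto
  have "(\<lambda>k. nrm (X k - x) * (nrm (Y k - y) + nrm y) + nrm x * nrm (Y k - y))
      \<longlonglongrightarrow> 0 * (0 + nrm y) + nrm x * 0"
    by (intro tendsto_intros X0 Y0)
  then have L: "(\<lambda>k. nrm (X k - x) * (nrm (Y k - y) + nrm y) + nrm x * nrm (Y k - y)) \<longlonglongrightarrow> 0" by simp
  have "(\<lambda>k. cmod (ip (X k) (Y k) - ip x y)) \<longlonglongrightarrow> 0"
  proof (rule tendsto_zero_squeeze[OF L])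
    fix k
    have e: "ip (X k) (Y k) - ip x y = ip (X k - x) (Y k) + ip x (Y k - y)" by (simp add: ip_simps)
    have "cmod (ip (X k - x) (Y k)) \<le> nrm (X k - x) * nrm (Y k)" by (rule cauchy_schwarz)
    also have "\<dots> \<le> nrm (X k - x) * (nrm (Y k - y) + nrm y)"
      using nrm_triangle[of "Y k - y" y] nrm_nonneg by (simp add: mult_left_mono)
    finally have 1: "cmod (ip (X k - x) (Y k)) \<le> nrm (X k - x) * (nrm (Y k - y) + nrm y)" .
    have 2: "cmod (ip x (Y k - y)) \<le> nrm x * nrm (Y k - y)" by (rule cauchy_schwarz)
    show "0 \<le> cmod (ip (X k) (Y k) - ip x y) \<and> cmod (ip (X k) (Y k) - ip x y)
        \<le> nrm (X k - x) * (nrm (Y k - y) + nrm y) + nrm x * nrm (Y k - y)"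
      unfolding e using norm_triangle_ineq[of "ip (X k - x) (Y k)" "ip x (Y k - y)"] 1 2 by simp
  qed
  then show ?thesis by (simp add: tendsto_norm_zero_iff LIM_zero_iff)
qed

lemma hconv_ip_l: "hconv ip X x \<Longrightarrow> (\<lambda>k. ip (X k) y) \<longlonglongrightarrow> ip x y"
  using hconv_ip[of X x "\<lambda>k. y" y] hconv_const by simp

lemma hconv_ip_r: "hconv ip X x \<Longrightarrow> (\<lambda>k. ip y (X k)) \<longlonglongrightarrow> ip y x"
  using hconv_ip[of "\<lambda>k. y" y X x] hconv_const by simp

lemma hconv_nrm_sq: "hconv ip X x \<Longrightarrow> (\<lambda>k. (nrm (X k))\<^sup>2) \<longlonglongrightarrow> (nrm x)\<^sup>2"
  unfolding nrm_sq by (intro tendsto_Re hconv_ip)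

lemma hconv_Cauchy:
  assumes "hconv ip X x" "e > 0"
  shows "\<exists>N. \<forall>m\<ge>N. \<forall>k\<ge>N. nrm (X m - X k) < e"
proof -
  have "\<forall>\<^sub>F k in sequentially. nrm (X k - x) < e / 2"
    using assms unfolding hconv_iff by (auto dest!: order_tendstoD(2)[where a = "e / 2"])
  then obtain N where N: "\<And>k. k \<ge> N \<Longrightarrow> nrm (X k - x) < e / 2"
    unfolding eventually_sequentially by blast
  show ?thesis
  proof (intro exI allI impI)
    fix m k assume "N \<le> m" "N \<le> k"
    then have "nrm (X m - x) < e / 2" "nrm (x - X k) < e / 2" using N nrm_diff_commute by auto
    then show "nrm (X m - X k) < e" using nrm_triangle_diff[of "X m" "X k" x] by simp
  qed
qed

section \<open>Closed subspaces and orthogonal projection\<close>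

lemma midpoint_estimate:
  fixes a b :: 'h
  assumes "d \<le> nrm (y - sm (1/2) (a + b))" "0 \<le> d"
  shows "(nrm (a - b))\<^sup>2 \<le> 2 * ((nrm (y - a))\<^sup>2 - d\<^sup>2) + 2 * ((nrm (y - b))\<^sup>2 - d\<^sup>2)"
proof -
  have "(y - a) + (y - b) = sm 2 (y - sm (1/2) (a + b))"
    using sm_add_l[of 1 1 y] by (simp add: sm_diff_r sm_assoc algebra_simps)
  then have "2 * d \<le> nrm ((y - a) + (y - b))" using assms(1) by (simp add: nrm_sm)
  then have "(2 * d)\<^sup>2 \<le> (nrm ((y - a) + (y - b)))\<^sup>2" using assms(2) by (intro power_mono) auto
  moreover have "(nrm ((y - a) + (y - b)))\<^sup>2 + (nrm (b - a))\<^sup>2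
      = 2 * (nrm (y - a))\<^sup>2 + 2 * (nrm (y - b))\<^sup>2"
    using parallelogram[of "y - a" "y - b"] by simp
  ultimately show ?thesis using nrm_diff_commute[of a b] by (simp add: power_mult_distrib)
qed

lemma minimizing_sequence_converges:
  assumes mid: "\<And>k m. d \<le> nrm (y - sm (1/2) (r m + r k))" and d0: "0 \<le> d"
    and close: "\<And>k. (nrm (y - r k))\<^sup>2 < d\<^sup>2 + \<delta> k"
    and \<delta>: "\<delta> \<longlonglongrightarrow> 0" "\<And>m N. N \<le> m \<Longrightarrow> \<delta> m \<le> \<delta> N"
  shows "\<exists>r0. hconv ip r r0"
proof (rule complete)
  fix e :: real assume e: "e > 0"
  have r_close: "(nrm (r m - r k))\<^sup>2 \<le> 2 * \<delta> m + 2 * \<delta> k" for m k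
  proof -
    have "(nrm (r m - r k))\<^sup>2 \<le> 2 * ((nrm (y - r m))\<^sup>2 - d\<^sup>2) + 2 * ((nrm (y - r k))\<^sup>2 - d\<^sup>2)"
      using mid d0 by (rule midpoint_estimate)
    then show ?thesis using close[of m] close[of k] by argo
  qed
  have "\<forall>\<^sub>F k in sequentially. \<delta> k < e\<^sup>2 / 4" using \<delta>(1) e by (intro order_tendstoD(2)) auto
  then obtain N where N: "\<delta> N < e\<^sup>2 / 4" by (auto simp: eventually_sequentially)
  show "\<exists>N. \<forall>m\<ge>N. \<forall>k\<ge>N. nrm (r m - r k) < e"
  proof (intro exI allI impI)
    fix m k assume "N \<le> m" "N \<le> k"
    then have "(nrm (r m - r k))\<^sup>2 < e\<^sup>2" using r_close[of m k] \<delta>(2)[of N m] \<delta>(2)[of N k] N by argo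
    then show "nrm (r m - r k) < e" using e nrm_nonneg
      by (meson power_less_imp_less_base less_imp_le)
  qed
qed

lemma nearest_point_exists:
  assumes R: "closed_subspace_h sm ip R"
  shows "\<exists>r0\<in>R. \<forall>r\<in>R. nrm (y - r0) \<le> nrm (y - r)"
proof -
  have R0: "0 \<in> R" and Radd: "\<And>a b. a \<in> R \<Longrightarrow> b \<in> R \<Longrightarrow> a + b \<in> R"
    and Rsm: "\<And>c a. a \<in> R \<Longrightarrow> sm c a \<in> R"
    and Rlim: "\<And>X x. \<forall>k. X k \<in> R \<Longrightarrow> hconv ip X x \<Longrightarrow> x \<in> R"
    using R unfolding closed_subspace_h_def subspace_h_def by blast+
  define d where "d = Inf ((\<lambda>r. nrm (y - r)) ` R)"
  have bdd: "bdd_below ((\<lambda>r. nrm (y - r)) ` R)" using nrm_nonneg by (intro bdd_belowI[of _ 0]) auto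
  have d_le: "\<And>r. r \<in> R \<Longrightarrow> d \<le> nrm (y - r)" unfolding d_def using bdd by (intro cInf_lower) auto
  have d0: "0 \<le> d" unfolding d_def using R0 nrm_nonneg by (intro cInf_greatest) auto
  define \<delta> :: "nat \<Rightarrow> real" where "\<delta> k = 1 / (real k + 1)" for k
  have \<delta>_pos: "\<delta> k > 0" for k unfolding \<delta>_def by simp
  have \<delta>_lim: "\<delta> \<longlonglongrightarrow> 0"
    unfolding \<delta>_def using LIMSEQ_inverse_real_of_nat by (simp add: inverse_eq_divide add.commute)
  have \<delta>_anti: "\<delta> m \<le> \<delta> N" if "N \<le> m" for m N unfolding \<delta>_def using that by (simp add: frac_le)
  have "\<exists>r\<in>R. (nrm (y - r))\<^sup>2 < d\<^sup>2 + \<delta> k" for k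
  proof -
    define e where "e = sqrt (d\<^sup>2 + \<delta> k)"
    have "d < e" unfolding e_def using d0 \<delta>_pos[of k] real_less_rsqrt by simp
    then obtain r where r: "r \<in> R" "nrm (y - r) < e"
      using cInf_lessD[of "(\<lambda>r. nrm (y - r)) ` R"] R0 unfolding d_def by blast
    then have "(nrm (y - r))\<^sup>2 < e\<^sup>2" using nrm_nonneg by (simp add: power_strict_mono)
    then show ?thesis using r \<delta>_pos[of k] unfolding e_def by (auto simp: add_nonneg_nonneg)
  qed
  then obtain r where r: "\<And>k. r k \<in> R" "\<And>k. (nrm (y - r k))\<^sup>2 < d\<^sup>2 + \<delta> k"
    by metis
  obtain r0 where r0: "hconv ip r r0"
    using minimizing_sequence_converges[OF _ d0 r(2) \<delta>_lim \<delta>_anti] d_le Rsm Radd r(1) by blast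
  have "(\<lambda>k. (nrm (y - r k))\<^sup>2) \<longlonglongrightarrow> (nrm (y - r0))\<^sup>2"
    using hconv_nrm_sq hconv_diff[OF hconv_const r0] by blast
  then have "(nrm (y - r0))\<^sup>2 \<le> d\<^sup>2 + 0"
    using r(2) less_imp_le by (intro LIMSEQ_le[OF _ tendsto_add[OF tendsto_const \<delta>_lim]]) auto
  then have "(nrm (y - r0))\<^sup>2 \<le> d\<^sup>2" by simp
  then have "nrm (y - r0) \<le> d" using d0 by (rule power2_le_imp_le)
  moreover have "r0 \<in> R" using Rlim r(1) r0 by blast
  ultimately show ?thesis using d_le by (meson order.trans)
qed

lemma nearest_point_orth:
  assumes R: "subspace_h sm R" and r0: "r0 \<in> R"
    and min: "\<And>r. r \<in> R \<Longrightarrow> nrm (y - r0) \<le> nrm (y - r)" and u: "u \<in> R"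
  shows "ip (y - r0) u = 0"
proof -
  define w where "w = y - r0"
  define p where "p = ip w u"
  define s :: real where "s = 1 / ((nrm u)\<^sup>2 + 1)"
  have u1: "0 < (nrm u)\<^sup>2 + 1" by (simp add: add_nonneg_pos)
  then have s0: "s > 0" and s1: "s * (nrm u)\<^sup>2 < 1" unfolding s_def by (simp_all add: field_simps)
  have "r0 + sm (of_real s * p) u \<in> R" using R r0 u unfolding subspace_h_def by blast
  then have "nrm w \<le> nrm (w - sm (of_real s * p) u)" using min unfolding w_def
    by (simp add: diff_diff_eq)
  then have "(nrm w)\<^sup>2 \<le> (nrm (w - sm (of_real s * p) u))\<^sup>2" using nrm_nonneg
    by (simp add: power_mono)
  also have "\<dots> = (nrm w)\<^sup>2 - 2 * (s * (cmod p)\<^sup>2) + (s * cmod p * nrm u)\<^sup>2"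
    unfolding nrm_diff_sq ip_sm_r p_def[symmetric] using s0
    by (simp add: nrm_sm norm_mult complex_norm_square[symmetric] mult.assoc
        mult.commute[of "cnj p"])
  finally have "2 * (s * (cmod p)\<^sup>2) \<le> (s * (cmod p)\<^sup>2) * (s * (nrm u)\<^sup>2)"
    by (simp add: power2_eq_square algebra_simps)
  also have "\<dots> \<le> (s * (cmod p)\<^sup>2) * 1" using s1 s0 by (intro mult_left_mono) auto
  finally have "(cmod p)\<^sup>2 = 0" using s0 by (simp add: mult_le_0_iff)
  then show ?thesis unfolding p_def w_def by simp
qed

lemma orth_projection_exists:
  assumes "closed_subspace_h sm ip R"
  shows "\<exists>r\<in>R. \<forall>u\<in>R. ip (y - r) u = 0"
  using nearest_point_exists[OF assms] nearest_point_orth assms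
  unfolding closed_subspace_h_def by metis

lemma closed_subspace_full:
  assumes R: "closed_subspace_h sm ip R" and orth: "\<And>w. \<forall>u\<in>R. ip u w = 0 \<Longrightarrow> w = 0"
  shows "y \<in> R"
proof -
  obtain r where r: "r \<in> R" "\<forall>u\<in>R. ip (y - r) u = 0" using orth_projection_exists[OF R] by blast
  then have "\<forall>u\<in>R. ip u (y - r) = 0" using ip_sym by (metis complex_cnj_zero)
  then have "y - r = 0" by (rule orth)
  then show ?thesis using r by simp
qed

lemma lin_op_shift:
  assumes "lin_op sm S T" "x \<in> S" "y \<in> S"
  shows "sm a x + sm b y \<in> S"
    and "T (sm a x + sm b y) - sm z (sm a x + sm b y) = sm a (T x - sm z x) + sm b (T y - sm z y)"
proof -
  have "subspace_h sm S" and T: "T (sm a x + sm b y) = sm a (T x) + sm b (T y)"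
    using assms unfolding lin_op_def by blast+
  then show "sm a x + sm b y \<in> S" using assms(2,3) unfolding subspace_h_def by blast
  show "T (sm a x + sm b y) - sm z (sm a x + sm b y) = sm a (T x - sm z x) + sm b (T y - sm z y)"
    unfolding T by (simp add: sm_diff_r sm_add_r sm_assoc mult.commute algebra_simps)
qed

lemma subspace_range_shift:
  assumes lin: "lin_op sm S T"
  shows "subspace_h sm {T f - sm z f |f. f \<in> S}"
proof -
  let ?R = "{T f - sm z f |f. f \<in> S}"
  have R_lin: "sm a u + sm b v \<in> ?R" if uv: "u \<in> ?R" "v \<in> ?R" for u v a b
  proof -
    obtain x y where xy: "x \<in> S" "y \<in> S" "u = T x - sm z x" "v = T y - sm z y" using uv by blast
    then have "sm a u + sm b v = T (sm a x + sm b y) - sm z (sm a x + sm b y)"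
      using lin_op_shift(2)[OF lin xy(1,2)] by simp
    then show ?thesis using lin_op_shift(1)[OF lin xy(1,2)] by blast
  qed
  have "0 \<in> S" using lin unfolding lin_op_def subspace_h_def by blast
  then have "T 0 - sm z 0 \<in> ?R" by blast
  then have "0 \<in> ?R" using lin_op_shift(2)[OF lin \<open>0 \<in> S\<close> \<open>0 \<in> S\<close>, of 0 0 z] by simp
  then show ?thesis unfolding subspace_h_def using R_lin[of _ _ 1 1] R_lin[of _ _ _ 0] by auto
qed

lemma range_shift_limit:
  assumes lin: "lin_op sm S T" and cl: "closed_op ip S T" and c: "c > 0"
    and bound: "\<And>f. f \<in> S \<Longrightarrow> c * nrm f \<le> nrm (T f - sm z f)"
    and X: "\<forall>k. X k \<in> {T f - sm z f |f. f \<in> S}" and Xc: "hconv ip X x"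
  shows "x \<in> {T f - sm z f |f. f \<in> S}"
proof -
  have "\<forall>k. \<exists>f. f \<in> S \<and> X k = T f - sm z f" using X by blast
  then obtain F where F: "\<And>k. F k \<in> S" "\<And>k. X k = T (F k) - sm z (F k)" by metis
  have "\<exists>f. hconv ip F f"
  proof (rule complete)
    fix e :: real assume e: "e > 0"
    obtain N where N: "\<forall>m\<ge>N. \<forall>k\<ge>N. nrm (X m - X k) < c * e"
      using hconv_Cauchy[OF Xc, of "c * e"] e c by auto
    show "\<exists>N. \<forall>m\<ge>N. \<forall>k\<ge>N. nrm (F m - F k) < e"
    proof (intro exI allI impI)
      fix m k assume "N \<le> m" "N \<le> k"
      have "X m - X k = T (F m - F k) - sm z (F m - F k)"
        unfolding F(2) using lin_op_shift(2)[OF lin F(1)[of m] F(1)[of k], of 1 "- 1"]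
        by (simp add: sm_minus_one)
      moreover have "F m - F k \<in> S"
        using lin_op_shift(1)[OF lin F(1)[of m] F(1)[of k], of 1 "- 1"] by (simp add: sm_minus_one)
      ultimately have "c * nrm (F m - F k) \<le> nrm (X m - X k)" using bound by simp
      also have "\<dots> < c * e" using N \<open>N \<le> m\<close> \<open>N \<le> k\<close> by blast
      finally show "nrm (F m - F k) < e" using c by simp
    qed
  qed
  then obtain f where f: "hconv ip F f" by blast
  have "hconv ip (\<lambda>k. X k + sm z (F k)) (x + sm z f)" using hconv_add[OF Xc hconv_sm_const[OF f]] .
  then have "hconv ip (\<lambda>k. T (F k)) (x + sm z f)" using F by simp
  then have "f \<in> S" "T f = x + sm z f" using cl F f unfolding closed_op_def by blast+
  then show ?thesis by (auto intro!: exI[of _ f])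
qed

lemma closed_subspace_range_shift:
  assumes "lin_op sm S T" "closed_op ip S T" "c > 0" "\<And>f. f \<in> S \<Longrightarrow> c * nrm f \<le> nrm (T f - sm z f)"
  shows "closed_subspace_h sm ip {T f - sm z f |f. f \<in> S}"
  using subspace_range_shift[OF assms(1)] range_shift_limit[OF assms]
  unfolding closed_subspace_h_def by blast

lemma closed_subspace_line:
  assumes "f \<noteq> 0"
  shows "closed_subspace_h sm ip (range (\<lambda>a. sm a f))"
  unfolding closed_subspace_h_def subspace_h_def
proof (intro conjI ballI allI impI)
  have ff: "ip f f \<noteq> 0" using assms ip_self_eq_0 by blast
  show "0 \<in> range (\<lambda>a. sm a f)" using sm_zero_l[of f] by (metis rangeI)
  show "x + y \<in> range (\<lambda>a. sm a f)" if xy: "x \<in> range (\<lambda>a. sm a f)" "y \<in> range (\<lambda>a. sm a f)" for x y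
  proof -
    obtain a b where "x = sm a f" "y = sm b f" using xy by blast
    then show ?thesis using sm_add_l[of a b f] by (metis rangeI)
  qed
  show "sm c x \<in> range (\<lambda>a. sm a f)" if x: "x \<in> range (\<lambda>a. sm a f)" for c x
  proof -
    obtain a where "x = sm a f" using x by blast
    then show ?thesis using sm_assoc[of c a f] by (metis rangeI)
  qed
  fix X y assume h: "(\<forall>k. X k \<in> range (\<lambda>a. sm a f)) \<and> hconv ip X y"
  then have "\<forall>k. \<exists>a. X k = sm a f" by blast
  then obtain a where a: "\<And>k. X k = sm (a k) f" by metis
  have "(\<lambda>k. ip (X k) f) \<longlonglongrightarrow> ip y f" using h hconv_ip_l by blast
  then have "(\<lambda>k. a k * ip f f / ip f f) \<longlonglongrightarrow> ip y f / ip f f"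
    unfolding a ip_sm_l by (rule tendsto_divide[OF _ tendsto_const ff])
  then have "a \<longlonglongrightarrow> ip y f / ip f f" using ff by simp
  then have "hconv ip X (sm (ip y f / ip f f) f)" unfolding a using hconv_sm hconv_const by blast
  then have "y = sm (ip y f / ip f f) f" using h hconv_unique by blast
  then show "y \<in> range (\<lambda>a. sm a f)" by blast
qed

lemma hdim_basis:
  fixes E :: "'h set"
  assumes "hdim sm E CARD('n::finite)"
  obtains w :: "'n::finite \<Rightarrow> 'h"
  where "\<And>j. w j \<in> E" and "\<And>a. (\<Sum>j\<in>UNIV. sm (a$j) (w j)) = 0 \<Longrightarrow> a = 0"
proof -
  let ?n = "CARD('n)"
  obtain v where v_indep: "\<And>c. (\<Sum>i<?n. sm (c i) (v i)) = 0 \<Longrightarrow> \<forall>i<?n. c i = 0"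
    and v_span: "E = {(\<Sum>i<?n. sm (c i) (v i)) | c. True}"
    using assms unfolding hdim_def by blast
  have vE: "v i \<in> E" if i: "i < ?n" for i
  proof -
    have "(\<Sum>j<?n. sm (if j = i then 1 else 0) (v j)) = (\<Sum>j<?n. if j = i then v i else 0)"
      by (intro sum.cong) auto
    then have "v i = (\<Sum>j<?n. sm (if j = i then 1 else 0) (v j))" using i by simp
    then show ?thesis unfolding v_span
      by (intro CollectI exI[of _ "\<lambda>j. if j = i then 1 else 0"]) simp
  qed
  obtain h where h: "bij_betw h {..<?n} (UNIV::'n set)"
    using ex_bij_betw_nat_finite[of "UNIV::'n set"] by (auto simp: atLeast0LessThan)
  define w where "w j = v (inv_into {..<?n} h j)" for j
  have inv_h: "inv_into {..<?n} h j < ?n" "h (inv_into {..<?n} h j) = j" for j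
    using bij_betwE[OF bij_betw_inv_into[OF h]] bij_betw_inv_into_right[OF h] by auto
  have reindex: "(\<Sum>j\<in>UNIV. sm (a$j) (w j)) = (\<Sum>i<?n. sm (a$(h i)) (v i))" for a
  proof -
    have "(\<Sum>j\<in>UNIV. sm (a$j) (w j)) = (\<Sum>i<?n. sm (a$(h i)) (w (h i)))"
      by (rule sum.reindex_bij_betw[OF h, symmetric])
    also have "\<dots> = (\<Sum>i<?n. sm (a$(h i)) (v i))"
      unfolding w_def using h by (intro sum.cong refl) (simp add: bij_betw_inv_into_left)
    finally show ?thesis .
  qed
  have "a = 0" if "(\<Sum>j\<in>UNIV. sm (a$j) (w j)) = 0" for a
  proof -
    have "\<forall>i<?n. a$(h i) = 0" using v_indep[of "\<lambda>i. a$(h i)"] that reindex by simp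
    then have "a$j = 0" for j using inv_h[of j] by metis
    then show "a = 0" by (simp add: vec_eq_iff)
  qed
  moreover have "w j \<in> E" for j unfolding w_def using vE inv_h by blast
  ultimately show ?thesis using that by blast
qed

lemma hdim_surj_if_inj:
  fixes \<Gamma> :: "'h \<Rightarrow> complex^'n::finite"
  assumes dim: "hdim sm E CARD('n)" and E: "subspace_h sm E"
    and \<Gamma>: "\<And>x y a b. x \<in> E \<Longrightarrow> y \<in> E \<Longrightarrow> \<Gamma> (sm a x + sm b y) = a *s \<Gamma> x + b *s \<Gamma> y"
    and inj: "\<And>x. x \<in> E \<Longrightarrow> \<Gamma> x = 0 \<Longrightarrow> x = 0"
  shows "\<exists>f\<in>E. \<Gamma> f = c"
proof -
  obtain w :: "'n \<Rightarrow> 'h" where wE: "\<And>j. w j \<in> E"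
    and w_indep: "\<And>a. (\<Sum>j\<in>UNIV. sm (a$j) (w j)) = 0 \<Longrightarrow> a = 0"
    using hdim_basis[OF dim] by blast
  define V :: "complex^'n^'n" where "V = (\<chi> r j. \<Gamma> (w j) $ r)"
  have V: "V *v a = \<Gamma> (\<Sum>j\<in>UNIV. sm (a$j) (w j))" for a
  proof -
    have "\<Gamma> (\<Sum>j\<in>UNIV. sm (a$j) (w j)) = (\<Sum>j\<in>UNIV. a$j *s \<Gamma> (w j))"
      by (rule linear_on_sum[OF E]) (simp_all add: \<Gamma> wE)
    then show ?thesis
      by (simp add: V_def vec_eq_iff matrix_vector_mult_def sum_component mult.commute)
  qed
  have "inj ((*v) V)" unfolding vec.inj_iff_eq_0
  proof (intro allI impI)
    fix a :: "complex^'n" assume "V *v a = 0"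
    moreover have "(\<Sum>j\<in>UNIV. sm (a$j) (w j)) \<in> E" by (rule subspace_sum[OF E wE])
    ultimately have "(\<Sum>j\<in>UNIV. sm (a$j) (w j)) = 0" using inj V by metis
    then show "a = 0" by (rule w_indep)
  qed
  then obtain a where "c = V *v a"
    using vec.linear_inj_imp_surj[OF matrix_vector_mul_linear_gen] by (metis surjD)
  moreover have "(\<Sum>j\<in>UNIV. sm (a$j) (w j)) \<in> E" by (rule subspace_sum[OF E wE])
  ultimately show ?thesis using V[of a] by metis
qed

lemma linear_vec_expand:
  fixes \<phi> :: "complex^'n::finite \<Rightarrow> 'h"
  assumes lin: "\<And>a b c d. \<phi> (a *s c + b *s d) = sm a (\<phi> c) + sm b (\<phi> d)"
  shows "\<phi> (\<Sum>j\<in>I. a j *s e j) = (\<Sum>j\<in>I. sm (a j) (\<phi> (e j)))"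
proof (induction I rule: infinite_finite_induct)
  case (insert j I)
  then show ?case using lin[of 1 "a j *s e j" 1] lin[of "a j" "e j" 0 0] by simp
qed (use lin[of 0 0 0 0] in simp_all)

lemma hdim_range_if_inj:
  fixes \<phi> :: "complex^'n::finite \<Rightarrow> 'h"
  assumes lin: "\<And>a b c d. \<phi> (a *s c + b *s d) = sm a (\<phi> c) + sm b (\<phi> d)"
    and inj: "\<And>c. \<phi> c = 0 \<Longrightarrow> c = 0"
  shows "hdim sm (range \<phi>) CARD('n)"
proof -
  let ?n = "CARD('n)"
  obtain h where h: "bij_betw h {..<?n} (UNIV::'n set)"
    using ex_bij_betw_nat_finite[of "UNIV::'n set"] by (auto simp: atLeast0LessThan)
  define v where "v i = \<phi> (axis (h i) 1)" for i
  have combination: "(\<Sum>i<?n. sm (c i) (v i)) = \<phi> (\<Sum>i<?n. c i *s axis (h i) 1)" for c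
    unfolding v_def by (rule linear_vec_expand[OF lin, symmetric])
  have coord: "(\<Sum>i'<?n. c i' *s axis (h i') (1::complex)) $ h i = c i" if i: "i < ?n" for c i
  proof -
    have "inj_on h {..<?n}" using h unfolding bij_betw_def by blast
    then have "\<And>i'. i' \<in> {..<?n}
        \<Longrightarrow> (c i' *s axis (h i') (1::complex)) $ h i = (if i' = i then c i else 0)"
      using i by (auto simp: axis_def inj_on_eq_iff)
    then have "(\<Sum>i'<?n. c i' *s axis (h i') (1::complex)) $ h i
        = (\<Sum>i'<?n. if i' = i then c i else 0)"
      unfolding sum_component by (intro sum.cong) auto
    then show ?thesis using i by simp
  qed
  have "\<forall>i<?n. c i = 0" if "(\<Sum>i<?n. sm (c i) (v i)) = 0" for c
  proof (intro allI impI)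
    fix i assume "i < ?n"
    have "(\<Sum>i'<?n. c i' *s axis (h i') (1::complex)) = 0" using that inj unfolding combination
      by blast
    then show "c i = 0" using coord[OF \<open>i < ?n\<close>, of c] by simp
  qed
  moreover have "range \<phi> = {(\<Sum>i<?n. sm (c i) (v i)) | c. True}"
  proof (intro equalityI subsetI)
    fix f assume "f \<in> range \<phi>"
    then obtain c where "f = \<phi> c" by blast
    also have "\<dots> = \<phi> (\<Sum>j\<in>UNIV. (c$j) *s axis j 1)" by (simp add: basis_expansion)
    also have "\<dots> = (\<Sum>j\<in>UNIV. sm (c$j) (\<phi> (axis j 1)))" by (rule linear_vec_expand[OF lin])
    also have "\<dots> = (\<Sum>i<?n. sm (c$h i) (v i))"
      unfolding v_def by (rule sum.reindex_bij_betw[OF h, symmetric])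
    finally show "f \<in> {(\<Sum>i<?n. sm (c i) (v i)) | c. True}"
      by (intro CollectI exI[of _ "\<lambda>i. c$h i"]) simp
  qed (auto simp: combination)
  ultimately show ?thesis unfolding hdim_def by blast
qed

end

lemma cip_add_l: "cip (a + b) c = cip a c + cip b c"
  unfolding cip_def by (simp add: distrib_right sum.distrib)

lemma cip_add_r: "cip c (a + b) = cip c a + cip c b"
  unfolding cip_def by (simp add: distrib_left sum.distrib)

lemma cip_scale_l: "cip (r *s a) c = r * cip a c"
  unfolding cip_def by (simp add: sum_distrib_left mult.assoc)

lemma cip_scale_r: "cip c (r *s a) = cnj r * cip c a"
  unfolding cip_def by (simp add: sum_distrib_left ac_simps)

lemma cip_zero_l[simp]: "cip 0 c = 0"
  unfolding cip_def by simp

lemma cip_zero_r[simp]: "cip c 0 = 0"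
  unfolding cip_def by simp

lemma cip_sym: "cip b a = cnj (cip a b)"
  unfolding cip_def by (simp add: mult.commute)

lemma cip_self: "cip a a = complex_of_real (\<Sum>i\<in>UNIV. (cmod (a$i))\<^sup>2)"
  unfolding cip_def of_real_sum by (simp add: complex_norm_square del: of_real_power)

lemma cip_self_eq_0: "cip a a = 0 \<Longrightarrow> a = 0"
proof -
  assume "cip a a = 0"
  then have "(\<Sum>i\<in>UNIV. (cmod (a$i))\<^sup>2) = 0" unfolding cip_self of_real_eq_0_iff .
  then have "\<forall>i\<in>UNIV. (cmod (a$i))\<^sup>2 = 0" by (subst sum_nonneg_eq_0_iff[symmetric]) auto
  then show "a = 0" by (simp add: vec_eq_iff)
qed

lemma cip_axis_l: "cip (axis i 1) c = cnj (c$i)"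
proof -
  have "\<And>j. axis i 1 $ j * cnj (c$j) = (if j = i then cnj (c$i) else 0)" by (simp add: axis_def)
  then show ?thesis unfolding cip_def by simp
qed

lemma cip_axis_r: "cip c (axis i 1) = c$i"
proof -
  have "\<And>j. c$j * cnj (axis i 1 $ j) = (if j = i then c$i else 0)" by (simp add: axis_def)
  then show ?thesis unfolding cip_def by simp
qed

lemma mv_scale: "A *v (t *s x) = t *s (A *v (x :: 'a::comm_ring_1^'n::finite))"
  by (simp add: vec_eq_iff matrix_vector_mult_def sum_distrib_left ac_simps)

lemma mv_axis: "(A *v axis k 1) $ r = A $ r $ k"
proof -
  have "\<And>s. A $ r $ s * axis k 1 $ s = (if s = k then A $ r $ k else 0)" by (simp add: axis_def)
  then show ?thesis unfolding matrix_vector_mult_def by simp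
qed

lemma cip_mv_expand: "cip (A *v c) c = (\<Sum>j\<in>UNIV. \<Sum>k\<in>UNIV. cnj (c$j) * c$k * A$j$k)"
  unfolding cip_def matrix_vector_mult_def by (simp add: sum_distrib_right) (simp add: ac_simps)

lemma cip_mv_add: "cip ((X + Y) *v c) c = cip (X *v c) c + cip (Y *v c) c"
  by (simp add: matrix_vector_mult_add_rdistrib cip_add_l)

lemma cip_mv_sum: "cip ((\<Sum>i\<in>A. X i) *v c) c = (\<Sum>i\<in>A. cip (X i *v c) c)"
  by (induction A rule: infinite_finite_induct) (auto simp: cip_mv_add)

lemma cip_mv_tendsto: "(X \<longlongrightarrow> L) F \<Longrightarrow> ((\<lambda>n. cip (X n *v c) c) \<longlongrightarrow> cip (L *v c) c) F"
  unfolding cip_mv_expand by (intro tendsto_intros)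

lemma psd_mat_real: "psd_mat X \<Longrightarrow> cip (X *v c) c = complex_of_real (Re (cip (X *v c) c))"
  unfolding psd_mat_def by (metis Reals_cases Re_complex_of_real)

lemma psd_mat_nonneg: "psd_mat X \<Longrightarrow> Re (cip (X *v c) c) \<ge> 0"
  unfolding psd_mat_def by blast

lemma hermitian_mat_cip:
  assumes "hermitian_mat D"
  shows "cip (D *v a) b = cip a (D *v b)"
proof -
  have D: "\<And>i j. cnj (D$j$i) = D$i$j" using assms unfolding hermitian_mat_def
    by (metis complex_cnj_cnj)
  have "cip (D *v a) b = (\<Sum>i\<in>UNIV. \<Sum>j\<in>UNIV. D$i$j * a$j * cnj (b$i))"
    unfolding cip_def matrix_vector_mult_def by (simp add: sum_distrib_right)
  also have "\<dots> = (\<Sum>j\<in>UNIV. \<Sum>i\<in>UNIV. a$j * (cnj (D$j$i) * cnj (b$i)))"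
    by (subst sum.swap) (simp add: D ac_simps)
  also have "\<dots> = cip a (D *v b)"
    unfolding cip_def matrix_vector_mult_def by (simp add: sum_distrib_left cnj_sum)
  finally show ?thesis .
qed

lemma hermitian_mat_cip_real: "hermitian_mat C \<Longrightarrow> cnj (cip (C *v c) c) = cip (C *v c) c"
  using hermitian_mat_cip[of C c c] cip_sym[of c "C *v c"] by simp

lemma cip_mv_pol_term: "cip (A *v (axis j 1 + t *s axis k 1)) (axis j 1 + t *s axis k 1) =
   A$j$j + cnj t * A$k$j + t * A$j$k + t * cnj t * A$k$k"
  by (simp add: matrix_vector_right_distrib mv_scale cip_add_l cip_add_r cip_scale_l cip_scale_r
    cip_axis_r mv_axis algebra_simps)

lemma polarization:
  "(1/4) * (\<Sum>p<(4::nat). cnj (\<i> ^ p) *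
      cip (A *v (axis j 1 + (\<i> ^ p) *s axis k 1)) (axis j 1 + (\<i> ^ p) *s axis k 1)) = A$j$k"
  unfolding cip_mv_pol_term by (simp add: numeral_eq_Suc lessThan_Suc algebra_simps)

section \<open>Closed symmetric operators with a boundary triplet\<close>

locale sym_triplet = hilbert sm ip for sm :: "complex \<Rightarrow> 'h::ab_group_add \<Rightarrow> 'h" and ip +
  fixes Dom :: "'h set" and B :: "'h \<Rightarrow> 'h" and G1 G2 :: "'h \<Rightarrow> complex^'n::finite"
  assumes lin: "lin_op sm Dom B" and dense: "dense_in ip UNIV Dom" and closed: "closed_op ip Dom B"
    and sym: "symmetric_op ip Dom B" and triplet: "boundary_triplet sm ip Dom B G1 G2"
begin

abbreviation "Dstar \<equiv> adj_dom ip Dom B"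
abbreviation "Bstar \<equiv> adj_op ip Dom B"
abbreviation "DA1 \<equiv> {x\<in>Dstar. G1 x = 0}"

lemma Dom_lin: "x \<in> Dom \<Longrightarrow> y \<in> Dom \<Longrightarrow> sm a x + sm b y \<in> Dom"
  using lin unfolding lin_op_def subspace_h_def by blast

lemma B_lin: "x \<in> Dom \<Longrightarrow> y \<in> Dom \<Longrightarrow> B (sm a x + sm b y) = sm a (B x) + sm b (B y)"
  using lin unfolding lin_op_def by blast

lemma B_sym: "x \<in> Dom \<Longrightarrow> y \<in> Dom \<Longrightarrow> ip (B x) y = ip x (B y)"
  using sym unfolding symmetric_op_def by blast

lemma orth_Dom_eq_0:
  assumes "\<And>x. x \<in> Dom \<Longrightarrow> ip x w = 0"
  shows "w = 0"
proof (rule ccontr)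
  assume "w \<noteq> 0"
  then have nw: "nrm w > 0" using nrm_pos_iff by blast
  obtain x where x: "x \<in> Dom" "nrm (w - x) < nrm w" using dense nw unfolding dense_in_def by blast
  have "ip (w - x) w = ip w w" using assms[OF x(1)] by (simp add: ip_simps)
  moreover have "cmod (ip w w) = (nrm w)\<^sup>2" unfolding ip_self_nrm norm_of_real by simp
  ultimately have "(nrm w)\<^sup>2 \<le> nrm (w - x) * nrm w" using cauchy_schwarz[of "w - x" w] by simp
  also have "\<dots> < nrm w * nrm w" using x nw by simp
  finally show False by (simp add: power2_eq_square)
qed

lemma adj_op_ip: "y \<in> Dstar \<Longrightarrow> x \<in> Dom \<Longrightarrow> ip (B x) y = ip x (Bstar y)"
  unfolding adj_dom_def adj_op_def by (metis (mono_tags, lifting) mem_Collect_eq someI)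

lemma adj_opI:
  assumes "\<And>x. x \<in> Dom \<Longrightarrow> ip (B x) y = ip x z"
  shows "y \<in> Dstar" "Bstar y = z"
proof -
  show y: "y \<in> Dstar" using assms unfolding adj_dom_def by blast
  have "\<And>x. x \<in> Dom \<Longrightarrow> ip x (Bstar y - z) = 0" using adj_op_ip[OF y] assms by (simp add: ip_simps)
  then show "Bstar y = z" using orth_Dom_eq_0 by fastforce
qed

lemma Dom_Dstar: "x \<in> Dom \<Longrightarrow> x \<in> Dstar" and Bstar_B: "x \<in> Dom \<Longrightarrow> Bstar x = B x"
  using adj_opI[of x "B x"] B_sym by auto

lemma Dstar_lin:
  assumes "x \<in> Dstar" "y \<in> Dstar"
  shows "sm a x + sm b y \<in> Dstar" "Bstar (sm a x + sm b y) = sm a (Bstar x) + sm b (Bstar y)"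
  using adj_opI[of "sm a x + sm b y" "sm a (Bstar x) + sm b (Bstar y)"] adj_op_ip assms
  by (simp_all add: ip_simps)

lemma Dstar_subspace: "subspace_h sm Dstar"
proof -
  have "0 \<in> Dom" using lin unfolding lin_op_def subspace_h_def by blast
  then have "0 \<in> Dstar" by (rule Dom_Dstar)
  then show ?thesis unfolding subspace_h_def
    using Dstar_lin(1)[of _ _ 1 1] Dstar_lin(1)[of _ 0 _ 0] by auto
qed

lemma zero_Dstar: "0 \<in> Dstar"
  using Dstar_subspace by (simp add: subspace_h_def)

lemma Dstar_diff: "x \<in> Dstar \<Longrightarrow> y \<in> Dstar \<Longrightarrow> x - y \<in> Dstar"
  and Bstar_diff: "x \<in> Dstar \<Longrightarrow> y \<in> Dstar \<Longrightarrow> Bstar (x - y) = Bstar x - Bstar y"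
  using Dstar_lin[of x y 1 "- 1"] sm_minus_one by auto

lemma G_lin:
  "x \<in> Dstar \<Longrightarrow> y \<in> Dstar \<Longrightarrow> G1 (sm a x + sm b y) = a *s G1 x + b *s G1 y"
  "x \<in> Dstar \<Longrightarrow> y \<in> Dstar \<Longrightarrow> G2 (sm a x + sm b y) = a *s G2 x + b *s G2 y"
  using triplet unfolding boundary_triplet_def Let_def by blast+

lemma green: "x \<in> Dstar \<Longrightarrow> y \<in> Dstar \<Longrightarrow>
    ip (Bstar x) y - ip x (Bstar y) = cip (G2 x) (G1 y) - cip (G1 x) (G2 y)"
  using triplet unfolding boundary_triplet_def Let_def by blast

lemma G_surj: "\<exists>x\<in>Dstar. G1 x = a \<and> G2 x = b"
  using triplet unfolding boundary_triplet_def Let_def by blast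

lemma G_zero: "G1 0 = 0" "G2 0 = 0"
  using G_lin[OF zero_Dstar zero_Dstar, of 0 0] by simp_all

lemma G_diff: "x \<in> Dstar \<Longrightarrow> y \<in> Dstar \<Longrightarrow> G1 (x - y) = G1 x - G1 y"
  "x \<in> Dstar \<Longrightarrow> y \<in> Dstar \<Longrightarrow> G2 (x - y) = G2 x - G2 y"
  using G_lin[of x y 1 "- 1"] sm_minus_one by (auto simp: vector_sneg_minus1[symmetric])

lemma G_Dom: "x \<in> Dom \<Longrightarrow> G1 x = 0" "x \<in> Dom \<Longrightarrow> G2 x = 0"
proof -
  assume x: "x \<in> Dom"
  have h: "cip (G2 x) (G1 y) = cip (G1 x) (G2 y)" if "y \<in> Dstar" for y
    using green[OF Dom_Dstar[OF x] that] adj_op_ip[OF that x] Bstar_B[OF x] B_sym by simp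
  obtain y1 where "y1 \<in> Dstar" "G1 y1 = G2 x" "G2 y1 = 0" using G_surj by blast
  then show "G2 x = 0" using h cip_self_eq_0 by fastforce
  obtain y2 where "y2 \<in> Dstar" "G1 y2 = 0" "G2 y2 = G1 x" using G_surj by blast
  then show "G1 x = 0" using h cip_self_eq_0 by fastforce
qed

lemma DA1_lin: "lin_op sm DA1 Bstar"
proof -
  have "0 \<in> DA1" using zero_Dstar G_zero by simp
  moreover have comb: "sm a x + sm b y \<in> DA1" if "x \<in> DA1" "y \<in> DA1" for x y a b
    using that Dstar_lin G_lin by simp
  ultimately show ?thesis
    unfolding lin_op_def subspace_h_def using comb[of _ _ 1 1] comb[of _ 0 _ 0] Dstar_lin(2) by auto
qed

lemma A1_sym: "f \<in> DA1 \<Longrightarrow> g \<in> DA1 \<Longrightarrow> ip (Bstar f) g = ip f (Bstar g)"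
  using green[of f g] by simp

lemma A1_adjI:
  assumes h: "\<And>f. f \<in> DA1 \<Longrightarrow> ip (Bstar f) g = ip f h"
  shows "g \<in> DA1" "Bstar g = h"
proof -
  have "\<And>x. x \<in> Dom \<Longrightarrow> x \<in> DA1" using Dom_Dstar G_Dom by blast
  then have "\<And>x. x \<in> Dom \<Longrightarrow> ip (B x) g = ip x h" using h Bstar_B by metis
  then have g: "g \<in> Dstar" and gB: "Bstar g = h" using adj_opI by auto
  obtain f where f: "f \<in> Dstar" "G1 f = 0" "G2 f = G1 g" using G_surj by blast
  have "cip (G1 g) (G1 g) = 0" using h[of f] f gB green[OF f(1) g] by simp
  then show "g \<in> DA1" using g cip_self_eq_0 by simp
  show "Bstar g = h" by (rule gB)
qed

lemma A1_closed: "closed_op ip DA1 Bstar"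
  unfolding closed_op_def
proof (intro allI impI)
  fix F g h assume F: "(\<forall>k. F k \<in> DA1) \<and> hconv ip F g \<and> hconv ip (\<lambda>k. Bstar (F k)) h"
  have "ip (Bstar f) g = ip f h" if f: "f \<in> DA1" for f
  proof -
    have "(\<lambda>k. ip (Bstar f) (F k)) \<longlonglongrightarrow> ip (Bstar f) g" "(\<lambda>k. ip f (Bstar (F k))) \<longlonglongrightarrow> ip f h"
      using F hconv_ip_r by blast+
    moreover have "\<And>k. ip (Bstar f) (F k) = ip f (Bstar (F k))" using A1_sym f F by blast
    ultimately show ?thesis using LIMSEQ_unique by fastforce
  qed
  then show "g \<in> DA1 \<and> Bstar g = h" using A1_adjI by blast
qed

lemma A1_lower_bound: "f \<in> DA1 \<Longrightarrow> \<bar>Im z\<bar> * nrm f \<le> nrm (Bstar f - sm z f)"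
  using sym_lower_bound A1_sym Im_ip_eq_0_if_ip_commute by blast

lemma A1_inj:
  assumes "Im z \<noteq> 0" "f \<in> DA1" "Bstar f - sm z f = 0"
  shows "f = 0"
proof -
  have "\<bar>Im z\<bar> * nrm f \<le> 0" using A1_lower_bound[OF assms(2), of z] assms(3) by simp
  then have "nrm f \<le> 0" using assms(1) by (simp add: mult_le_0_iff)
  then show ?thesis using nrm_pos_iff[of f] by linarith
qed

lemma A1_surj:
  assumes z: "Im z \<noteq> 0"
  shows "\<exists>f\<in>DA1. Bstar f - sm z f = y"
proof -
  have "y \<in> {Bstar f - sm z f |f. f \<in> DA1}"
  proof (rule closed_subspace_full)
    show "closed_subspace_h sm ip {Bstar f - sm z f |f. f \<in> DA1}"
      using z
      by (intro closed_subspace_range_shift[OF DA1_lin A1_closed, of "\<bar>Im z\<bar>"] A1_lower_bound) auto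
  next
    fix w assume "\<forall>u\<in>{Bstar f - sm z f |f. f \<in> DA1}. ip u w = 0"
    then have "ip (Bstar f) w = ip f (sm (cnj z) w)" if "f \<in> DA1" for f
      using that by (auto simp: ip_simps)
    then have "w \<in> DA1" "Bstar w - sm (cnj z) w = 0" using A1_adjI by auto
    then show "w = 0" using A1_inj[of "cnj z"] z by simp
  qed
  then show ?thesis by blast
qed

lemma A1_resolvent:
  assumes z: "Im z \<noteq> 0"
  shows "z \<in> resolvent_set sm ip DA1 Bstar"
  unfolding resolvent_set_def
proof (intro CollectI conjI allI)
  fix y
  obtain f where f: "f \<in> DA1" "Bstar f - sm z f = y" using A1_surj[OF z] by blast
  show "\<exists>!x. x \<in> DA1 \<and> Bstar x - sm z x = y"
  proof (rule ex1I[of _ f])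
    fix g assume g: "g \<in> DA1 \<and> Bstar g - sm z g = y"
    then have "Bstar (g - f) - sm z (g - f) = 0"
      using f Bstar_diff[of g f] by (simp add: sm_diff_r algebra_simps)
    moreover have "g - f \<in> DA1" using f g Dstar_diff G_diff(1)[of g f] by simp
    ultimately have "g - f = 0" using A1_inj[OF z] by blast
    then show "g = f" by simp
  qed (use f in blast)
next
  show "\<exists>C. \<forall>x\<in>DA1. nrm x \<le> C * nrm (Bstar x - sm z x)"
    using A1_lower_bound z by (intro exI[of _ "1 / \<bar>Im z\<bar>"]) (auto simp: field_simps)
qed

lemma eigenvector_with_boundary_value:
  assumes z: "Im z \<noteq> 0"
  shows "\<exists>g. g \<in> Dstar \<and> Bstar g = sm z g \<and> G1 g = c"
proof -
  obtain f where f: "f \<in> Dstar" "G1 f = c" using G_surj by blast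
  obtain u where u: "u \<in> DA1" "Bstar u - sm z u = Bstar f - sm z f" using A1_surj[OF z] by blast
  have "u \<in> Dstar" using u by simp
  then have "Bstar (f - u) - sm z (f - u) = (Bstar f - sm z f) - (Bstar u - sm z u)"
    unfolding Bstar_diff[OF f(1) \<open>u \<in> Dstar\<close>] sm_diff_r by (simp add: algebra_simps)
  then have "Bstar (f - u) = sm z (f - u)" using u(2) by simp
  then show ?thesis using f u Dstar_diff G_diff by (intro exI[of _ "f - u"]) auto
qed

lemma eigenvector_boundary_value_unique:
  assumes "Im z \<noteq> 0" "g \<in> Dstar" "Bstar g = sm z g" "g' \<in> Dstar" "Bstar g' = sm z g'" "G1 g = G1 g'"
  shows "g = g'"
  using A1_inj[of z "g - g'"] assms Dstar_diff G_diff Bstar_diff by (simp add: sm_diff_r)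

lemma ker_boundary_maps_subset_Dom:
  assumes f: "f \<in> Dstar" "G1 f = 0" "G2 f = 0"
  shows "f \<in> Dom"
proof -
  let ?R = "{B u - sm \<i> u |u. u \<in> Dom}"
  have "1 * nrm u \<le> nrm (B u - sm \<i> u)" if "u \<in> Dom" for u
    using sym_lower_bound[of "B u" u \<i>] Im_ip_eq_0_if_ip_commute[OF B_sym[OF that that]] by simp
  then have R: "closed_subspace_h sm ip ?R"
    by (intro closed_subspace_range_shift[OF lin closed, of 1]) auto
  obtain r where "r \<in> ?R" and r: "\<forall>v\<in>?R. ip (Bstar f - sm \<i> f - r) v = 0"
    using orth_projection_exists[OF R] by blast
  then obtain u where u: "u \<in> Dom" "r = B u - sm \<i> u" by blast
  text \<open>\<open>w\<close> is orthogonal to the range of \<open>B - i\<close>, hence an eigenvector of \<open>B\<^sup>*\<close> for \<open>-i\<close>.\<close>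
  define w where "w = Bstar f - sm \<i> f - r"
  have "ip (B v) w = ip v (sm (- \<i>) w)" if "v \<in> Dom" for v
  proof -
    have "ip (B v - sm \<i> v) w = cnj (ip w (B v - sm \<i> v))" by (rule ip_sym)
    also have "ip w (B v - sm \<i> v) = 0" using r that unfolding w_def by blast
    finally show ?thesis by (simp add: ip_simps)
  qed
  then have w: "w \<in> Dstar" "Bstar w = sm (- \<i>) w" using adj_opI by blast+
  define g where "g = f - u"
  have g: "g \<in> Dstar" "G1 g = 0" "G2 g = 0"
    unfolding g_def using f u Dom_Dstar Dstar_diff G_diff G_Dom by auto
  have gw: "Bstar g - sm \<i> g = w"
    unfolding g_def w_def u(2) using f u Bstar_diff Dom_Dstar Bstar_B by (simp add: sm_diff_r)
  have "ip w w = ip (Bstar g) w - \<i> * ip g w" using gw by (metis ip_diff_l ip_sm_l)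
  also have "\<dots> = 0" using green[OF g(1) w(1)] g w by (simp add: ip_simps)
  finally have "w = 0" by (rule ip_self_eq_0)
  then have "g = 0" using A1_inj[of \<i> g] g gw by simp
  then show ?thesis using u unfolding g_def by simp
qed

lemma eigenline_subset_Dom: "f \<in> Dom \<Longrightarrow> range (\<lambda>a. sm a f) \<subseteq> Dom"
  using Dom_lin[of f f _ 0] by auto

lemma eigenline_invariant:
  assumes "f \<in> Dom" "B f = sm z f" "u \<in> range (\<lambda>a. sm a f)"
  shows "B u \<in> range (\<lambda>a. sm a f)"
proof -
  obtain a where "u = sm a f" using assms(3) by blast
  then have "B u = sm (a * z) f" using B_lin[OF assms(1) assms(1), of a 0] assms(2)
    by (simp add: sm_assoc)
  then show ?thesis by simp
qed

lemma eigenline_reducing: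
  assumes f: "f \<in> Dom" "B f = sm z f"
  shows "reducing ip Dom B (range (\<lambda>a. sm a f))"
  unfolding reducing_def
proof
  fix u assume u: "u \<in> Dom"
  define t where "t = ip u f / ip f f"
  define v where "v = u - sm t f"
  have vf: "ip v f = 0" unfolding v_def t_def using ip_self_eq_0
    by (cases "f = 0") (auto simp: ip_simps)
  have v: "v \<in> Dom" unfolding v_def using Dom_lin[OF u f(1), of 1 "- t"] by (simp add: sm_minus_l)
  have "ip (B v) f = 0" using B_sym[OF v f(1)] f(2) vf by (simp add: ip_sm_r)
  then have "orth_to ip v (range (\<lambda>a. sm a f))" "orth_to ip (B v) (range (\<lambda>a. sm a f))"
    using vf unfolding orth_to_def by (auto simp: ip_sm_r)
  moreover have "sm t f \<in> Dom" "B (sm t f) \<in> range (\<lambda>a. sm a f)"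
    using eigenline_subset_Dom[OF f(1)] eigenline_invariant[OF f] by auto
  ultimately show "\<exists>a b. u = a + b \<and> a \<in> range (\<lambda>a. sm a f) \<and> orth_to ip b (range (\<lambda>a. sm a f))
      \<and> a \<in> Dom \<and> B a \<in> range (\<lambda>a. sm a f) \<and> orth_to ip (B b) (range (\<lambda>a. sm a f))"
    unfolding v_def by (intro exI[of _ "sm t f"] exI[of _ "u - sm t f"]) auto
qed

lemma eigenline_selfadj:
  assumes f: "f \<in> Dom" "B f = sm z f"
  shows "selfadj_in ip (range (\<lambda>a. sm a f)) (Dom \<inter> range (\<lambda>a. sm a f)) B"
  unfolding selfadj_in_def
proof (intro conjI)
  let ?L = "range (\<lambda>a. sm a f)"
  have L: "Dom \<inter> ?L = ?L" using eigenline_subset_Dom[OF f(1)] by blast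
  show "Dom \<inter> ?L \<subseteq> ?L" "\<forall>x\<in>Dom \<inter> ?L. B x \<in> ?L" using eigenline_invariant[OF f] by auto
  show "dense_in ip ?L (Dom \<inter> ?L)" unfolding dense_in_def L by (intro ballI allI impI bexI) auto
  show "\<forall>y\<in>Dom \<inter> ?L. \<forall>x\<in>Dom \<inter> ?L. ip (B x) y = ip x (B y)" using B_sym by blast
  show "{y \<in> ?L. \<exists>z\<in>?L. \<forall>x\<in>Dom \<inter> ?L. ip (B x) y = ip x z} = Dom \<inter> ?L"
  proof
    show "Dom \<inter> ?L \<subseteq> {y \<in> ?L. \<exists>z\<in>?L. \<forall>x\<in>Dom \<inter> ?L. ip (B x) y = ip x z}"
      using eigenline_invariant[OF f] B_sym by blast
  qed (use L in blast)
qed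

end

definition qform :: "(real set \<Rightarrow> complex^'n::finite^'n) \<Rightarrow> complex^'n \<Rightarrow> real set \<Rightarrow> real" where
  "qform Om c S = Re (cip (Om S *v c) c)"

definition centered_interval :: "nat \<Rightarrow> real set" where "centered_interval k = {- real k..real k}"

lemma centered_interval_borel[measurable]: "centered_interval k \<in> sets borel"
  unfolding centered_interval_def by simp

lemma centered_interval_bounded: "bounded (centered_interval k)"
  unfolding centered_interval_def by simp

lemma centered_interval_mono: "k \<le> m \<Longrightarrow> centered_interval k \<subseteq> centered_interval m"
  unfolding centered_interval_def by auto

lemma centered_interval_cover: "\<exists>k. x \<in> centered_interval k"
proof -
  obtain k :: nat where "\<bar>x\<bar> \<le> real k" using real_arch_simple by blast
  then show ?thesis unfolding centered_interval_def by (intro exI[of _ k]) auto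
qed

lemma bounded_subset_centered_interval: "bounded S \<Longrightarrow> \<exists>k. S \<subseteq> centered_interval k"
proof -
  assume "bounded S"
  then obtain b where b: "\<forall>x\<in>S. \<bar>x\<bar> \<le> b" unfolding bounded_iff by auto
  obtain k :: nat where "b \<le> real k" using real_arch_simple by blast
  then show ?thesis using b unfolding centered_interval_def by (intro exI[of _ k]) force
qed

context
  fixes Om :: "real set \<Rightarrow> complex^'n::finite^'n"
  assumes mm: "matrix_measure Om"
begin

lemma matrix_measure_psd: "S \<in> sets borel \<Longrightarrow> bounded S \<Longrightarrow> psd_mat (Om S)"
  using mm unfolding matrix_measure_def by blast

lemma matrix_measure_sums: "(\<And>k. A k \<in> sets borel) \<Longrightarrow> disjoint_family A \<Longrightarrow> bounded (\<Union>k. A k)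
    \<Longrightarrow> (\<lambda>k. Om (A k)) sums Om (\<Union>k. A k)"
  using mm unfolding matrix_measure_def by blast

lemma matrix_measure_empty: "Om {} = 0"
proof -
  have "(\<lambda>k. Om {}) sums Om (\<Union>k::nat. {})"
    by (rule matrix_measure_sums) (auto simp: disjoint_family_on_def)
  then have "summable (\<lambda>k::nat. Om {})" by (rule sums_summable)
  then have "(\<lambda>k::nat. Om {}) \<longlonglongrightarrow> 0" by (rule summable_LIMSEQ_zero)
  then show ?thesis by (simp add: LIMSEQ_const_iff)
qed

lemma matrix_measure_Un:
  assumes A: "A \<in> sets borel" "bounded A"
  and B: "B \<in> sets borel" "bounded B" and d: "A \<inter> B = {}"
  shows "Om (A \<union> B) = Om A + Om B"
proof -
  define F where "F = (\<lambda>k::nat. if k = 0 then A else if k = 1 then B else {})"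
  have U: "(\<Union>k. F k) = A \<union> B"
  proof
    show "(\<Union>k. F k) \<subseteq> A \<union> B" unfolding F_def by auto
    show "A \<union> B \<subseteq> (\<Union>k. F k)" using F_def by (auto intro: exI[of _ "0::nat"] exI[of _ "1::nat"])
  qed
  have "(\<lambda>k. Om (F k)) sums Om (\<Union>k. F k)"
  proof (rule matrix_measure_sums)
    show "\<And>k. F k \<in> sets borel" unfolding F_def using A B by auto
    show "disjoint_family F" unfolding disjoint_family_on_def F_def using d by auto
    show "bounded (\<Union>k. F k)" unfolding U using A B by simp
  qed
  moreover have "(\<lambda>k. Om (F k)) sums (\<Sum>k\<in>{0,1}. Om (F k))"
    by (rule sums_finite) (auto simp: F_def matrix_measure_empty)
  ultimately show ?thesis unfolding U by (simp add: sums_iff F_def)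
qed

lemma qform_nonneg: "S \<in> sets borel \<Longrightarrow> bounded S \<Longrightarrow> qform Om c S \<ge> 0"
  unfolding qform_def using matrix_measure_psd psd_mat_nonneg by blast

lemma qform_real: "S \<in> sets borel \<Longrightarrow> bounded S \<Longrightarrow> cip (Om S *v c) c = complex_of_real (qform Om c S)"
  unfolding qform_def using matrix_measure_psd psd_mat_real by blast

lemma qform_mono:
  assumes "A \<subseteq> B" "A \<in> sets borel" "B \<in> sets borel" "bounded B"
  shows "qform Om c A \<le> qform Om c B"
proof -
  have bA: "bounded A" using assms bounded_subset by blast
  have "B = A \<union> (B - A)" using assms by auto
  then have "Om B = Om A + Om (B - A)"
    using matrix_measure_Un[of A "B - A"] assms bA bounded_subset[of B "B - A"] by auto
  then have "qform Om c B = qform Om c A + qform Om c (B - A)" unfolding qform_def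
    by (simp add: cip_mv_add)
  moreover have "qform Om c (B - A) \<ge> 0" using qform_nonneg assms bounded_subset[of B "B - A"]
    by auto
  ultimately show ?thesis by simp
qed

lemma qform_sums:
  assumes "\<And>k. A k \<in> sets borel" "disjoint_family A" "bounded (\<Union>k. A k)"
  shows "(\<lambda>k. qform Om c (A k)) sums qform Om c (\<Union>k. A k)"
proof -
  have "(\<lambda>k. Om (A k)) sums Om (\<Union>k. A k)" using matrix_measure_sums assms by blast
  then have "(\<lambda>n. \<Sum>k<n. Om (A k)) \<longlonglongrightarrow> Om (\<Union>k. A k)" unfolding sums_def .
  then have "(\<lambda>n. Re (cip ((\<Sum>k<n. Om (A k)) *v c) c)) \<longlonglongrightarrow> Re (cip (Om (\<Union>k. A k) *v c) c)"
    by (intro tendsto_Re cip_mv_tendsto)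
  then show ?thesis unfolding sums_def qform_def cip_mv_sum by simp
qed

definition qmeasure_fun
  where "qmeasure_fun c S = (SUP k. ennreal (qform Om c (S \<inter> centered_interval k)))"

lemma qmeasure_fun_incseq: "S \<in> sets borel
    \<Longrightarrow> incseq (\<lambda>k. ennreal (qform Om c (S \<inter> centered_interval k)))"
  unfolding incseq_def using centered_interval_mono centered_interval_bounded
  by (auto intro!: ennreal_leI qform_mono bounded_Int)

lemma qmeasure_fun_positive: "positive (sets borel) (qmeasure_fun c)"
  unfolding positive_def qmeasure_fun_def qform_def by (simp add: matrix_measure_empty)

lemma qmeasure_fun_countably_additive: "countably_additive (sets borel) (qmeasure_fun c)"
  unfolding countably_additive_def
proof (intro allI impI)
  fix A :: "nat \<Rightarrow> real set"
  assume A: "range A \<subseteq> sets borel" "disjoint_family A" "(\<Union>i. A i) \<in> sets borel"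
  have Ab: "\<And>i. A i \<in> sets borel" using A by auto
  have s: "(\<lambda>i. qform Om c (A i \<inter> centered_interval k))
      sums qform Om c ((\<Union>i. A i) \<inter> centered_interval k)" for k
  proof -
    have "(\<lambda>i. qform Om c (A i \<inter> centered_interval k))
        sums qform Om c (\<Union>i. A i \<inter> centered_interval k)"
    proof (rule qform_sums)
      show "\<And>i. A i \<inter> centered_interval k \<in> sets borel" using Ab by simp
      show "disjoint_family (\<lambda>i. A i \<inter> centered_interval k)" using A(2)
        unfolding disjoint_family_on_def by auto
      show "bounded (\<Union>i. A i \<inter> centered_interval k)" using centered_interval_bounded
        by (rule bounded_subset) auto
    qed
    moreover have "(\<Union>i. A i \<inter> centered_interval k) = (\<Union>i. A i) \<inter> centered_interval k" by auto
    ultimately show ?thesis by simp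
  qed
  have "(\<Sum>i. qmeasure_fun c (A i))
      = (\<Sum>i. SUP k. ennreal (qform Om c (A i \<inter> centered_interval k)))" unfolding qmeasure_fun_def ..
  also have "\<dots> = (SUP k. \<Sum>i. ennreal (qform Om c (A i \<inter> centered_interval k)))"
    by (rule ennreal_suminf_SUP_eq) (rule qmeasure_fun_incseq[OF Ab])
  also have "\<dots> = (SUP k. ennreal (qform Om c ((\<Union>i. A i) \<inter> centered_interval k)))"
  proof (rule SUP_cong[OF refl])
    fix k
    show "(\<Sum>i. ennreal (qform Om c (A i \<inter> centered_interval k)))
        = ennreal (qform Om c ((\<Union>i. A i) \<inter> centered_interval k))"
    proof (rule suminf_ennreal_eq[OF _ s])
      fix i show "0 \<le> qform Om c (A i \<inter> centered_interval k)"
        using Ab[of i] centered_interval_bounded[of k] by (intro qform_nonneg) auto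
    qed
  qed
  also have "\<dots> = qmeasure_fun c (\<Union>i. A i)" unfolding qmeasure_fun_def ..
  finally show "(\<Sum>i. qmeasure_fun c (A i)) = qmeasure_fun c (\<Union>i. A i)" .
qed

lemma qmeasure_alt: "qmeasure Om c = measure_of UNIV (sets borel) (qmeasure_fun c)"
  unfolding qmeasure_def qmeasure_fun_def qform_def centered_interval_def ..

lemma sets_qmeasure[simp, measurable_cong]: "sets (qmeasure Om c) = sets borel"
proof -
  have "sigma_algebra (space borel) (sets (borel::real measure))"
    by (rule sets.sigma_algebra_axioms)
  then show ?thesis unfolding qmeasure_def using sigma_algebra.sets_measure_of_eq by force
qed

lemma space_qmeasure[simp]: "space (qmeasure Om c) = UNIV"
  unfolding qmeasure_def by (simp add: space_measure_of_conv)

lemma emeasure_qmeasure: "S \<in> sets borel \<Longrightarrow> emeasure (qmeasure Om c) S = qmeasure_fun c S"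
  unfolding qmeasure_alt
  by (rule emeasure_measure_of_sigma[OF _ qmeasure_fun_positive qmeasure_fun_countably_additive])
     (use sets.sigma_algebra_axioms[of borel] in auto)

lemma emeasure_qmeasure_bounded:
  assumes S: "S \<in> sets borel" "bounded S"
  shows "emeasure (qmeasure Om c) S = ennreal (qform Om c S)"
proof -
  obtain N where N: "S \<subseteq> centered_interval N" using bounded_subset_centered_interval S by blast
  have "qmeasure_fun c S = (SUP k. ennreal (qform Om c (S \<inter> centered_interval k)))"
    unfolding qmeasure_fun_def ..
  also have "\<dots> = ennreal (qform Om c S)"
  proof (rule antisym)
    show "(SUP k. ennreal (qform Om c (S \<inter> centered_interval k))) \<le> ennreal (qform Om c S)"
      by (rule SUP_least, rule ennreal_leI, rule qform_mono) (use S in auto)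
    have "ennreal (qform Om c S) = ennreal (qform Om c (S \<inter> centered_interval N))" using N
      by (simp add: Int_absorb2)
    also have "\<dots> \<le> (SUP k. ennreal (qform Om c (S \<inter> centered_interval k)))" by (rule SUP_upper) simp
    finally show "ennreal (qform Om c S)
        \<le> (SUP k. ennreal (qform Om c (S \<inter> centered_interval k)))" .
  qed
  finally show ?thesis using emeasure_qmeasure S by simp
qed

lemma measure_qmeasure_bounded: "S \<in> sets borel \<Longrightarrow> bounded S
    \<Longrightarrow> measure (qmeasure Om c) S = qform Om c S"
  unfolding measure_def using emeasure_qmeasure_bounded qform_nonneg by simp

lemma emeasure_qmeasure_bounded_finite: "S \<in> sets borel \<Longrightarrow> bounded S
    \<Longrightarrow> emeasure (qmeasure Om c) S < \<infinity>"
  using emeasure_qmeasure_bounded by simp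

end

section \<open>Linear relations between measures extend to integrals\<close>

text \<open>A linear relation between finitely many measures that holds on bounded Borel sets splits,
  by the sign of the coefficients, into an equality of two positive combinations of measures. It
  extends to all Borel sets by exhaustion with centered intervals, to nonnegative measurable
  functions by induction, and to integrable functions through their positive and negative parts.\<close>

lemma sum_split_sign:
  fixes r h :: "'i \<Rightarrow> real"
  assumes "finite I"
  shows "(\<Sum>l\<in>I. r l * h l) = (\<Sum>l\<in>{l\<in>I. r l > 0}. r l * h l) + (\<Sum>l\<in>{l\<in>I. r l < 0}. r l * h l)"
proof -
  have "(\<Sum>l\<in>I. r l * h l)
      = (\<Sum>l\<in>I. (if r l > 0 then r l * h l else 0) + (if r l < 0 then r l * h l else 0))"
    by (intro sum.cong) auto
  also have "\<dots> = (\<Sum>l\<in>{l\<in>I. r l > 0}. r l * h l) + (\<Sum>l\<in>{l\<in>I. r l < 0}. r l * h l)"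
    using assms by (simp add: sum.distrib sum.inter_filter)
  finally show ?thesis .
qed

lemma weighted_emeasure_SUP:
  fixes N :: "'i \<Rightarrow> real measure" and w :: "'i \<Rightarrow> real"
  assumes J: "finite J" and sets: "\<And>l. l \<in> J \<Longrightarrow> sets (N l) = sets borel"
    and finb: "\<And>l S. l \<in> J \<Longrightarrow> S \<in> sets borel \<Longrightarrow> bounded S \<Longrightarrow> emeasure (N l) S < \<infinity>"
    and w: "\<And>l. l \<in> J \<Longrightarrow> w l \<ge> 0" and A: "A \<in> sets borel"
  shows "(\<Sum>l\<in>J. ennreal (w l) * emeasure (N l) A)
      = (SUP k. ennreal (\<Sum>l\<in>J. w l * measure (N l) (A \<inter> centered_interval k)))"
proof -
  have AI: "A \<inter> centered_interval k \<in> sets borel" for k using A by simp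
  have em: "emeasure (N l) (A \<inter> centered_interval k)
      = ennreal (measure (N l) (A \<inter> centered_interval k))" if "l \<in> J" for l k
  proof -
    have "bounded (A \<inter> centered_interval k)" using centered_interval_bounded[of k]
      by (rule bounded_subset) auto
    then have "emeasure (N l) (A \<inter> centered_interval k) < \<infinity>" by (rule finb[OF that AI])
    then show ?thesis by (intro emeasure_eq_ennreal_measure) auto
  qed
  have inc: "incseq (\<lambda>k. A \<inter> centered_interval k)" unfolding incseq_def
    using centered_interval_mono by auto
  have U: "(\<Union>k. A \<inter> centered_interval k) = A" using centered_interval_cover by auto
  have e: "emeasure (N l) A = (SUP k. emeasure (N l) (A \<inter> centered_interval k))" if l: "l \<in> J" for l
  proof -
    have "range (\<lambda>k. A \<inter> centered_interval k) \<subseteq> sets (N l)" using AI sets[OF l] by auto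
    then have "(SUP k. emeasure (N l) (A \<inter> centered_interval k))
        = emeasure (N l) (\<Union>k. A \<inter> centered_interval k)"
      using SUP_emeasure_incseq[of "\<lambda>k. A \<inter> centered_interval k" "N l"] inc by blast
    then show ?thesis unfolding U by simp
  qed
  have "(\<Sum>l\<in>J. ennreal (w l) * emeasure (N l) A)
      = (\<Sum>l\<in>J. SUP k. ennreal (w l) * emeasure (N l) (A \<inter> centered_interval k))"
    using e by (simp add: SUP_mult_left_ennreal)
  also have "\<dots> = (SUP k. \<Sum>l\<in>J. ennreal (w l) * emeasure (N l) (A \<inter> centered_interval k))"
  proof (rule ennreal_SUP_sum[symmetric])
    fix l assume "l \<in> J"
    then show "incseq (\<lambda>k. ennreal (w l) * emeasure (N l) (A \<inter> centered_interval k))"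
      using inc sets AI unfolding incseq_def by (auto intro!: mult_left_mono emeasure_mono)
  qed
  also have "\<dots> = (SUP k. ennreal (\<Sum>l\<in>J. w l * measure (N l) (A \<inter> centered_interval k)))"
  proof (rule SUP_cong[OF refl])
    fix k
    have "(\<Sum>l\<in>J. ennreal (w l) * emeasure (N l) (A \<inter> centered_interval k))
        = (\<Sum>l\<in>J. ennreal (w l * measure (N l) (A \<inter> centered_interval k)))"
      using em w by (intro sum.cong) (auto simp: ennreal_mult)
    also have "\<dots> = ennreal (\<Sum>l\<in>J. w l * measure (N l) (A \<inter> centered_interval k))"
      using w by (intro sum_ennreal) auto
    finally show "(\<Sum>l\<in>J. ennreal (w l) * emeasure (N l) (A \<inter> centered_interval k))
        = ennreal (\<Sum>l\<in>J. w l * measure (N l) (A \<inter> centered_interval k))" .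
  qed
  finally show ?thesis .
qed

definition weighted_nn_integral ::
    "'i set \<Rightarrow> ('i \<Rightarrow> real measure) \<Rightarrow> ('i \<Rightarrow> real) \<Rightarrow> (real \<Rightarrow> ennreal) \<Rightarrow> ennreal" where
  "weighted_nn_integral J N a f = (\<Sum>l\<in>J. ennreal (a l) * (\<integral>\<^sup>+x. f x \<partial>N l))"

lemma weighted_nn_integral_cmult:
  assumes m: "\<And>l. l \<in> J \<Longrightarrow> u \<in> borel_measurable (N l)"
  shows "weighted_nn_integral J N a (\<lambda>x. c * u x) = c * weighted_nn_integral J N a u"
proof -
  have "weighted_nn_integral J N a (\<lambda>x. c * u x) = (\<Sum>l\<in>J. c * (ennreal (a l) * (\<integral>\<^sup>+x. u x \<partial>N l)))"
    unfolding weighted_nn_integral_def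
  proof (rule sum.cong[OF refl])
    fix l assume l: "l \<in> J"
    have "(\<integral>\<^sup>+x. c * u x \<partial>N l) = c * (\<integral>\<^sup>+x. u x \<partial>N l)" by (rule nn_integral_cmult[OF m[OF l]])
    then show "ennreal (a l) * (\<integral>\<^sup>+x. c * u x \<partial>N l) = c * (ennreal (a l) * (\<integral>\<^sup>+x. u x \<partial>N l))"
      by (simp only: mult.left_commute)
  qed
  also have "\<dots> = c * weighted_nn_integral J N a u" unfolding weighted_nn_integral_def
    by (rule sum_distrib_left[symmetric])
  finally show ?thesis .
qed

lemma weighted_nn_integral_add:
  assumes m: "\<And>l. l \<in> J \<Longrightarrow> u \<in> borel_measurable (N l)" "\<And>l. l \<in> J \<Longrightarrow> v \<in> borel_measurable (N l)"
  shows "weighted_nn_integral J N a (\<lambda>x. v x + u x)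
      = weighted_nn_integral J N a v + weighted_nn_integral J N a u"
proof -
  have "weighted_nn_integral J N a (\<lambda>x. v x + u x)
      = (\<Sum>l\<in>J. ennreal (a l) * (\<integral>\<^sup>+x. v x \<partial>N l) + ennreal (a l) * (\<integral>\<^sup>+x. u x \<partial>N l))"
    unfolding weighted_nn_integral_def
  proof (rule sum.cong[OF refl])
    fix l assume l: "l \<in> J"
    have "(\<integral>\<^sup>+x. v x + u x \<partial>N l) = (\<integral>\<^sup>+x. v x \<partial>N l) + (\<integral>\<^sup>+x. u x \<partial>N l)"
      by (rule nn_integral_add[OF m(2)[OF l] m(1)[OF l]])
    then show "ennreal (a l) * (\<integral>\<^sup>+x. v x + u x \<partial>N l)
        = ennreal (a l) * (\<integral>\<^sup>+x. v x \<partial>N l) + ennreal (a l) * (\<integral>\<^sup>+x. u x \<partial>N l)"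
      by (simp only: distrib_left)
  qed
  also have "\<dots> = weighted_nn_integral J N a v + weighted_nn_integral J N a u"
    unfolding weighted_nn_integral_def by (rule sum.distrib)
  finally show ?thesis .
qed

lemma weighted_nn_integral_SUP:
  assumes m: "\<And>l i. l \<in> J \<Longrightarrow> U i \<in> borel_measurable (N l)" and inc: "incseq U"
  shows "weighted_nn_integral J N a (SUP i. U i) = (SUP i. weighted_nn_integral J N a (U i))"
proof -
  have conv: "(\<integral>\<^sup>+x. (SUP i. U i) x \<partial>N l) = (SUP i. \<integral>\<^sup>+x. U i x \<partial>N l)" if l: "l \<in> J" for l
  proof -
    have "incseq (\<lambda>i x. U i x)" using inc by simp
    then have "(\<integral>\<^sup>+x. (SUP i. U i x) \<partial>N l) = (SUP i. \<integral>\<^sup>+x. U i x \<partial>N l)"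
      using nn_integral_monotone_convergence_SUP[of "\<lambda>i x. U i x" "N l"] m[OF l] by blast
    moreover have "(\<lambda>x. (SUP i. U i) x) = (\<lambda>x. SUP i. U i x)" by (simp add: image_comp)
    ultimately show ?thesis by simp
  qed
  have inc2: "incseq (\<lambda>i. ennreal (a l) * (\<integral>\<^sup>+x. U i x \<partial>N l))" for l
  proof -
    have "incseq (\<lambda>i. \<integral>\<^sup>+x. U i x \<partial>N l)"
      unfolding incseq_def
    proof (intro allI impI)
      fix i j :: nat assume "i \<le> j"
      then have "U i \<le> U j" using inc unfolding incseq_def by blast
      then show "(\<integral>\<^sup>+x. U i x \<partial>N l) \<le> (\<integral>\<^sup>+x. U j x \<partial>N l)"
        by (intro nn_integral_mono) (simp add: le_fun_def)
    qed
    then show ?thesis unfolding incseq_def by (intro allI impI mult_left_mono) auto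
  qed
  have "weighted_nn_integral J N a (SUP i. U i) = (\<Sum>l\<in>J. SUP i. ennreal (a l) * (\<integral>\<^sup>+x. U i x \<partial>N l))"
    unfolding weighted_nn_integral_def
  proof (rule sum.cong[OF refl])
    fix l assume "l \<in> J"
    then show "ennreal (a l) * (\<integral>\<^sup>+x. (SUP i. U i) x \<partial>N l)
        = (SUP i. ennreal (a l) * (\<integral>\<^sup>+x. U i x \<partial>N l))"
      using conv by (simp only: SUP_mult_left_ennreal)
  qed
  also have "\<dots> = (SUP i. weighted_nn_integral J N a (U i))" unfolding weighted_nn_integral_def
    using ennreal_SUP_sum[of J "\<lambda>l i. ennreal (a l) * integral\<^sup>N (N l) (U i)"] inc2 by simp
  finally show ?thesis .
qed

lemma measurable_borel_cong: "sets M = sets borel \<Longrightarrow> u \<in> borel_measurable borel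
    \<Longrightarrow> u \<in> borel_measurable M"
  using measurable_cong_sets[of M borel borel borel] by simp

lemma weighted_emeasure_balance:
  fixes N :: "'i \<Rightarrow> real measure" and r :: "'i \<Rightarrow> real"
  assumes I: "finite I" and sets: "\<And>l. l \<in> I \<Longrightarrow> sets (N l) = sets borel"
    and finb: "\<And>l S. l \<in> I \<Longrightarrow> S \<in> sets borel \<Longrightarrow> bounded S \<Longrightarrow> emeasure (N l) S < \<infinity>"
    and rel: "\<And>S. S \<in> sets borel \<Longrightarrow> bounded S \<Longrightarrow> (\<Sum>l\<in>I. r l * measure (N l) S) = 0"
    and A: "A \<in> sets borel"
  shows "(\<Sum>l\<in>{l\<in>I. r l > 0}. ennreal (r l) * emeasure (N l) A) =
    (\<Sum>l\<in>{l\<in>I. r l < 0}. ennreal (- r l) * emeasure (N l) A)"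
proof -
  let ?P = "{l\<in>I. r l > 0}" and ?Q = "{l\<in>I. r l < 0}"
  have "(\<Sum>l\<in>?P. r l * measure (N l) (A \<inter> centered_interval k)) =
      (\<Sum>l\<in>?Q. - r l * measure (N l) (A \<inter> centered_interval k))" for k
  proof -
    have "bounded (A \<inter> centered_interval k)" using centered_interval_bounded[of k]
      by (rule bounded_subset) auto
    then have "(\<Sum>l\<in>I. r l * measure (N l) (A \<inter> centered_interval k)) = 0" using rel A by auto
    then show ?thesis using sum_split_sign[OF I, of r] by (simp add: sum_negf)
  qed
  then show ?thesis
    using I sets finb A weighted_emeasure_SUP[of ?P N r A] weighted_emeasure_SUP[of ?Q N "\<lambda>l.
        - r l" A]
    by simp
qed

lemma weighted_nn_integral_balance:
  fixes N :: "'i \<Rightarrow> real measure" and r :: "'i \<Rightarrow> real" and f :: "real \<Rightarrow> ennreal"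
  assumes I: "finite I" and sets: "\<And>l. l \<in> I \<Longrightarrow> sets (N l) = sets borel"
    and finb: "\<And>l S. l \<in> I \<Longrightarrow> S \<in> sets borel \<Longrightarrow> bounded S \<Longrightarrow> emeasure (N l) S < \<infinity>"
    and rel: "\<And>S. S \<in> sets borel \<Longrightarrow> bounded S \<Longrightarrow> (\<Sum>l\<in>I. r l * measure (N l) S) = 0"
    and f: "f \<in> borel_measurable borel"
  shows "weighted_nn_integral {l\<in>I. r l > 0} N r f
      = weighted_nn_integral {l\<in>I. r l < 0} N (\<lambda>l. - r l) f"
  using f
proof (induction rule: borel_measurable_induct)
  case (cong f g)
  then have "f = g" by auto
  then show ?case using cong by simp
next
  case (set A)
  have "(\<integral>\<^sup>+x. indicator A x \<partial>N l) = emeasure (N l) A" if "l \<in> I" for l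
    using sets[OF that] set by simp
  then show ?case
    using weighted_emeasure_balance[OF I sets finb rel set] unfolding weighted_nn_integral_def
    by (smt (verit) mem_Collect_eq sum.cong)
next
  case (mult u c)
  have m: "\<And>l. l \<in> I \<Longrightarrow> u \<in> borel_measurable (N l)" using mult(2) sets measurable_borel_cong by metis
  have "weighted_nn_integral {l\<in>I. r l > 0} N r (\<lambda>x. c * u x)
      = c * weighted_nn_integral {l\<in>I. r l > 0} N r u"
    by (rule weighted_nn_integral_cmult) (use m in blast)
  also have "\<dots> = c * weighted_nn_integral {l\<in>I. r l < 0} N (\<lambda>l. - r l) u" using mult.IH by simp
  also have "\<dots> = weighted_nn_integral {l\<in>I. r l < 0} N (\<lambda>l. - r l) (\<lambda>x. c * u x)"
    by (rule weighted_nn_integral_cmult[symmetric]) (use m in blast)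
  finally show ?case .
next
  case (add u v)
  have m: "\<And>l. l \<in> I \<Longrightarrow> u \<in> borel_measurable (N l)" "\<And>l. l \<in> I \<Longrightarrow> v \<in> borel_measurable (N l)"
    using \<open>u \<in> borel_measurable borel\<close> \<open>v \<in> borel_measurable borel\<close> sets measurable_borel_cong
      by metis+
  have "weighted_nn_integral {l\<in>I. r l > 0} N r (\<lambda>x. v x + u x)
      = weighted_nn_integral {l\<in>I. r l > 0} N r v + weighted_nn_integral {l\<in>I. r l > 0} N r u"
    by (rule weighted_nn_integral_add) (use m in blast)+
  also have "\<dots> = weighted_nn_integral {l\<in>I. r l < 0} N (\<lambda>l. - r l) v
      + weighted_nn_integral {l\<in>I. r l < 0} N (\<lambda>l. - r l) u" using add.IH by simp
  also have "\<dots> = weighted_nn_integral {l\<in>I. r l < 0} N (\<lambda>l. - r l) (\<lambda>x. v x + u x)"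
    by (rule weighted_nn_integral_add[symmetric]) (use m in blast)+
  finally show ?case .
next
  case (seq U)
  have m: "\<And>l i. l \<in> I \<Longrightarrow> U i \<in> borel_measurable (N l)" using seq(1) sets measurable_borel_cong
    by metis
  have "weighted_nn_integral {l\<in>I. r l > 0} N r (SUP i. U i)
      = (SUP i. weighted_nn_integral {l\<in>I. r l > 0} N r (U i))"
    by (rule weighted_nn_integral_SUP) (use m \<open>incseq U\<close> in blast)+
  also have "\<dots> = (SUP i. weighted_nn_integral {l\<in>I. r l < 0} N (\<lambda>l. - r l) (U i))" using seq.IH
    by simp
  also have "\<dots> = weighted_nn_integral {l\<in>I. r l < 0} N (\<lambda>l. - r l) (SUP i. U i)"
    by (rule weighted_nn_integral_SUP[symmetric]) (use m \<open>incseq U\<close> in blast)+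
  finally show ?case .
qed

lemma enn2real_weighted_nn_integral:
  assumes J: "finite J" and a: "\<And>l. l \<in> J \<Longrightarrow> a l \<ge> 0" and fin: "\<And>l. l \<in> J \<Longrightarrow> (\<integral>\<^sup>+x. f x \<partial>N l) < \<infinity>"
  shows "enn2real (weighted_nn_integral J N a f) = (\<Sum>l\<in>J. a l * enn2real (\<integral>\<^sup>+x. f x \<partial>N l))"
  unfolding weighted_nn_integral_def
proof (subst enn2real_sum)
  show "\<And>l. l \<in> J \<Longrightarrow> ennreal (a l) * (\<integral>\<^sup>+x. f x \<partial>N l) < top" using fin
    by (simp add: ennreal_mult_less_top)
  show "sum (enn2real \<circ> (\<lambda>l. ennreal (a l) * (\<integral>\<^sup>+x. f x \<partial>N l))) J
      = (\<Sum>l\<in>J. a l * enn2real (\<integral>\<^sup>+x. f x \<partial>N l))"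
    using a by (intro sum.cong) (auto simp: enn2real_mult)
qed

lemma nn_integral_linear_relation:
  fixes N :: "'i \<Rightarrow> real measure" and r :: "'i \<Rightarrow> real" and s :: "real \<Rightarrow> real"
  assumes I: "finite I" and sets: "\<And>l. l \<in> I \<Longrightarrow> sets (N l) = sets borel"
    and finb: "\<And>l S. l \<in> I \<Longrightarrow> S \<in> sets borel \<Longrightarrow> bounded S \<Longrightarrow> emeasure (N l) S < \<infinity>"
    and rel: "\<And>S. S \<in> sets borel \<Longrightarrow> bounded S \<Longrightarrow> (\<Sum>l\<in>I. r l * measure (N l) S) = 0"
    and s: "s \<in> borel_measurable borel"
    and fin: "\<And>l. l \<in> I \<Longrightarrow> (\<integral>\<^sup>+x. ennreal (s x) \<partial>N l) < \<infinity>"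
  shows "(\<Sum>l\<in>I. r l * enn2real (\<integral>\<^sup>+x. ennreal (s x) \<partial>N l)) = 0"
proof -
  let ?P = "{l\<in>I. r l > 0}" and ?Q = "{l\<in>I. r l < 0}"
  have "weighted_nn_integral ?P N r (\<lambda>x. ennreal (s x))
      = weighted_nn_integral ?Q N (\<lambda>l. - r l) (\<lambda>x. ennreal (s x))"
    using s by (intro weighted_nn_integral_balance[OF I sets finb rel]) auto
  then have "enn2real (weighted_nn_integral ?P N r (\<lambda>x. ennreal (s x)))
      = enn2real (weighted_nn_integral ?Q N (\<lambda>l. - r l) (\<lambda>x. ennreal (s x)))"
    by simp
  then have "(\<Sum>l\<in>?P. r l * enn2real (\<integral>\<^sup>+x. ennreal (s x) \<partial>N l))
      = (\<Sum>l\<in>?Q. - r l * enn2real (\<integral>\<^sup>+x. ennreal (s x) \<partial>N l))"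
    using I fin by (subst (asm) (1 2) enn2real_weighted_nn_integral) auto
  then show ?thesis
    using sum_split_sign[OF I, of r "\<lambda>l. enn2real (\<integral>\<^sup>+x. ennreal (s x) \<partial>N l)"]
    by (simp add: sum_negf)
qed

lemma integral_linear_relation_real:
  fixes N :: "'i \<Rightarrow> real measure" and r :: "'i \<Rightarrow> real" and g :: "real \<Rightarrow> real"
  assumes I: "finite I" and sets: "\<And>l. l \<in> I \<Longrightarrow> sets (N l) = sets borel"
    and finb: "\<And>l S. l \<in> I \<Longrightarrow> S \<in> sets borel \<Longrightarrow> bounded S \<Longrightarrow> emeasure (N l) S < \<infinity>"
    and rel: "\<And>S. S \<in> sets borel \<Longrightarrow> bounded S \<Longrightarrow> (\<Sum>l\<in>I. r l * measure (N l) S) = 0"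
    and g: "\<And>l. l \<in> I \<Longrightarrow> integrable (N l) g"
  shows "(\<Sum>l\<in>I. r l * integral\<^sup>L (N l) g) = 0"
proof (cases "I = {}")
  case False
  then obtain l0 where l0: "l0 \<in> I" by blast
  have gm: "g \<in> borel_measurable borel"
    using borel_measurable_integrable[OF g[OF l0]]
    unfolding measurable_cong_sets[OF sets[OF l0] refl, of borel] .
  have fin: "(\<integral>\<^sup>+x. ennreal (s x) \<partial>N l) < \<infinity>" if "s = g \<or> s = (\<lambda>x. - g x)" "l \<in> I" for s l
  proof -
    have "(\<integral>\<^sup>+x. ennreal (s x) \<partial>N l) \<le> (\<integral>\<^sup>+x. ennreal (norm (g x)) \<partial>N l)"
      using that by (intro nn_integral_mono) (auto intro: ennreal_leI)
    also have "\<dots> < \<infinity>" using g[OF that(2)] unfolding integrable_iff_bounded by blast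
    finally show ?thesis .
  qed
  have pos: "(\<Sum>l\<in>I. r l * enn2real (\<integral>\<^sup>+x. ennreal (g x) \<partial>N l)) = 0"
    by (rule nn_integral_linear_relation[OF I sets finb rel gm]) (use fin[of g] in auto)
  have neg: "(\<Sum>l\<in>I. r l * enn2real (\<integral>\<^sup>+x. ennreal (- g x) \<partial>N l)) = 0"
    by (rule nn_integral_linear_relation[OF I sets finb rel]) (use gm fin in auto)
  have "(\<Sum>l\<in>I. r l * integral\<^sup>L (N l) g) = (\<Sum>l\<in>I. r l * enn2real (\<integral>\<^sup>+x. ennreal (g x) \<partial>N l))
      - (\<Sum>l\<in>I. r l * enn2real (\<integral>\<^sup>+x. ennreal (- g x) \<partial>N l))"
    using g unfolding sum_subtractf[symmetric]
    by (intro sum.cong refl) (simp add: real_lebesgue_integral_def right_diff_distrib)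
  then show ?thesis using pos neg by simp
qed simp

lemma integral_linear_relation:
  fixes N :: "'i \<Rightarrow> real measure" and a :: "'i \<Rightarrow> complex" and g :: "real \<Rightarrow> complex"
  assumes I: "finite I" and sets: "\<And>l. l \<in> I \<Longrightarrow> sets (N l) = sets borel"
    and finb: "\<And>l S. l \<in> I \<Longrightarrow> S \<in> sets borel \<Longrightarrow> bounded S \<Longrightarrow> emeasure (N l) S < \<infinity>"
    and rel: "\<And>S. S \<in> sets borel \<Longrightarrow> bounded S \<Longrightarrow> (\<Sum>l\<in>I. a l * complex_of_real (measure (N l) S)) = 0"
    and g: "\<And>l. l \<in> I \<Longrightarrow> integrable (N l) g"
  shows "(\<Sum>l\<in>I. a l * integral\<^sup>L (N l) g) = 0"
proof -
  have relR: "(\<Sum>l\<in>I. Re (a l) * measure (N l) S) = 0" if "S \<in> sets borel" "bounded S" for S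
    using arg_cong[OF rel[OF that], of Re] by (simp add: Re_sum)
  have relI: "(\<Sum>l\<in>I. Im (a l) * measure (N l) S) = 0" if "S \<in> sets borel" "bounded S" for S
    using arg_cong[OF rel[OF that], of Im] by (simp add: Im_sum)
  have gR: "\<And>l. l \<in> I \<Longrightarrow> integrable (N l) (\<lambda>x. Re (g x))"
    and gI: "\<And>l. l \<in> I \<Longrightarrow> integrable (N l) (\<lambda>x. Im (g x))"
    by (intro integrable_Re g, assumption) (intro integrable_Im g, assumption)
  have iR0: "integral\<^sup>L (N l) (\<lambda>x. Re (g x)) = Re (integral\<^sup>L (N l) g)" if "l \<in> I" for l
    by (rule integral_Re[OF g[OF that]])
  have iI0: "integral\<^sup>L (N l) (\<lambda>x. Im (g x)) = Im (integral\<^sup>L (N l) g)" if "l \<in> I" for l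
    by (rule integral_Im[OF g[OF that]])
  have iR: "(\<Sum>l\<in>I. c l * integral\<^sup>L (N l) (\<lambda>x. Re (g x))) = (\<Sum>l\<in>I. c l * Re (integral\<^sup>L (N l) g))"
    for c
    by (rule sum.cong[OF refl]) (simp add: iR0)
  have iI: "(\<Sum>l\<in>I. c l * integral\<^sup>L (N l) (\<lambda>x. Im (g x))) = (\<Sum>l\<in>I. c l * Im (integral\<^sup>L (N l) g))"
    for c
    by (rule sum.cong[OF refl]) (simp add: iI0)
  have 1: "(\<Sum>l\<in>I. Re (a l) * Re (integral\<^sup>L (N l) g)) = 0"
    using integral_linear_relation_real[OF I sets finb relR gR] unfolding iR .
  have 2: "(\<Sum>l\<in>I. Re (a l) * Im (integral\<^sup>L (N l) g)) = 0"
    using integral_linear_relation_real[OF I sets finb relR gI] unfolding iI .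
  have 3: "(\<Sum>l\<in>I. Im (a l) * Re (integral\<^sup>L (N l) g)) = 0"
    using integral_linear_relation_real[OF I sets finb relI gR] unfolding iR .
  have 4: "(\<Sum>l\<in>I. Im (a l) * Im (integral\<^sup>L (N l) g)) = 0"
    using integral_linear_relation_real[OF I sets finb relI gI] unfolding iI .
  have "Re (\<Sum>l\<in>I. a l * integral\<^sup>L (N l) g)
      = (\<Sum>l\<in>I. Re (a l) * Re (integral\<^sup>L (N l) g)) - (\<Sum>l\<in>I. Im (a l) * Im (integral\<^sup>L (N l) g))"
    unfolding Re_sum sum_subtractf[symmetric] by simp
  moreover have "Im (\<Sum>l\<in>I. a l * integral\<^sup>L (N l) g)
      = (\<Sum>l\<in>I. Re (a l) * Im (integral\<^sup>L (N l) g)) + (\<Sum>l\<in>I. Im (a l) * Re (integral\<^sup>L (N l) g))"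
    unfolding Im_sum sum.distrib[symmetric] by (simp add: add.commute)
  ultimately show ?thesis using 1 2 3 4 by (simp add: complex_eq_iff)
qed

text \<open>The polarization identity for \<open>\<langle>c, \<Omega>(S) c\<rangle>\<close> is a linear relation between finitely many
  measures: index \<open>None\<close> stands for \<open>\<langle>c, \<Omega> c\<rangle>\<close> itself (coefficient \<open>-1\<close>), index \<open>Some (j, k, p)\<close>
  for \<open>\<langle>v, \<Omega> v\<rangle>\<close> with \<open>v = e\<^sub>j + i\<^sup>p e\<^sub>k\<close>.\<close>

definition polar_vec :: "'n::finite \<Rightarrow> 'n \<Rightarrow> nat \<Rightarrow> complex^'n" where
  "polar_vec j k p = axis j 1 + (\<i> ^ p) *s axis k 1"

definition polar_index :: "('n::finite \<times> 'n \<times> nat) option set" where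
  "polar_index = insert None (Some ` (UNIV \<times> UNIV \<times> {..<4}))"

lemma polar_index_finite: "finite polar_index" unfolding polar_index_def by simp

lemma sum_polar_index: "(\<Sum>l\<in>polar_index. H l)
    = H None + (\<Sum>j\<in>UNIV. \<Sum>k\<in>UNIV. \<Sum>p<4. H (Some (j, k, p)))"
proof -
  have "(\<Sum>l\<in>polar_index. H l) = H None + (\<Sum>l\<in>Some ` (UNIV \<times> UNIV \<times> {..<4}). H l)"
    unfolding polar_index_def by (subst sum.insert) auto
  also have "(\<Sum>l\<in>Some ` (UNIV \<times> UNIV \<times> {..<4::nat}). H l)
      = (\<Sum>x\<in>UNIV \<times> UNIV \<times> {..<4::nat}. H (Some x))"
    by (subst sum.reindex) auto
  also have "\<dots> = (\<Sum>j\<in>UNIV. \<Sum>k\<in>UNIV. \<Sum>p<4. H (Some (j, k, p)))"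
    by (simp add: sum.cartesian_product)
  finally show ?thesis .
qed

context
  fixes Om :: "real set \<Rightarrow> complex^'n::finite^'n"
  assumes mm: "matrix_measure Om"
begin

definition polar_measure :: "complex^'n \<Rightarrow> ('n \<times> 'n \<times> nat) option \<Rightarrow> real measure" where
  "polar_measure c l =
    (case l of None \<Rightarrow> qmeasure Om c | Some (j, k, p) \<Rightarrow> qmeasure Om (polar_vec j k p))"

definition polar_coeff :: "complex^'n \<Rightarrow> ('n \<times> 'n \<times> nat) option \<Rightarrow> complex" where
  "polar_coeff c l = (case l of None \<Rightarrow> -1 | Some (j, k, p) \<Rightarrow> cnj (c$j) * c$k * cnj (\<i> ^ p) / 4)"

lemma polar_measure_None[simp]: "polar_measure c None = qmeasure Om c"
  and polar_measure_Some[simp]: "polar_measure c (Some (j, k, p)) = qmeasure Om (polar_vec j k p)"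
  and polar_coeff_None[simp]: "polar_coeff c None = -1"
    unfolding polar_measure_def polar_coeff_def by auto

lemma polar_coeff_sum: "(\<Sum>j\<in>UNIV. \<Sum>k\<in>UNIV. \<Sum>p<4. polar_coeff c (Some (j, k, p))
    * cip (A *v polar_vec j k p) (polar_vec j k p)) = cip (A *v c) c"
proof -
  have "(\<Sum>p<4. polar_coeff c (Some (j, k, p)) * cip (A *v polar_vec j k p) (polar_vec j k p))
      = cnj (c$j) * c$k * A$j$k" for j k
  proof -
    have "(\<Sum>p<4. polar_coeff c (Some (j, k, p)) * cip (A *v polar_vec j k p) (polar_vec j k p)) =
      cnj (c$j) * c$k * ((1/4) * (\<Sum>p<(4::nat). cnj (\<i> ^ p) * cip (A *v (axis j 1 + (\<i> ^ p) *s axis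
        k 1)) (axis j 1 + (\<i> ^ p) *s axis k 1)))"
      unfolding polar_coeff_def polar_vec_def by (simp add: sum_distrib_left ac_simps)
    then show ?thesis unfolding polarization .
  qed
  then show ?thesis unfolding cip_mv_expand by simp
qed

lemma cip_mint:
  assumes g: "\<And>v. integrable (qmeasure Om v) g"
  shows "cip (mint Om g *v c) c = integral\<^sup>L (qmeasure Om c) g"
proof -
  have sets: "\<And>l. l \<in> polar_index \<Longrightarrow> sets (polar_measure c l) = sets borel"
    unfolding polar_measure_def
    using sets_qmeasure[OF mm] by (auto split: option.splits)
  have finb: "\<And>l S. l \<in> polar_index \<Longrightarrow> S \<in> sets borel \<Longrightarrow> bounded S
      \<Longrightarrow> emeasure (polar_measure c l) S < \<infinity>"
    unfolding polar_measure_def using emeasure_qmeasure_bounded_finite[OF mm]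
      by (auto split: option.splits)
  have gi: "\<And>l. l \<in> polar_index \<Longrightarrow> integrable (polar_measure c l) g" unfolding polar_measure_def
    using g by (auto split: option.splits)
  have rel: "(\<Sum>l\<in>polar_index. polar_coeff c l * complex_of_real (measure (polar_measure c l) S))
      = 0" if S: "S \<in> sets borel" "bounded S" for S
  proof -
    have m: "complex_of_real (measure (qmeasure Om v) S) = cip (Om S *v v) v" for v
      using measure_qmeasure_bounded[OF mm S] qform_real[OF mm S] by simp
    show ?thesis unfolding sum_polar_index polar_measure_None polar_measure_Some polar_coeff_None
      m polar_coeff_sum by simp
  qed
  have "(\<Sum>l\<in>polar_index. polar_coeff c l * integral\<^sup>L (polar_measure c l) g) = 0"
    by (rule integral_linear_relation[OF polar_index_finite sets finb rel gi])
  moreover have "(\<Sum>l\<in>polar_index. polar_coeff c l * integral\<^sup>L (polar_measure c l) g)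
      = - integral\<^sup>L (qmeasure Om c) g + cip (mint Om g *v c) c"
  proof -
    have "(\<Sum>j\<in>UNIV. \<Sum>k\<in>UNIV. \<Sum>p<4. polar_coeff c (Some (j, k, p))
        * integral\<^sup>L (qmeasure Om (polar_vec j k p)) g) = cip (mint Om g *v c) c"
    proof -
      have "(\<Sum>p<4. polar_coeff c (Some (j, k, p)) * integral\<^sup>L (qmeasure Om (polar_vec j k p)) g)
          = cnj (c$j) * c$k * mint Om g $j$k" for j k
        unfolding polar_coeff_def polar_vec_def mint_def by (simp add: sum_distrib_left ac_simps)
      then show ?thesis unfolding cip_mv_expand by simp
    qed
    then show ?thesis unfolding sum_polar_index polar_measure_None polar_measure_Some
      polar_coeff_None by simp
  qed
  ultimately show ?thesis by (simp add: algebra_simps)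
qed

end

definition kernel_const :: "complex \<Rightarrow> real"
  where "kernel_const z = 2 + (1 + 2 * (Re z)\<^sup>2) / (Im z)\<^sup>2"

lemma cmod_sq_diff: "(cmod (complex_of_real y - z))\<^sup>2 = (y - Re z)\<^sup>2 + (Im z)\<^sup>2"
  by (simp add: cmod_power2)

lemma kernel_const_pos: "kernel_const z > 0" unfolding kernel_const_def
  by (simp add: add_pos_nonneg)

lemma one_plus_sq_le_kernel_const:
  assumes z: "Im z \<noteq> 0"
  shows "1 + y\<^sup>2 \<le> kernel_const z * (cmod (complex_of_real y - z))\<^sup>2"
proof -
  define a where "a = Re z"
  define b where "b = Im z"
  define t where "t = (y - a)\<^sup>2 + b\<^sup>2"
  have b2: "b\<^sup>2 > 0" using z unfolding b_def by simp
  have tb: "t \<ge> b\<^sup>2" unfolding t_def by simp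
  have y2: "y\<^sup>2 \<le> 2 * (y - a)\<^sup>2 + 2 * a\<^sup>2"
  proof -
    have "0 \<le> (y - 2 * a)\<^sup>2" by simp
    then show ?thesis by (simp add: power2_eq_square algebra_simps)
  qed
  have "1 + 2 * a\<^sup>2 \<le> (1 + 2 * a\<^sup>2) / b\<^sup>2 * t"
  proof -
    have "(1 + 2 * a\<^sup>2) / b\<^sup>2 * t \<ge> (1 + 2 * a\<^sup>2) / b\<^sup>2 * b\<^sup>2"
      using tb b2 by (intro mult_left_mono) (auto intro: divide_nonneg_pos add_nonneg_nonneg)
    then show ?thesis using b2 by simp
  qed
  moreover have "2 * (y - a)\<^sup>2 \<le> 2 * t" unfolding t_def by simp
  ultimately have "1 + y\<^sup>2 \<le> (2 + (1 + 2 * a\<^sup>2) / b\<^sup>2) * t" using y2 by (simp add: algebra_simps)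
  then show ?thesis unfolding kernel_const_def t_def a_def b_def cmod_sq_diff by simp
qed

lemma cmod_real_minus_nonreal_pos: "Im z \<noteq> 0 \<Longrightarrow> cmod (complex_of_real y - z) > 0"
  by (auto simp: complex_eq_iff)

lemma inv_cmod_sq_le:
  assumes z: "Im z \<noteq> 0"
  shows "1 / (cmod (complex_of_real y - z))\<^sup>2 \<le> kernel_const z / (1 + y\<^sup>2)"
proof -
  have p: "(cmod (complex_of_real y - z))\<^sup>2 > 0" using cmod_real_minus_nonreal_pos[OF z] by simp
  have q: "1 + y\<^sup>2 > 0" by (simp add: add_pos_nonneg)
  show ?thesis using one_plus_sq_le_kernel_const[OF z, of y] p q by (simp add: field_simps)
qed

definition nev_kernel :: "complex \<Rightarrow> real \<Rightarrow> complex" where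
  "nev_kernel z y = 1 / (complex_of_real y - z) - complex_of_real (y / (1 + y\<^sup>2))"

definition cross_kernel :: "complex \<Rightarrow> complex \<Rightarrow> real \<Rightarrow> complex" where
  "cross_kernel z w y = 1 / ((complex_of_real y - z) * (complex_of_real y - cnj w))"

lemma nev_kernel_measurable[measurable]: "nev_kernel z \<in> borel_measurable borel"
  unfolding nev_kernel_def by measurable

lemma cross_kernel_measurable[measurable]: "cross_kernel z w \<in> borel_measurable borel"
  unfolding cross_kernel_def by measurable

lemma nev_kernel_eq:
  assumes z: "Im z \<noteq> 0"
  shows "nev_kernel z y
      = (1 + complex_of_real y * z) / ((complex_of_real y - z) * complex_of_real (1 + y\<^sup>2))"
proof -
  have d: "complex_of_real y - z \<noteq> 0" using cmod_real_minus_nonreal_pos[OF z, of y] by auto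
  have e: "complex_of_real (1 + y\<^sup>2) \<noteq> 0"
    by (metis add_pos_nonneg of_real_eq_0_iff zero_le_power2 zero_less_one less_irrefl)
  show ?thesis unfolding nev_kernel_def using d e by (simp add: field_simps power2_eq_square)
qed

lemma cmod_one_plus_mult_sq_le: "(cmod (1 + complex_of_real y * z))\<^sup>2
    \<le> (1 + y\<^sup>2) * (1 + (cmod z)\<^sup>2)"
proof -
  have "(1 + y\<^sup>2) * (1 + (cmod z)\<^sup>2) - (cmod (1 + complex_of_real y * z))\<^sup>2
      = (y - Re z)\<^sup>2 + (Im z)\<^sup>2"
    unfolding cmod_power2 by (simp add: power2_eq_square algebra_simps)
  moreover have "0 \<le> (y - Re z)\<^sup>2 + (Im z)\<^sup>2" by simp
  ultimately show ?thesis by linarith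
qed

lemma nev_kernel_bound:
  assumes z: "Im z \<noteq> 0"
  shows "cmod (nev_kernel z y) \<le> sqrt ((1 + (cmod z)\<^sup>2) * kernel_const z) / (1 + y\<^sup>2)"
proof -
  have q: "1 + y\<^sup>2 > 0" by (simp add: add_pos_nonneg)
  have p: "(cmod (complex_of_real y - z))\<^sup>2 > 0" using cmod_real_minus_nonreal_pos[OF z] by simp
  have X: "(1 + (cmod z)\<^sup>2) * kernel_const z \<ge> 0" using kernel_const_pos[of z]
    by (simp add: add_nonneg_nonneg)
  have n: "cmod (complex_of_real (1 + y\<^sup>2)) = 1 + y\<^sup>2" using q
    by (simp only: norm_of_real abs_of_pos)
  have cancel: "\<And>a b D :: real. a > 0 \<Longrightarrow> D > 0 \<Longrightarrow> (a * b) / (D * a\<^sup>2) = b * (1 / D) / a"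
    by (simp add: power2_eq_square field_simps)
  have "(cmod (nev_kernel z y))\<^sup>2
      = (cmod (1 + complex_of_real y * z))\<^sup>2 / ((cmod (complex_of_real y - z))\<^sup>2 * (1 + y\<^sup>2)\<^sup>2)"
    unfolding nev_kernel_eq[OF z] norm_divide norm_mult n
      by (simp only: power_divide power_mult_distrib)
  also have "\<dots> \<le> ((1 + y\<^sup>2) * (1 + (cmod z)\<^sup>2)) / ((cmod (complex_of_real y - z))\<^sup>2 * (1 + y\<^sup>2)\<^sup>2)"
    by (rule divide_right_mono[OF cmod_one_plus_mult_sq_le]) (use p q in simp)
  also have "\<dots> = (1 + (cmod z)\<^sup>2) * (1 / (cmod (complex_of_real y - z))\<^sup>2) / (1 + y\<^sup>2)"
    by (rule cancel[OF q p])
  also have "\<dots> \<le> (1 + (cmod z)\<^sup>2) * (kernel_const z / (1 + y\<^sup>2)) / (1 + y\<^sup>2)"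
  proof (rule divide_right_mono[OF mult_left_mono])
    show "1 / (cmod (complex_of_real y - z))\<^sup>2 \<le> kernel_const z / (1 + y\<^sup>2)"
      by (rule inv_cmod_sq_le[OF z])
    show "0 \<le> 1 + (cmod z)\<^sup>2" by (simp add: add_nonneg_nonneg)
    show "0 \<le> 1 + y\<^sup>2" using q by simp
  qed
  also have "\<dots> = ((1 + (cmod z)\<^sup>2) * kernel_const z) / (1 + y\<^sup>2)\<^sup>2" by (simp add: power2_eq_square)
  also have "\<dots> = (sqrt ((1 + (cmod z)\<^sup>2) * kernel_const z) / (1 + y\<^sup>2))\<^sup>2"
    using X by (simp only: power_divide real_sqrt_pow2)
  finally have "(cmod (nev_kernel z y))\<^sup>2
      \<le> (sqrt ((1 + (cmod z)\<^sup>2) * kernel_const z) / (1 + y\<^sup>2))\<^sup>2" .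
  moreover have "0 \<le> sqrt ((1 + (cmod z)\<^sup>2) * kernel_const z) / (1 + y\<^sup>2)" using q X
    by (intro divide_nonneg_pos) auto
  ultimately show ?thesis by (rule power2_le_imp_le)
qed

lemma cross_kernel_bound:
  assumes z: "Im z \<noteq> 0" and w: "Im w \<noteq> 0"
  shows "cmod (cross_kernel z w y) \<le> (kernel_const z + kernel_const (cnj w)) / (1 + y\<^sup>2)"
proof -
  have w': "Im (cnj w) \<noteq> 0" using w by simp
  define p where "p = 1 / cmod (complex_of_real y - z)"
  define q where "q = 1 / cmod (complex_of_real y - cnj w)"
  have "cmod (cross_kernel z w y) = p * q" unfolding cross_kernel_def p_def q_def
    by (simp add: norm_divide norm_mult)
  also have "\<dots> \<le> p\<^sup>2 + q\<^sup>2"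
  proof -
    have "0 \<le> (p - q)\<^sup>2" by simp
    moreover have "0 \<le> p * q" unfolding p_def q_def by simp
    ultimately show ?thesis by (simp add: power2_eq_square algebra_simps)
  qed
  also have "p\<^sup>2 \<le> kernel_const z / (1 + y\<^sup>2)" using inv_cmod_sq_le[OF z, of y] unfolding p_def
    by (simp add: power_divide)
  also have "q\<^sup>2 \<le> kernel_const (cnj w) / (1 + y\<^sup>2)" using inv_cmod_sq_le[OF w', of y]
    unfolding q_def by (simp add: power_divide)
  also have "kernel_const z / (1 + y\<^sup>2) + kernel_const (cnj w) / (1 + y\<^sup>2)
      = (kernel_const z + kernel_const (cnj w)) / (1 + y\<^sup>2)"
    by (rule add_divide_distrib[symmetric])
  finally show ?thesis by simp
qed

definition inv_dist_sq :: "real \<Rightarrow> real \<Rightarrow> real \<Rightarrow> real"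
  where "inv_dist_sq x e y = 1 / ((y - x)\<^sup>2 + e\<^sup>2)"

definition eps :: "nat \<Rightarrow> real" where "eps k = 1 / (real k + 1)"

definition resolvent_gap_sq :: "real \<Rightarrow> real \<Rightarrow> real \<Rightarrow> real \<Rightarrow> real" where
  "resolvent_gap_sq x e1 e2 y = (e1 - e2)\<^sup>2 / (((y - x)\<^sup>2 + e1\<^sup>2) * ((y - x)\<^sup>2 + e2\<^sup>2))"

lemma eps_pos: "eps k > 0" unfolding eps_def by simp

lemma eps_mono: "k \<le> m \<Longrightarrow> eps m \<le> eps k" unfolding eps_def by (simp add: frac_le)

lemma eps_lim: "eps \<longlonglongrightarrow> 0" unfolding eps_def using LIMSEQ_inverse_real_of_nat
  by (simp add: inverse_eq_divide add.commute)

lemma inv_dist_sq_measurable[measurable]: "inv_dist_sq x e \<in> borel_measurable borel"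
  unfolding inv_dist_sq_def by measurable

lemma cross_kernel_diag:
  assumes e: "e \<noteq> 0"
  shows "cross_kernel (Complex x e) (Complex x e) y = complex_of_real (inv_dist_sq x e y)"
proof -
  have "(complex_of_real y - Complex x e) * (complex_of_real y - cnj (Complex x e))
      = complex_of_real ((y - x)\<^sup>2 + e\<^sup>2)"
    by (simp add: complex_eq_iff power2_eq_square algebra_simps)
  then show ?thesis unfolding cross_kernel_def inv_dist_sq_def by simp
qed

lemma cross_kernel_gap:
  assumes e1: "e1 \<noteq> 0" and e2: "e2 \<noteq> 0"
  shows "cross_kernel (Complex x e1) (Complex x e1) y
      - cross_kernel (Complex x e1) (Complex x e2) y - cross_kernel (Complex x e2) (Complex x e1) y
     + cross_kernel (Complex x e2) (Complex x e2) y = complex_of_real (resolvent_gap_sq x e1 e2 y)"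
proof -
  define A where "A = complex_of_real y - Complex x e1"
  define B where "B = complex_of_real y - Complex x e2"
  have A0: "A \<noteq> 0" unfolding A_def using e1 by (simp add: complex_eq_iff)
  have B0: "B \<noteq> 0" unfolding B_def using e2 by (simp add: complex_eq_iff)
  have cA: "complex_of_real y - cnj (Complex x e1) = cnj A" unfolding A_def by simp
  have cB: "complex_of_real y - cnj (Complex x e2) = cnj B" unfolding B_def by simp
  have "cross_kernel (Complex x e1) (Complex x e1) y
      - cross_kernel (Complex x e1) (Complex x e2) y - cross_kernel (Complex x e2) (Complex x e1) y
     + cross_kernel (Complex x e2) (Complex x e2) y = (1/A - 1/B) * cnj (1/A - 1/B)"
    unfolding cross_kernel_def cA cB unfolding A_def[symmetric] B_def[symmetric] using A0 B0
    by (simp add: field_simps)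
  also have "\<dots> = complex_of_real ((cmod (1/A - 1/B))\<^sup>2)" by (rule complex_norm_square[symmetric])
  also have "cmod (1/A - 1/B) = cmod (B - A) / (cmod A * cmod B)"
    using A0 B0 by (simp add: field_simps norm_divide norm_mult)
  also have "B - A = Complex 0 (e1 - e2)" unfolding A_def B_def by (simp add: complex_eq_iff)
  also have "(cmod (Complex 0 (e1 - e2)) / (cmod A * cmod B))\<^sup>2 = resolvent_gap_sq x e1 e2 y"
  proof -
    have "(cmod (Complex 0 (e1 - e2)))\<^sup>2 = (e1 - e2)\<^sup>2" by (simp add: cmod_power2)
    moreover have "(cmod A)\<^sup>2 = (y - x)\<^sup>2 + e1\<^sup>2" unfolding A_def cmod_sq_diff by simp
    moreover have "(cmod B)\<^sup>2 = (y - x)\<^sup>2 + e2\<^sup>2" unfolding B_def cmod_sq_diff by simp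
    ultimately show ?thesis unfolding resolvent_gap_sq_def
      by (simp add: power_divide power_mult_distrib)
  qed
  finally show ?thesis .
qed

lemma resolvent_gap_sq_le:
  assumes "0 < e2" "e2 \<le> e1"
  shows "resolvent_gap_sq x e1 e2 y \<le> inv_dist_sq x e2 y - inv_dist_sq x e1 y"
proof -
  define t where "t = (y - x)\<^sup>2"
  have t0: "t \<ge> 0" unfolding t_def by simp
  have p1: "t + e1\<^sup>2 > 0" and p2: "t + e2\<^sup>2 > 0" using assms t0 by (auto intro: add_nonneg_pos)
  have "(e1 - e2)\<^sup>2 \<le> e1\<^sup>2 - e2\<^sup>2"
  proof -
    have "(e1 - e2)\<^sup>2 = (e1 - e2) * (e1 - e2)" by (simp add: power2_eq_square)
    also have "\<dots> \<le> (e1 - e2) * (e1 + e2)" using assms by (intro mult_left_mono) auto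
    also have "\<dots> = e1\<^sup>2 - e2\<^sup>2" by (simp add: power2_eq_square algebra_simps)
    finally show ?thesis .
  qed
  then have "(e1 - e2)\<^sup>2 / ((t + e1\<^sup>2) * (t + e2\<^sup>2)) \<le> (e1\<^sup>2 - e2\<^sup>2) / ((t + e1\<^sup>2) * (t + e2\<^sup>2))"
    using p1 p2 by (intro divide_right_mono) auto
  also have "\<dots> = 1 / (t + e2\<^sup>2) - 1 / (t + e1\<^sup>2)" using p1 p2 by (simp add: field_simps)
  finally show ?thesis unfolding resolvent_gap_sq_def inv_dist_sq_def t_def .
qed

lemma inv_dist_sq_eps_mono: "k \<le> m \<Longrightarrow> inv_dist_sq x (eps k) y \<le> inv_dist_sq x (eps m) y"
proof -
  assume "k \<le> m"
  then have "eps m \<le> eps k" by (rule eps_mono)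
  then have "(eps m)\<^sup>2 \<le> (eps k)\<^sup>2" using eps_pos by (intro power_mono) (auto intro: less_imp_le)
  moreover have "0 < (y - x)\<^sup>2 + (eps m)\<^sup>2" using eps_pos[of m] by (intro add_nonneg_pos) auto
  ultimately show ?thesis unfolding inv_dist_sq_def by (intro divide_left_mono) auto
qed

lemma inv_dist_sq_nonneg: "e \<noteq> 0 \<Longrightarrow> inv_dist_sq x e y \<ge> 0" unfolding inv_dist_sq_def
  by (simp add: add_nonneg_nonneg)

lemma T_integrand_SUP: "(if y = x then \<infinity> else ennreal (1 / (x - y)\<^sup>2))
    = (SUP k. ennreal (inv_dist_sq x (eps k) y))"
proof -
  have inc: "incseq (\<lambda>k. ennreal (inv_dist_sq x (eps k) y))"
    unfolding incseq_def by (auto intro: ennreal_leI inv_dist_sq_eps_mono)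
  have lim: "(\<lambda>k. ennreal (inv_dist_sq x (eps k) y))
      \<longlonglongrightarrow> (if y = x then \<infinity> else ennreal (1 / (x - y)\<^sup>2))"
  proof (cases "y = x")
    case False
    have "(\<lambda>k. inv_dist_sq x (eps k) y) \<longlonglongrightarrow> 1 / ((y - x)\<^sup>2 + 0\<^sup>2)"
      unfolding inv_dist_sq_def using False by (intro tendsto_intros eps_lim) auto
    then have "(\<lambda>k. ennreal (inv_dist_sq x (eps k) y)) \<longlonglongrightarrow> ennreal (1 / (x - y)\<^sup>2)"
      by (intro tendsto_ennrealI) (simp add: power2_commute)
    then show ?thesis using False by simp
  next
    case True
    have e: "inv_dist_sq x (eps k) y = (real k + 1)\<^sup>2" for k
      unfolding inv_dist_sq_def eps_def True by (simp add: power_divide)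
    have "filterlim (\<lambda>k. (real k + 1)\<^sup>2) at_top sequentially"
      by real_asymp
    then have "(\<lambda>k. ennreal ((real k + 1)\<^sup>2)) \<longlonglongrightarrow> \<infinity>"
      by (simp add: ennreal_tendsto_top_eq_at_top)
    then show ?thesis using True e by simp
  qed
  show ?thesis using LIMSEQ_unique[OF lim LIMSEQ_SUP[OF inc]] .
qed

section \<open>The Nevanlinna representation of the Weyl function\<close>

lemma cip_mv_affine: "cip ((\<chi> i j. A$i$j + z * K$i$j + B$i$j) *v c) c
    = cip (A *v c) c + z * cip (K *v c) c + cip (B *v c) c"
  unfolding cip_mv_expand by (simp add: distrib_left sum.distrib sum_distrib_left ac_simps)

context
  fixes M :: "complex \<Rightarrow> complex^'n::finite^'n" and Om :: "real set \<Rightarrow> complex^'n^'n"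
  assumes assoc: "assoc_measure M Om"
begin

lemma assoc_measure_matrix_measure: "matrix_measure Om"
  using assoc unfolding assoc_measure_def by blast

lemma assoc_measure_integrable: "integrable (qmeasure Om v) (\<lambda>y. 1 / (1 + y\<^sup>2))"
  using assoc unfolding assoc_measure_def by blast

lemma integrable_if_bounded_by_inv_1_plus_sq:
  assumes h: "h \<in> borel_measurable borel"
  and b: "\<And>y. cmod (h y) \<le> B / (1 + y\<^sup>2)"
  shows "integrable (qmeasure Om v) h"
proof (rule Bochner_Integration.integrable_bound)
  show "integrable (qmeasure Om v) (\<lambda>y. B * (1 / (1 + y\<^sup>2)))" using assoc_measure_integrable
    by (rule integrable_mult_right)
  show "h \<in> borel_measurable (qmeasure Om v)"
    using h measurable_borel_cong[OF sets_qmeasure[OF assoc_measure_matrix_measure]] by blast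
  show "AE y in qmeasure Om v. norm (h y) \<le> norm (B * (1 / (1 + y\<^sup>2)))"
  proof (rule AE_I2)
    fix y
    have "cmod (h y) \<le> B / (1 + y\<^sup>2)" by (rule b)
    also have "\<dots> \<le> norm (B * (1 / (1 + y\<^sup>2)))"
    proof -
      have q: "0 < 1 + y\<^sup>2" by (simp add: add_pos_nonneg)
      have "B / (1 + y\<^sup>2) \<le> \<bar>B\<bar> / (1 + y\<^sup>2)" using q by (intro divide_right_mono) auto
      also have "\<dots> = norm (B * (1 / (1 + y\<^sup>2)))" using q by (simp add: abs_mult)
      finally show ?thesis .
    qed
    finally show "norm (h y) \<le> norm (B * (1 / (1 + y\<^sup>2)))" by simp
  qed
qed

lemma nev_kernel_integrable: "Im z \<noteq> 0 \<Longrightarrow> integrable (qmeasure Om v) (nev_kernel z)"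
  by (rule integrable_if_bounded_by_inv_1_plus_sq[OF nev_kernel_measurable nev_kernel_bound])

lemma cross_kernel_integrable: "Im z \<noteq> 0 \<Longrightarrow> Im w \<noteq> 0 \<Longrightarrow> integrable (qmeasure Om v) (cross_kernel z w)"
  by (rule integrable_if_bounded_by_inv_1_plus_sq[OF cross_kernel_measurable cross_kernel_bound])

lemma nev_kernel_diff:
  assumes z: "Im z \<noteq> 0" and w: "Im w \<noteq> 0"
  shows "nev_kernel z y - cnj (nev_kernel w y) = (z - cnj w) * cross_kernel z w y"
proof -
  have d1: "complex_of_real y - z \<noteq> 0" using cmod_real_minus_nonreal_pos[OF z, of y] by auto
  have d2: "complex_of_real y - cnj w \<noteq> 0" using cmod_real_minus_nonreal_pos[of "cnj w" y] w by auto
  have "cnj (nev_kernel w y) = 1 / (complex_of_real y - cnj w) - complex_of_real (y / (1 + y\<^sup>2))"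
    unfolding nev_kernel_def by simp
  then show ?thesis unfolding nev_kernel_def cross_kernel_def using d1 d2 by (simp add: field_simps)
qed

lemma weyl_form_diff:
  "\<exists>\<kappa>\<ge>0. \<forall>z w. Im z > 0 \<longrightarrow> Im w > 0 \<longrightarrow> cip (M z *v c) c - cnj (cip (M w *v c) c)
     = (z - cnj w) * (complex_of_real \<kappa> + integral\<^sup>L (qmeasure Om c) (cross_kernel z w))"
proof -
  let ?I = "\<lambda>f. integral\<^sup>L (qmeasure Om c) f"
  obtain C K where C: "hermitian_mat C" and K: "psd_mat K"
    and F: "\<And>z. Im z \<noteq> 0 \<Longrightarrow> M z = (\<chi> i j. C$i$j + z * K$i$j + mint Om (nev_kernel z) $i$j)"
    using assoc unfolding assoc_measure_def nev_kernel_def by blast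
  define \<kappa> where "\<kappa> = Re (cip (K *v c) c)"
  have k0: "\<kappa> \<ge> 0" unfolding \<kappa>_def by (rule psd_mat_nonneg[OF K])
  have kr: "cip (K *v c) c = complex_of_real \<kappa>" unfolding \<kappa>_def by (rule psd_mat_real[OF K])
  have Mf: "cip (M z *v c) c = cip (C *v c) c + z * complex_of_real \<kappa> + ?I (nev_kernel z)"
    if z: "Im z \<noteq> 0" for z
    unfolding F[OF z] cip_mv_affine kr
    using cip_mint[OF assoc_measure_matrix_measure nev_kernel_integrable[OF z]] by simp
  show ?thesis
  proof (intro exI[of _ \<kappa>] conjI allI impI k0)
    fix z w :: complex assume z: "Im z > 0" and w: "Im w > 0"
    then have z0: "Im z \<noteq> 0" and w0: "Im w \<noteq> 0" by auto
    have "?I (nev_kernel z) - cnj (?I (nev_kernel w))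
        = ?I (\<lambda>y. nev_kernel z y - cnj (nev_kernel w y))"
      using nev_kernel_integrable[OF z0] nev_kernel_integrable[OF w0] by (simp add: integral_diff)
    also have "\<dots> = ?I (\<lambda>y. (z - cnj w) * cross_kernel z w y)"
      using nev_kernel_diff[OF z0 w0] by simp
    finally have I: "?I (nev_kernel z) - cnj (?I (nev_kernel w))
        = (z - cnj w) * ?I (cross_kernel z w)"
      by simp
    have "cip (M z *v c) c - cnj (cip (M w *v c) c)
        = (cip (C *v c) c - cnj (cip (C *v c) c)) + (z - cnj w) * complex_of_real \<kappa>
          + (?I (nev_kernel z) - cnj (?I (nev_kernel w)))"
      unfolding Mf[OF z0] Mf[OF w0] by (simp add: algebra_simps)
    also have "\<dots> = (z - cnj w) * (complex_of_real \<kappa> + ?I (cross_kernel z w))"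
      unfolding I hermitian_mat_cip_real[OF C] by (simp add: algebra_simps)
    finally show "cip (M z *v c) c - cnj (cip (M w *v c) c)
        = (z - cnj w) * (complex_of_real \<kappa> + ?I (cross_kernel z w))" .
  qed
qed

end

section \<open>The \<open>\<gamma>\<close>-field\<close>

locale weyl_setting = sym_triplet sm ip Dom B G1 G2
  for sm :: "complex \<Rightarrow> 'h::ab_group_add \<Rightarrow> 'h" and ip Dom B and G1 G2 :: "'h \<Rightarrow> complex^'n::finite" +
  fixes M :: "complex \<Rightarrow> complex^'n^'n" and Om :: "real set \<Rightarrow> complex^'n^'n"
  assumes cns: "completely_nonselfadjoint sm ip Dom B"
    and weyl: "weyl_function sm ip Dom B G1 G2 M"
    and assoc: "assoc_measure M Om"
begin

lemma B_no_real_eigenvector: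
  assumes f: "f \<in> Dom" "B f = sm (complex_of_real x) f"
  shows "f = 0"
proof (rule ccontr)
  assume "f \<noteq> 0"
  then have "closed_subspace_h sm ip (range (\<lambda>a. sm a f))" "range (\<lambda>a. sm a f) \<noteq> {0}"
    using closed_subspace_line sm_one by (metis rangeI singletonD)+
  then show False
    using cns eigenline_reducing[OF f] eigenline_selfadj[OF f]
    unfolding completely_nonselfadjoint_def by blast
qed

lemma real_eigenvector_boundary_zero:
  assumes g: "g \<in> Dstar" "Bstar g = sm (complex_of_real x) g" "G1 g = 0" "G2 g = 0"
  shows "g = 0"
proof -
  have gD: "g \<in> Dom" using ker_boundary_maps_subset_Dom g by blast
  then have "B g = sm (complex_of_real x) g" using g Bstar_B by simp
  then show ?thesis using B_no_real_eigenvector gD by blast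
qed

lemma weyl_eq:
  assumes z: "Im z \<noteq> 0" and g: "g \<in> Dstar" "Bstar g = sm z g"
  shows "G2 g = M z *v G1 g"
proof -
  have "z \<in> resolvent_set sm ip DA1 Bstar" by (rule A1_resolvent[OF z])
  moreover have "g \<in> eigsp sm Dstar Bstar z" unfolding eigsp_def using g by blast
  ultimately show ?thesis using weyl unfolding weyl_function_def Let_def by blast
qed

definition gamma_field :: "complex \<Rightarrow> complex^'n \<Rightarrow> 'h" where
  "gamma_field z c = (SOME g. g \<in> Dstar \<and> Bstar g = sm z g \<and> G1 g = c)"

lemma gamma_field:
  assumes "Im z \<noteq> 0"
  shows "gamma_field z c \<in> Dstar" and "Bstar (gamma_field z c) = sm z (gamma_field z c)"
    and "G1 (gamma_field z c) = c"
proof -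
  let ?g = "gamma_field z c"
  have "?g \<in> Dstar \<and> Bstar ?g = sm z ?g \<and> G1 ?g = c"
    unfolding gamma_field_def using eigenvector_with_boundary_value[OF assms] by (rule someI_ex)
  then show "?g \<in> Dstar" "Bstar ?g = sm z ?g" "G1 ?g = c" by auto
qed

lemma gamma_field_lin:
  assumes z: "Im z \<noteq> 0"
  shows "gamma_field z (a *s c + b *s d) = sm a (gamma_field z c) + sm b (gamma_field z d)"
proof (rule eigenvector_boundary_value_unique[OF z])
  note gc = gamma_field[OF z, of c] and gd = gamma_field[OF z, of d]
    and g = gamma_field[OF z, of "a *s c + b *s d"]
  show "gamma_field z (a *s c + b *s d) \<in> Dstar" "Bstar (gamma_field z (a *s c + b *s d))
      = sm z (gamma_field z (a *s c + b *s d))" using g by auto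
  show "sm a (gamma_field z c) + sm b (gamma_field z d) \<in> Dstar" using Dstar_lin gc gd by blast
  have "Bstar (sm a (gamma_field z c) + sm b (gamma_field z d))
      = sm a (sm z (gamma_field z c)) + sm b (sm z (gamma_field z d))"
    using Dstar_lin(2)[OF gc(1) gd(1)] gc gd by simp
  also have "\<dots> = sm z (sm a (gamma_field z c) + sm b (gamma_field z d))"
    by (simp add: sm_assoc sm_add_r mult.commute)
  finally show "Bstar (sm a (gamma_field z c) + sm b (gamma_field z d))
      = sm z (sm a (gamma_field z c) + sm b (gamma_field z d))" .
  show "G1 (gamma_field z (a *s c + b *s d)) = G1 (sm a (gamma_field z c) + sm b (gamma_field z d))"
    using G_lin[OF gc(1) gd(1)] gc gd g by simp
qed

lemma gamma_field_green:
  assumes z: "Im z \<noteq> 0" and w: "Im w \<noteq> 0"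
  shows "(z - cnj w) * ip (gamma_field z c) (gamma_field w c)
      = cip (M z *v c) c - cnj (cip (M w *v c) c)"
proof -
  let ?gz = "gamma_field z c" and ?gw = "gamma_field w c"
  note gz = gamma_field[OF z, of c] and gw = gamma_field[OF w, of c]
  have "ip (Bstar ?gz) ?gw - ip ?gz (Bstar ?gw) = (z - cnj w) * ip ?gz ?gw"
    unfolding gz(2) gw(2) by (simp add: ip_sm_l ip_sm_r algebra_simps)
  moreover have "ip (Bstar ?gz) ?gw - ip ?gz (Bstar ?gw) = cip (M z *v c) c - cip c (M w *v c)"
    using green[OF gz(1) gw(1)] weyl_eq[OF z gz(1,2)] weyl_eq[OF w gw(1,2)] gz(3) gw(3) by simp
  ultimately show ?thesis using cip_sym[of c "M w *v c"] by simp
qed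

abbreviation "mu c \<equiv> qmeasure Om c"

text \<open>\<open>K_form c\<close> is \<open>\<langle>c, K c\<rangle>\<close> for the coefficient \<open>K\<close> of the linear term of \<open>M\<close>.\<close>
definition K_form :: "complex^'n \<Rightarrow> real" where
  "K_form c = (SOME \<kappa>. \<kappa> \<ge> 0 \<and> (\<forall>z w. Im z > 0 \<longrightarrow> Im w > 0 \<longrightarrow>
      cip (M z *v c) c - cnj (cip (M w *v c) c)
        = (z - cnj w) * (complex_of_real \<kappa> + integral\<^sup>L (mu c) (cross_kernel z w))))"

lemma K_form:
  shows "K_form c \<ge> 0"
    and "Im z > 0 \<Longrightarrow> Im w > 0 \<Longrightarrow> cip (M z *v c) c - cnj (cip (M w *v c) c)
      = (z - cnj w) * (complex_of_real (K_form c) + integral\<^sup>L (mu c) (cross_kernel z w))"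
proof -
  have "K_form c \<ge> 0 \<and> (\<forall>z w. Im z > 0 \<longrightarrow> Im w > 0 \<longrightarrow>
      cip (M z *v c) c - cnj (cip (M w *v c) c)
        = (z - cnj w) * (complex_of_real (K_form c) + integral\<^sup>L (mu c) (cross_kernel z w)))"
    unfolding K_form_def by (rule someI_ex[OF weyl_form_diff[OF assoc]])
  then show "K_form c \<ge> 0"
    and "Im z > 0 \<Longrightarrow> Im w > 0 \<Longrightarrow> cip (M z *v c) c - cnj (cip (M w *v c) c)
      = (z - cnj w) * (complex_of_real (K_form c) + integral\<^sup>L (mu c) (cross_kernel z w))"
    by auto
qed

lemma ip_gamma_field:
  assumes z: "Im z > 0" and w: "Im w > 0"
  shows "ip (gamma_field z c) (gamma_field w c)
      = complex_of_real (K_form c) + integral\<^sup>L (mu c) (cross_kernel z w)"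
proof -
  have nz: "z - cnj w \<noteq> 0"
  proof
    assume "z - cnj w = 0"
    then have "Im (z - cnj w) = 0" by simp
    then show False using z w by simp
  qed
  have "(z - cnj w) * ip (gamma_field z c) (gamma_field w c)
      = (z - cnj w) * (complex_of_real (K_form c) + integral\<^sup>L (mu c) (cross_kernel z w))"
    using gamma_field_green[of z w c] K_form(2)[of z w c] z w by simp
  then show ?thesis using nz by simp
qed

lemma inv_dist_sq_integrable:
  assumes e: "e \<noteq> 0"
  shows "integrable (mu c) (inv_dist_sq x e)"
proof -
  have "integrable (mu c) (\<lambda>y. Re (cross_kernel (Complex x e) (Complex x e) y))"
    using cross_kernel_integrable[OF assoc, of "Complex x e" "Complex x e" c] e
    by (intro integrable_Re) simp
  moreover have "(\<lambda>y. Re (cross_kernel (Complex x e) (Complex x e) y)) = inv_dist_sq x e"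
    using cross_kernel_diag[OF e] by auto
  ultimately show ?thesis by simp
qed

lemma nrm_gamma_field_sq:
  assumes e: "e > 0"
  shows "(nrm (gamma_field (Complex x e) c))\<^sup>2 = K_form c + integral\<^sup>L (mu c) (inv_dist_sq x e)"
proof -
  have r: "cross_kernel (Complex x e) (Complex x e) = (\<lambda>y. complex_of_real (inv_dist_sq x e y))"
    using cross_kernel_diag e by auto
  have "complex_of_real ((nrm (gamma_field (Complex x e) c))\<^sup>2)
      = ip (gamma_field (Complex x e) c) (gamma_field (Complex x e) c)"
    by (rule ip_self_nrm[symmetric])
  also have "\<dots> = complex_of_real (K_form c)
      + integral\<^sup>L (mu c) (cross_kernel (Complex x e) (Complex x e))"
    using ip_gamma_field e by simp
  also have "\<dots> = complex_of_real (K_form c + integral\<^sup>L (mu c) (inv_dist_sq x e))"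
    unfolding r by simp
  finally show ?thesis by (simp only: of_real_eq_iff)
qed

lemma nrm_gamma_field_diff_sq:
  assumes e1: "e1 > 0" and e2: "e2 > 0"
  shows "(nrm (gamma_field (Complex x e1) c - gamma_field (Complex x e2) c))\<^sup>2
      = integral\<^sup>L (mu c) (resolvent_gap_sq x e1 e2)"
proof -
  let ?z1 = "Complex x e1" and ?z2 = "Complex x e2"
  let ?g1 = "gamma_field ?z1 c" and ?g2 = "gamma_field ?z2 c"
  have i1: "Im ?z1 > 0" "Im ?z2 > 0" using e1 e2 by auto
  have ints: "integrable (mu c) (cross_kernel a b)" if "a \<in> {?z1, ?z2}" "b \<in> {?z1, ?z2}" for a b
    using that e1 e2 by (intro cross_kernel_integrable[OF assoc]) auto
  have "complex_of_real ((nrm (?g1 - ?g2))\<^sup>2) = ip (?g1 - ?g2) (?g1 - ?g2)"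
    by (rule ip_self_nrm[symmetric])
  also have "\<dots> = ip ?g1 ?g1 - ip ?g1 ?g2 - ip ?g2 ?g1 + ip ?g2 ?g2" by (simp add: ip_simps)
  also have "\<dots> = integral\<^sup>L (mu c) (cross_kernel ?z1 ?z1)
      - integral\<^sup>L (mu c) (cross_kernel ?z1 ?z2) - integral\<^sup>L (mu c) (cross_kernel ?z2 ?z1) +
        integral\<^sup>L (mu c) (cross_kernel ?z2 ?z2)"
    using ip_gamma_field[OF i1(1) i1(1)] ip_gamma_field[OF i1(1) i1(2)]
      ip_gamma_field[OF i1(2) i1(1)] ip_gamma_field[OF i1(2) i1(2)] by simp
  also have "\<dots> = integral\<^sup>L (mu c) (\<lambda>y. cross_kernel ?z1 ?z1 y - cross_kernel ?z1 ?z2 y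
      - cross_kernel ?z2 ?z1 y + cross_kernel ?z2 ?z2 y)"
    using ints by (simp add: integral_diff integral_add)
  also have "\<dots> = integral\<^sup>L (mu c) (\<lambda>y. complex_of_real (resolvent_gap_sq x e1 e2 y))"
    using cross_kernel_gap e1 e2 by simp
  also have "\<dots> = complex_of_real (integral\<^sup>L (mu c) (resolvent_gap_sq x e1 e2))" by simp
  finally show ?thesis by (simp only: of_real_eq_iff)
qed

lemma resolvent_gap_sq_integrable:
  assumes e1: "e1 > 0" and e2: "e2 > 0"
  shows "integrable (mu c) (resolvent_gap_sq x e1 e2)"
proof -
  let ?z1 = "Complex x e1" and ?z2 = "Complex x e2"
  have "integrable (mu c) (\<lambda>y. cross_kernel ?z1 ?z1 y - cross_kernel ?z1 ?z2 y
      - cross_kernel ?z2 ?z1 y + cross_kernel ?z2 ?z2 y)"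
    using e1 e2 by (intro Bochner_Integration.integrable_add Bochner_Integration.integrable_diff
      cross_kernel_integrable[OF assoc]) auto
  then have "integrable (mu c) (\<lambda>y. Re (cross_kernel ?z1 ?z1 y - cross_kernel ?z1 ?z2 y
      - cross_kernel ?z2 ?z1 y + cross_kernel ?z2 ?z2 y))"
    by (rule integrable_Re)
  moreover have "(\<lambda>y. Re (cross_kernel ?z1 ?z1 y - cross_kernel ?z1 ?z2 y - cross_kernel ?z2 ?z1 y
      + cross_kernel ?z2 ?z2 y)) = resolvent_gap_sq x e1 e2"
  proof (rule ext)
    fix y
    have n1: "e1 \<noteq> 0" and n2: "e2 \<noteq> 0" using e1 e2 by auto
    show "Re (cross_kernel ?z1 ?z1 y - cross_kernel ?z1 ?z2 y - cross_kernel ?z2 ?z1 y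
        + cross_kernel ?z2 ?z2 y) = resolvent_gap_sq x e1 e2 y"
      unfolding cross_kernel_gap[OF n1 n2] by simp
  qed
  ultimately show ?thesis by simp
qed

lemma T_integral_SUP: "(\<integral>\<^sup>+y. (if y = x then \<infinity> else ennreal (1 / (x - y)\<^sup>2)) \<partial>mu c)
    = (SUP k. ennreal (integral\<^sup>L (mu c) (inv_dist_sq x (eps k))))"
proof -
  have "(\<integral>\<^sup>+y. (if y = x then \<infinity> else ennreal (1 / (x - y)\<^sup>2)) \<partial>mu c)
      = (\<integral>\<^sup>+y. (SUP k. ennreal (inv_dist_sq x (eps k) y)) \<partial>mu c)"
    using T_integrand_SUP by simp
  also have "\<dots> = (SUP k. \<integral>\<^sup>+y. ennreal (inv_dist_sq x (eps k) y) \<partial>mu c)"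
  proof (rule nn_integral_monotone_convergence_SUP)
    show "incseq (\<lambda>k y. ennreal (inv_dist_sq x (eps k) y))" unfolding incseq_def le_fun_def
      by (auto intro!: ennreal_leI inv_dist_sq_eps_mono)
    show "\<And>k. (\<lambda>y. ennreal (inv_dist_sq x (eps k) y)) \<in> borel_measurable (mu c)"
    proof -
      fix k
      have "(\<lambda>y. ennreal (inv_dist_sq x (eps k) y)) \<in> borel_measurable borel" by measurable
      then show "(\<lambda>y. ennreal (inv_dist_sq x (eps k) y)) \<in> borel_measurable (mu c)"
        using measurable_borel_cong[OF sets_qmeasure[OF assoc_measure_matrix_measure[OF assoc]]]
        by blast
    qed
  qed
  also have "\<dots> = (SUP k. ennreal (integral\<^sup>L (mu c) (inv_dist_sq x (eps k))))"
  proof (rule SUP_cong[OF refl])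
    fix k
    have e: "eps k \<noteq> 0" using eps_pos[of k] by simp
    show "(\<integral>\<^sup>+y. ennreal (inv_dist_sq x (eps k) y) \<partial>mu c)
        = ennreal (integral\<^sup>L (mu c) (inv_dist_sq x (eps k)))"
      by (rule nn_integral_eq_integral[OF inv_dist_sq_integrable[OF e]])
        (simp add: inv_dist_sq_nonneg[OF e])
  qed
  finally show ?thesis .
qed

section \<open>A maximal eigenspace at \<open>x\<close> makes \<open>T(x)\<close> finite\<close>

lemma eigsp_ext_iff:
  "f \<in> eigsp sm (ext_dom ip Dom B G1 G2 D) Bstar z
      \<longleftrightarrow> f \<in> Dstar \<and> G2 f = D *v G1 f \<and> Bstar f = sm z f"
  unfolding eigsp_def ext_dom_def by blast

lemma eigsp_ext_subspace: "subspace_h sm (eigsp sm (ext_dom ip Dom B G1 G2 D) Bstar z)"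
proof -
  let ?E = "eigsp sm (ext_dom ip Dom B G1 G2 D) Bstar z"
  have comb: "sm a f + sm b g \<in> ?E" if "f \<in> ?E" "g \<in> ?E" for f g a b
  proof -
    have f: "f \<in> Dstar" "G2 f = D *v G1 f" "Bstar f = sm z f"
      and g: "g \<in> Dstar" "G2 g = D *v G1 g" "Bstar g = sm z g"
      using that eigsp_ext_iff by auto
    have "G2 (sm a f + sm b g) = D *v G1 (sm a f + sm b g)"
      using G_lin[OF f(1) g(1)] f g by (simp add: matrix_vector_right_distrib mv_scale)
    moreover have "Bstar (sm a f + sm b g) = sm z (sm a f + sm b g)"
      using Dstar_lin(2)[OF f(1) g(1)] f g by (simp add: sm_assoc sm_add_r mult.commute)
    ultimately show ?thesis using Dstar_lin(1)[OF f(1) g(1)] eigsp_ext_iff by blast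
  qed
  have "0 \<in> ?E"
    using zero_Dstar G_zero Dstar_lin(2)[OF zero_Dstar zero_Dstar, of 0 0] eigsp_ext_iff by simp
  then show ?thesis unfolding subspace_h_def using comb[of _ _ 1 1] comb[of _ 0 _ 0] by auto
qed

lemma eigsp_ext_real:
  assumes D: "hermitian_mat D" and f: "f \<in> eigsp sm (ext_dom ip Dom B G1 G2 D) Bstar z" "f \<noteq> 0"
  shows "z = complex_of_real (Re z)"
proof -
  have f': "f \<in> Dstar" "G2 f = D *v G1 f" "Bstar f = sm z f" using f eigsp_ext_iff by auto
  have "ip (Bstar f) f - ip f (Bstar f) = 0"
    using green[OF f'(1) f'(1)] f'(2) hermitian_mat_cip[OF D] by simp
  then have "(z - cnj z) * ip f f = 0" unfolding f'(3) by (simp add: ip_sm_l ip_sm_r algebra_simps)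
  then have "z = cnj z" using f(2) ip_self_eq_0 by auto
  then have "Im z = 0" by (metis cnj.simps(2) neg_equal_zero)
  then show ?thesis by (simp add: complex_eq_iff)
qed

lemma eigsp_ext_G1_inj:
  assumes "f \<in> eigsp sm (ext_dom ip Dom B G1 G2 D) Bstar (complex_of_real x)" "G1 f = 0"
  shows "f = 0"
  using assms real_eigenvector_boundary_zero[of f x] eigsp_ext_iff by simp

text \<open>\<open>\<gamma>(x + i e) (\<Gamma>\<^sub>1 f) - f\<close> lies in the domain of \<open>A\<^sub>1\<close> and is mapped by
  \<open>A\<^sub>1 - (x + i e)\<close> to \<open>i e f\<close>.\<close>
lemma nrm_gamma_field_le:
  assumes f: "f \<in> Dstar" "Bstar f = sm (complex_of_real x) f" and e: "e > 0"
  shows "nrm (gamma_field (Complex x e) (G1 f)) \<le> 2 * nrm f"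
proof -
  define z where "z = Complex x e"
  have z: "Im z \<noteq> 0" unfolding z_def using e by simp
  define g where "g = gamma_field z (G1 f)"
  note g = gamma_field[OF z, of "G1 f", folded g_def]
  have u: "g - f \<in> DA1" using g f Dstar_diff G_diff by auto
  have "Bstar (g - f) - sm z (g - f) = sm (z - complex_of_real x) f"
    using Bstar_diff[OF g(1) f(1)] g f by (simp add: sm_diff_r sm_diff_l)
  moreover have "cmod (z - complex_of_real x) = e" unfolding z_def using e by (simp add: cmod_def)
  ultimately have "e * nrm (g - f) \<le> e * nrm f"
    using A1_lower_bound[OF u, of z] e unfolding z_def by (simp add: nrm_sm)
  then have "nrm (g - f) \<le> nrm f" using e by simp
  then have "nrm g \<le> 2 * nrm f" using nrm_triangle[of "g - f" f] by simp
  then show ?thesis unfolding g_def z_def .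
qed

lemma T_finite_if_integrals_bounded:
  assumes "\<And>c. \<exists>C. \<forall>k. integral\<^sup>L (mu c) (inv_dist_sq x (eps k)) \<le> C"
  shows "T_finite Om x"
  unfolding T_finite_def
proof
  fix c
  obtain C where C: "\<And>k. integral\<^sup>L (mu c) (inv_dist_sq x (eps k)) \<le> C" using assms by blast
  have "(\<integral>\<^sup>+y. (if y = x then \<infinity> else ennreal (1 / (x - y)\<^sup>2)) \<partial>mu c) \<le> ennreal C"
    unfolding T_integral_SUP using C by (intro SUP_least ennreal_leI) auto
  also have "\<dots> < \<infinity>" by simp
  finally show "(\<integral>\<^sup>+y. (if y = x then \<infinity> else ennreal (1 / (x - y)\<^sup>2)) \<partial>mu c) < \<infinity>" .
qed

lemma sigma_p_max_imp_T_finite: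
  assumes D: "hermitian_mat D" and z: "z \<in> sigma_p_max sm (ext_dom ip Dom B G1 G2 D) Bstar CARD('n)"
  shows "z \<in> complex_of_real ` {x. T_finite Om x}"
proof -
  let ?E = "eigsp sm (ext_dom ip Dom B G1 G2 D) Bstar"
  have "?E z \<noteq> {0}" and dim: "hdim sm (?E z) CARD('n)" using z unfolding sigma_p_max_def by auto
  then obtain f0 where "f0 \<in> ?E z" "f0 \<noteq> 0"
    using eigsp_ext_subspace unfolding subspace_h_def by blast
  then obtain x where x: "z = complex_of_real x" using eigsp_ext_real[OF D] by blast
  have surj: "\<exists>f\<in>?E z. G1 f = c" for c
  proof (rule hdim_surj_if_inj[OF dim eigsp_ext_subspace])
    fix f g a b assume "f \<in> ?E z" "g \<in> ?E z"
    then show "G1 (sm a f + sm b g) = a *s G1 f + b *s G1 g" using G_lin(1) eigsp_ext_iff by blast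
  next
    fix f assume "f \<in> ?E z" "G1 f = 0"
    then show "f = 0" using eigsp_ext_G1_inj x by blast
  qed
  have "T_finite Om x"
  proof (rule T_finite_if_integrals_bounded)
    fix c
    obtain f where f: "f \<in> ?E z" "G1 f = c" using surj by blast
    then have f': "f \<in> Dstar" "Bstar f = sm (complex_of_real x) f" using x eigsp_ext_iff by auto
    have "integral\<^sup>L (mu c) (inv_dist_sq x (eps k)) \<le> (2 * nrm f)\<^sup>2" for k
    proof -
      have "integral\<^sup>L (mu c) (inv_dist_sq x (eps k)) \<le> (nrm (gamma_field (Complex x (eps k)) c))\<^sup>2"
        using nrm_gamma_field_sq[OF eps_pos[of k], of x c] K_form(1)[of c] by simp
      also have "\<dots> \<le> (2 * nrm f)\<^sup>2"
        using nrm_gamma_field_le[OF f' eps_pos] f(2) nrm_nonneg by (intro power_mono) auto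
      finally show ?thesis .
    qed
    then show "\<exists>C. \<forall>k. integral\<^sup>L (mu c) (inv_dist_sq x (eps k)) \<le> C" by blast
  qed
  then show ?thesis using x by blast
qed

end

section \<open>A finite \<open>T(x)\<close> makes \<open>x\<close> an eigenvalue of maximal multiplicity\<close>

lemma Complex_eps_lim: "(\<lambda>k. Complex x (eps k)) \<longlonglongrightarrow> complex_of_real x"
proof -
  have "(\<lambda>k. complex_of_real x + \<i> * complex_of_real (eps k))
      \<longlonglongrightarrow> complex_of_real x + \<i> * complex_of_real 0"
    by (intro tendsto_intros eps_lim)
  moreover have "\<And>k. Complex x (eps k) = complex_of_real x + \<i> * complex_of_real (eps k)"
    by (simp add: complex_eq_iff)
  ultimately show ?thesis by simp
qed

context weyl_setting
begin

abbreviation "gamma_seq x c k \<equiv> gamma_field (Complex x (eps k)) c"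

definition gamma_lim :: "real \<Rightarrow> complex^'n \<Rightarrow> 'h" where
  "gamma_lim x c = (SOME f. hconv ip (\<lambda>k. gamma_field (Complex x (eps k)) c) f)"

lemma inv_dist_sq_integral_le_T:
  assumes T: "T_finite Om x"
  shows "integral\<^sup>L (mu c) (inv_dist_sq x (eps k))
      \<le> enn2real (\<integral>\<^sup>+y. (if y = x then \<infinity> else ennreal (1 / (x - y)\<^sup>2)) \<partial>mu c)"
proof -
  let ?T = "\<integral>\<^sup>+y. (if y = x then \<infinity> else ennreal (1 / (x - y)\<^sup>2)) \<partial>mu c"
  have e: "eps k \<noteq> 0" using eps_pos[of k] by simp
  have nn: "integral\<^sup>L (mu c) (inv_dist_sq x (eps k)) \<ge> 0"
    using inv_dist_sq_nonneg[OF e] by (intro integral_nonneg_AE) auto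
  have "ennreal (integral\<^sup>L (mu c) (inv_dist_sq x (eps k)))
      \<le> (SUP k. ennreal (integral\<^sup>L (mu c) (inv_dist_sq x (eps k))))"
    by (rule SUP_upper) simp
  also have "\<dots> = ?T" by (rule T_integral_SUP[symmetric])
  finally have le: "ennreal (integral\<^sup>L (mu c) (inv_dist_sq x (eps k))) \<le> ?T" .
  have "?T < \<infinity>" using T unfolding T_finite_def by blast
  then have "enn2real (ennreal (integral\<^sup>L (mu c) (inv_dist_sq x (eps k)))) \<le> enn2real ?T"
    using le by (intro enn2real_mono) auto
  then show ?thesis using nn by simp
qed

lemma inv_dist_sq_integral_mono:
  assumes "k \<le> m"
  shows "integral\<^sup>L (mu c) (inv_dist_sq x (eps k)) \<le> integral\<^sup>L (mu c) (inv_dist_sq x (eps m))"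
proof -
  have "eps k \<noteq> 0" "eps m \<noteq> 0" using eps_pos by (auto simp: less_le)
  then show ?thesis
    using inv_dist_sq_eps_mono[OF assms] by (intro integral_mono inv_dist_sq_integrable)
qed

lemma nrm_gamma_seq_diff_sq:
  assumes km: "k \<le> m"
  shows "(nrm (gamma_seq x c k - gamma_seq x c m))\<^sup>2
      \<le> integral\<^sup>L (mu c) (inv_dist_sq x (eps m)) - integral\<^sup>L (mu c) (inv_dist_sq x (eps k))"
proof -
  have e: "eps k > 0" "eps m > 0" using eps_pos by auto
  have e': "eps k \<noteq> 0" "eps m \<noteq> 0" using e by auto
  have le: "eps m \<le> eps k" by (rule eps_mono[OF km])
  have "(nrm (gamma_seq x c k - gamma_seq x c m))\<^sup>2
      = integral\<^sup>L (mu c) (resolvent_gap_sq x (eps k) (eps m))"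
    by (rule nrm_gamma_field_diff_sq[OF e])
  also have "\<dots> \<le> integral\<^sup>L (mu c) (\<lambda>y. inv_dist_sq x (eps m) y - inv_dist_sq x (eps k) y)"
    by (rule integral_mono[OF resolvent_gap_sq_integrable[OF e]
      Bochner_Integration.integrable_diff[OF inv_dist_sq_integrable[OF e'(2)]
        inv_dist_sq_integrable[OF e'(1)]]])
       (rule resolvent_gap_sq_le[OF e(2) le])
  also have "\<dots> = integral\<^sup>L (mu c) (inv_dist_sq x (eps m))
      - integral\<^sup>L (mu c) (inv_dist_sq x (eps k))"
    by (rule Bochner_Integration.integral_diff[OF inv_dist_sq_integrable[OF e'(2)]
      inv_dist_sq_integrable[OF e'(1)]])
  finally show ?thesis .
qed

lemma gamma_seq_converges:
  assumes T: "T_finite Om x"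
  shows "hconv ip (\<lambda>k. gamma_seq x c k) (gamma_lim x c)"
proof -
  define F where "F k = integral\<^sup>L (mu c) (inv_dist_sq x (eps k))" for k
  have inc: "incseq F" unfolding incseq_def F_def using inv_dist_sq_integral_mono by blast
  have bd: "F k \<le> enn2real (\<integral>\<^sup>+y. (if y = x then \<infinity> else ennreal (1 / (x - y)\<^sup>2)) \<partial>mu c)" for k
    unfolding F_def by (rule inv_dist_sq_integral_le_T[OF T])
  obtain L where L: "F \<longlonglongrightarrow> L" using incseq_convergent[OF inc] bd by blast
  then have CF: "Cauchy F" by (rule LIMSEQ_imp_Cauchy)
  have "\<exists>f. hconv ip (\<lambda>k. gamma_seq x c k) f"
  proof (rule complete)
    fix e :: real assume e: "e > 0"
    obtain N where N0: "\<forall>m\<ge>N. \<forall>n\<ge>N. \<bar>F m - F n\<bar> < e\<^sup>2"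
      using CauchyD[OF CF, of "e\<^sup>2"] e by (auto simp: dist_real_def)
    then have N: "\<And>m n. m \<ge> N \<Longrightarrow> n \<ge> N \<Longrightarrow> \<bar>F m - F n\<bar> < e\<^sup>2" by blast
    have *: "nrm (gamma_seq x c k - gamma_seq x c m) < e" if "N \<le> k" "k \<le> m" for k m
    proof -
      have "(nrm (gamma_seq x c k - gamma_seq x c m))\<^sup>2 \<le> F m - F k"
        unfolding F_def by (rule nrm_gamma_seq_diff_sq[OF that(2)])
      also have "\<dots> < e\<^sup>2" using N[of m k] that by simp
      finally show ?thesis using e nrm_nonneg by (meson power_less_imp_less_base less_imp_le)
    qed
    show "\<exists>N. \<forall>m\<ge>N. \<forall>k\<ge>N. nrm (gamma_seq x c m - gamma_seq x c k) < e"
    proof (intro exI allI impI)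
      fix m k assume "N \<le> m" "N \<le> k"
      then show "nrm (gamma_seq x c m - gamma_seq x c k) < e"
        using *[of m k] *[of k m] nrm_diff_commute
        by (cases "m \<le> k") auto
    qed
  qed
  then show ?thesis unfolding gamma_lim_def by (rule someI_ex)
qed

lemma gamma_lim_eigenvector:
  assumes T: "T_finite Om x"
  shows "gamma_lim x c \<in> Dstar" and "Bstar (gamma_lim x c) = sm (complex_of_real x) (gamma_lim x c)"
proof -
  have conv: "hconv ip (\<lambda>k. gamma_seq x c k) (gamma_lim x c)" by (rule gamma_seq_converges[OF T])
  have iz: "Im (Complex x (eps k)) \<noteq> 0" for k using eps_pos[of k] by simp
  have zl: "(\<lambda>k. cnj (Complex x (eps k))) \<longlonglongrightarrow> cnj (complex_of_real x)"
    by (intro tendsto_intros Complex_eps_lim)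
  have "ip (B u) (gamma_lim x c) = ip u (sm (complex_of_real x) (gamma_lim x c))" if u: "u \<in> Dom"
    for u
  proof -
    have "(\<lambda>k. ip (B u) (gamma_seq x c k)) \<longlonglongrightarrow> ip (B u) (gamma_lim x c)"
      by (rule hconv_ip_r[OF conv])
    moreover have "ip (B u) (gamma_seq x c k) = cnj (Complex x (eps k)) * ip u (gamma_seq x c k)"
      for k
      using adj_op_ip[OF gamma_field(1)[OF iz] u] gamma_field(2)[OF iz] by (simp add: ip_sm_r)
    moreover have "(\<lambda>k. cnj (Complex x (eps k)) * ip u (gamma_seq x c k))
        \<longlonglongrightarrow> cnj (complex_of_real x) * ip u (gamma_lim x c)"
      by (intro tendsto_mult zl hconv_ip_r[OF conv])
    ultimately have "ip (B u) (gamma_lim x c) = cnj (complex_of_real x) * ip u (gamma_lim x c)"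
      using LIMSEQ_unique by fastforce
    then show ?thesis by (simp add: ip_sm_r)
  qed
  then show "gamma_lim x c \<in> Dstar" "Bstar (gamma_lim x c) = sm (complex_of_real x) (gamma_lim x c)"
    using adj_opI by blast+
qed

text \<open>\<open>\<Gamma>\<^sub>1\<close> is not continuous, but on differences \<open>\<gamma>(z\<^sub>k) c - \<gamma>(z\<^sub>0) c\<close> it vanishes, and
  \<open>A\<^sub>1\<close> is closed.\<close>
lemma G1_gamma_lim:
  assumes T: "T_finite Om x"
  shows "G1 (gamma_lim x c) = c"
proof -
  have conv: "hconv ip (\<lambda>k. gamma_seq x c k) (gamma_lim x c)" by (rule gamma_seq_converges[OF T])
  have iz: "Im (Complex x (eps k)) \<noteq> 0" for k using eps_pos[of k] by simp
  define X where "X k = gamma_seq x c k - gamma_seq x c 0" for k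
  have XD1: "\<forall>k. X k \<in> DA1" unfolding X_def using gamma_field[OF iz] Dstar_diff G_diff by auto
  have Xc: "hconv ip X (gamma_lim x c - gamma_seq x c 0)"
    unfolding X_def by (rule hconv_diff[OF conv hconv_const])
  have "Bstar (X k) = sm (Complex x (eps k)) (gamma_seq x c k)
      - sm (Complex x (eps 0)) (gamma_seq x c 0)"
    for k
    unfolding X_def using Bstar_diff gamma_field[OF iz] by simp
  moreover have "hconv ip (\<lambda>k. sm (Complex x (eps k)) (gamma_seq x c k)
      - sm (Complex x (eps 0)) (gamma_seq x c 0))
     (sm (complex_of_real x) (gamma_lim x c) - sm (Complex x (eps 0)) (gamma_seq x c 0))"
    by (rule hconv_diff[OF hconv_sm[OF Complex_eps_lim conv] hconv_const])
  ultimately have "hconv ip (\<lambda>k. Bstar (X k))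
      (sm (complex_of_real x) (gamma_lim x c) - sm (Complex x (eps 0)) (gamma_seq x c 0))"
    by simp
  then have "gamma_lim x c - gamma_seq x c 0 \<in> DA1"
    using A1_closed XD1 Xc unfolding closed_op_def by blast
  then show ?thesis
    using G_diff(1)[OF gamma_lim_eigenvector(1)[OF T] gamma_field(1)[OF iz]] gamma_field(3)[OF iz]
      by simp
qed

lemmas gamma_lim = gamma_lim_eigenvector G1_gamma_lim

lemma gamma_lim_lin:
  assumes T: "T_finite Om x"
  shows "gamma_lim x (a *s c + b *s d) = sm a (gamma_lim x c) + sm b (gamma_lim x d)"
proof -
  have iz: "Im (Complex x (eps k)) \<noteq> 0" for k using eps_pos[of k] by simp
  have "hconv ip (\<lambda>k. sm a (gamma_seq x c k) + sm b (gamma_seq x d k))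
      (sm a (gamma_lim x c) + sm b (gamma_lim x d))"
    by (intro hconv_add hconv_sm_const gamma_seq_converges[OF T])
  moreover have "(\<lambda>k. sm a (gamma_seq x c k) + sm b (gamma_seq x d k))
      = (\<lambda>k. gamma_seq x (a *s c + b *s d) k)"
    using gamma_field_lin[OF iz] by auto
  ultimately have "hconv ip (\<lambda>k. gamma_seq x (a *s c + b *s d) k)
      (sm a (gamma_lim x c) + sm b (gamma_lim x d))" by simp
  then show ?thesis using gamma_seq_converges[OF T, of "a *s c + b *s d"] hconv_unique by blast
qed

lemma gamma_lim_expand:
  assumes "T_finite Om x"
  shows "gamma_lim x c = (\<Sum>j\<in>UNIV. sm (c$j) (gamma_lim x (axis j 1)))"
proof -
  have "gamma_lim x (\<Sum>j\<in>UNIV. c$j *s axis j 1) = (\<Sum>j\<in>UNIV. sm (c$j) (gamma_lim x (axis j 1)))"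
    by (rule linear_vec_expand[OF gamma_lim_lin[OF assms]])
  then show ?thesis by (simp add: basis_expansion)
qed

definition boundary_matrix :: "real \<Rightarrow> complex^'n^'n"
  where "boundary_matrix x = (\<chi> i j. G2 (gamma_lim x (axis j 1)) $ i)"

lemma boundary_matrix_mv:
  assumes T: "T_finite Om x"
  shows "boundary_matrix x *v c = G2 (gamma_lim x c)"
proof -
  have "G2 (gamma_lim x c) = (\<Sum>j\<in>UNIV. (c$j) *s G2 (gamma_lim x (axis j 1)))"
    unfolding gamma_lim_expand[OF T, of c]
    by (rule linear_on_sum[OF Dstar_subspace]) (simp_all add: G_lin gamma_lim[OF T])
  then show ?thesis
    by (simp add: boundary_matrix_def vec_eq_iff matrix_vector_mult_def sum_component mult.commute)
qed

lemma boundary_matrix_hermitian: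
  assumes T: "T_finite Om x"
  shows "hermitian_mat (boundary_matrix x)"
proof -
  have c: "cip (boundary_matrix x *v a) b = cip a (boundary_matrix x *v b)" for a b
  proof -
    note fa = gamma_lim[OF T, of a] and fb = gamma_lim[OF T, of b]
    have "ip (Bstar (gamma_lim x a)) (gamma_lim x b) = ip (gamma_lim x a) (Bstar (gamma_lim x b))"
      unfolding fa(2) fb(2) by (simp add: ip_sm_l ip_sm_r)
    then show ?thesis using green[OF fa(1) fb(1)] fa fb boundary_matrix_mv[OF T] by simp
  qed
  show ?thesis unfolding hermitian_mat_def
  proof (intro allI)
    fix i j
    have "cip (boundary_matrix x *v axis j 1) (axis i 1)
        = cip (axis j 1) (boundary_matrix x *v axis i 1)" by (rule c)
    then show "boundary_matrix x $ i $ j = cnj (boundary_matrix x $ j $ i)"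
      by (simp add: cip_axis_r cip_axis_l mv_axis)
  qed
qed

lemma gamma_lim_eigsp_ext:
  assumes "T_finite Om x"
  shows "gamma_lim x c
    \<in> eigsp sm (ext_dom ip Dom B G1 G2 (boundary_matrix x)) Bstar (complex_of_real x)"
  unfolding eigsp_ext_iff using gamma_lim[OF assms] boundary_matrix_mv[OF assms] by simp

lemma eigsp_boundary_matrix:
  assumes T: "T_finite Om x"
  shows "eigsp sm (ext_dom ip Dom B G1 G2 (boundary_matrix x)) Bstar (complex_of_real x)
      = range (gamma_lim x)"
proof (intro equalityI subsetI)
  fix f assume "f \<in> eigsp sm (ext_dom ip Dom B G1 G2 (boundary_matrix x)) Bstar (complex_of_real x)"
  then have f: "f \<in> Dstar" "G2 f = boundary_matrix x *v G1 f" "Bstar f = sm (complex_of_real x) f"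
    using eigsp_ext_iff by auto
  note g = gamma_lim[OF T, of "G1 f"]
  have "f - gamma_lim x (G1 f) = 0"
  proof (rule real_eigenvector_boundary_zero)
    show "f - gamma_lim x (G1 f) \<in> Dstar" using f g Dstar_diff by blast
    show "Bstar (f - gamma_lim x (G1 f)) = sm (complex_of_real x) (f - gamma_lim x (G1 f))"
      using Bstar_diff[OF f(1) g(1)] f g by (simp add: sm_diff_r)
    show "G1 (f - gamma_lim x (G1 f)) = 0" using G_diff(1)[OF f(1) g(1)] g by simp
    show "G2 (f - gamma_lim x (G1 f)) = 0"
      using G_diff(2)[OF f(1) g(1)] f boundary_matrix_mv[OF T] by simp
  qed
  then show "f \<in> range (gamma_lim x)" by (metis eq_iff_diff_eq_0 rangeI)
qed (use gamma_lim_eigsp_ext[OF T] in blast)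

lemma T_finite_imp_sigma_p_max:
  assumes T: "T_finite Om x"
  shows "complex_of_real x
      \<in> sigma_p_max sm (ext_dom ip Dom B G1 G2 (boundary_matrix x)) Bstar CARD('n)"
proof -
  have inj: "c = 0" if "gamma_lim x c = 0" for c
    using gamma_lim(3)[OF T, of c] that G_zero by simp
  then have "hdim sm (range (gamma_lim x)) CARD('n)"
    by (intro hdim_range_if_inj gamma_lim_lin[OF T])
  moreover obtain j :: 'n where True by simp
  then have "gamma_lim x (axis j 1) \<noteq> 0" using inj[of "axis j 1"] by (auto simp: axis_eq_0_iff)
  then have "range (gamma_lim x) \<noteq> {0}" by (metis rangeI singletonD)
  ultimately show ?thesis unfolding sigma_p_max_def using eigsp_boundary_matrix[OF T] by simp
qed

end

theorem theorem6p2: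
  fixes sm :: "complex \<Rightarrow> 'h::ab_group_add \<Rightarrow> 'h"
    and ip :: "'h \<Rightarrow> 'h \<Rightarrow> complex"
    and Dom :: "'h set" and B :: "'h \<Rightarrow> 'h"
    and G1 G2 :: "'h \<Rightarrow> complex^'n::finite"
    and M :: "complex \<Rightarrow> complex^'n^'n"
    and Om :: "real set \<Rightarrow> complex^'n^'n"
  assumes "hilbert_space sm ip"
    and "lin_op sm Dom B" and "dense_in ip UNIV Dom" and "closed_op ip Dom B"
    and "symmetric_op ip Dom B" and "completely_nonselfadjoint sm ip Dom B"
    and "hdim sm (eigsp sm (adj_dom ip Dom B) (adj_op ip Dom B) \<i>) CARD('n)"
    and "hdim sm (eigsp sm (adj_dom ip Dom B) (adj_op ip Dom B) (- \<i>)) CARD('n)"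
    and "boundary_triplet sm ip Dom B G1 G2"
    and "weyl_function sm ip Dom B G1 G2 M"
    and "assoc_measure M Om"
  shows "complex_of_real ` {x. T_finite Om x} =
           (\<Union>D\<in>{D. hermitian_mat D}. sigma_p_max sm (ext_dom ip Dom B G1 G2 D) (adj_op ip Dom B) CARD('n))"
proof -
  interpret weyl_setting sm ip Dom B G1 G2 M Om
    using assms by unfold_locales auto
  show ?thesis
    using T_finite_imp_sigma_p_max boundary_matrix_hermitian sigma_p_max_imp_T_finite by blast
qed

end
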